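(* Let $\Lambda=(\Delta,R)$ be a gentle bound quiver over an algebraically closed field $k$. If $\|\phi_\Lambda\|=1$, then the global dimension of $\Lambda$ (i.e. of the algebra $k\Delta/\langle R\rangle$, equivalently of $\mathrm{rep}\,\Lambda$) is finite.
   Context: Conventions: a path $\alpha_1\cdots\alpha_l$ ($l\ge1$) in a quiver satisfies $s\alpha_i=t\alpha_{i+1}$; it starts at $s\alpha_l$, terminates at $t\alpha_1$; $\alpha_1$ is its terminating arrow and $\alpha_l$ its starting arrow; for each vertex $x$ there is a trivial path $\mathbf{1}_x$ of length $0$. A bound quiver $(\Delta,R)$: finite quiver without isolated vertices, $R$ a set of paths of length $\ge2$, such that for some $n$ every path of length $n$ contains a subpath in $R$. It is gentle if connected and: $R$ consists of paths of length 2; each vertex is start of at most two arrows and target of at most two arrows; for each arrow $\alpha$ there is at most one arrow $\alpha'$ with $s\alpha'=t\alpha$, $\alpha'\alpha\notin R$ and at most one with $t\alpha'=s\alpha$, $\alpha\alpha'\notin R$; and at most one arrow $\alpha'$ with $s\alpha'=t\alpha$, $\alpha'\alpha\in R$ and at most one with $t\alpha'=s\alpha$, $\alpha\alpha'\in R$. For gentle $\Lambda$: a path in $\Lambda$ is a path $\alpha_1\cdots\alpha_l$ with all $\alpha_i\alpha_{i+1}\notin R$; an antipath is one with all $\alpha_i\alpha_{i+1}\in R$; "maximal" means not a subpath of a longer one. Permitted threads: maximal paths in $\Lambda$, and $\mathbf{1}_x$ for vertices $x$ with at most one outgoing arrow $\alpha$, at most one incoming arrow $\beta$, and $\alpha\beta\notin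 R$ if both exist. Forbidden threads: maximal antipaths, and $\mathbf{1}_x$ for $x$ with at most one outgoing $\alpha$, at most one incoming $\beta$, and $\alpha\beta\in R$ if both exist. Let $\mathcal{P},\mathcal{F}$ be the sets of permitted, forbidden threads. Define $\Phi_1\colon\mathcal{P}\to\mathcal{F}$: for a maximal path $\sigma$, $\Phi_1(\sigma)$ is the unique forbidden thread $\omega$ with $t\omega=t\sigma$ and either $\ell(\omega)=0$ or the terminating arrows of $\sigma,\omega$ differ; for a permitted $\mathbf{1}_x$, if an arrow $\beta$ with $t\beta=x$ exists, $\Phi_1(\mathbf{1}_x)$ is the forbidden thread with terminating arrow $\beta$, else $\Phi_1(\mathbf{1}_x)=\mathbf{1}_x$. Dually $\Phi_2\colon\mathcal{F}\to\mathcal{P}$: for a maximal antipath $\omega$, $\Phi_2(\omega)$ is the permitted thread $\sigma$ with $s\sigma=s\omega$ and either $\ell(\sigma)=0$ or the starting arrows differ; for a forbidden $\mathbf{1}_x$, if an arrow $\alpha$ with $s\alpha=x$ exists, $\Phi_2(\mathbf{1}_x)$ is the permitted thread with starting arrow $\alpha$, else $\mathbf{1}_x$. Put $\Phi=\Phi_1\Phi_2\colon\mathcal{F}\to\mathcal{F}$. Let $\mathcal{F}'$ be the set of arrows not contained in any maximal antipath; for $\alpha\in\mathcal{F}'$ there is a unique $\alpha'\in\mathcal{F}'$ with $\alpha\alpha'\in R$, and $\Phi'(\alpha):=\alpha'$ is a bijection of $\mathcal{F}'$. For an orbit $\mathcal{O}\in\mathcal{F}/\Phi$ put $n_\mathcal{O}=|\mathcal{O}|$,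 $m_\mathcal{O}=\sum_{\omega\in\mathcal{O}}\ell(\omega)$; for $\mathcal{O}\in\mathcal{F}'/\Phi'$ put $n_\mathcal{O}=0$, $m_\mathcal{O}=|\mathcal{O}|$. The Avella-Alaminos–Geiss function is $\phi_\Lambda(n,m)=|\{\mathcal{O}\in\mathcal{F}/\Phi\cup\mathcal{F}'/\Phi': (n_\mathcal{O},m_\mathcal{O})=(n,m)\}|$, and $\|\phi_\Lambda\|:=\sum_{(n,m)\in\mathbb{N}^2}\phi_\Lambda(n,m)$ (which equals $|\mathcal{F}/\Phi|+|\mathcal{F}'/\Phi'|$). *)

theory Defs
  imports "HOL-Computational_Algebra.Polynomial" "Jordan_Normal_Form.Matrix"
begin

record ('v,'a) bquiver =
  verts :: "'v set"
  arrs :: "'a set"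
  src :: "'a \<Rightarrow> 'v"
  tgt :: "'a \<Rightarrow> 'v"
  rels :: "'a list set"

text \<open>A nontrivial path alpha_1 ... alpha_l is the list [alpha_1, ..., alpha_l] with
  src alpha_i = tgt alpha_(i+1); it starts at src alpha_l and terminates at tgt alpha_1.\<close>

definition is_qpath :: "('v,'a,'b) bquiver_scheme \<Rightarrow> 'a list \<Rightarrow> bool" where
  "is_qpath L xs \<longleftrightarrow> xs \<noteq> [] \<and> set xs \<subseteq> arrs L \<and>
     (\<forall>i. Suc i < length xs \<longrightarrow> src L (xs ! i) = tgt L (xs ! Suc i))"

definition is_subpath :: "'a list \<Rightarrow> 'a list \<Rightarrow> bool" where
  "is_subpath xs ys \<longleftrightarrow> (\<exists>ps ss. ys = ps @ xs @ ss)"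

definition bound_quiver :: "('v,'a,'b) bquiver_scheme \<Rightarrow> bool" where
  "bound_quiver L \<longleftrightarrow> finite (verts L) \<and> finite (arrs L) \<and>
     (\<forall>a\<in>arrs L. src L a \<in> verts L \<and> tgt L a \<in> verts L) \<and>
     (\<forall>x\<in>verts L. \<exists>a\<in>arrs L. src L a = x \<or> tgt L a = x) \<and>
     (\<forall>r\<in>rels L. is_qpath L r \<and> length r \<ge> 2) \<and>
     (\<exists>n>0. \<forall>p. is_qpath L p \<and> length p = n \<longrightarrow> (\<exists>r\<in>rels L. is_subpath r p))"

definition quiver_connected :: "('v,'a,'b) bquiver_scheme \<Rightarrow> bool" where
  "quiver_connected L \<longleftrightarrow>
     (let E = {(src L a, tgt L a) | a. a \<in> arrs L} in
      \<forall>x\<in>verts L. \<forall>y\<in>verts L. (x, y) \<in> (E \<union> E\<inverse>)\<^sup>*)"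

definition gentle :: "('v,'a,'b) bquiver_scheme \<Rightarrow> bool" where
  "gentle L \<longleftrightarrow> bound_quiver L \<and> quiver_connected L \<and>
     (\<forall>r\<in>rels L. length r = 2) \<and>
     (\<forall>x\<in>verts L. card {a\<in>arrs L. src L a = x} \<le> 2 \<and> card {a\<in>arrs L. tgt L a = x} \<le> 2) \<and>
     (\<forall>a\<in>arrs L.
        card {b\<in>arrs L. src L b = tgt L a \<and> [b, a] \<notin> rels L} \<le> 1 \<and>
        card {b\<in>arrs L. tgt L b = src L a \<and> [a, b] \<notin> rels L} \<le> 1 \<and>
        card {b\<in>arrs L. src L b = tgt L a \<and> [b, a] \<in> rels L} \<le> 1 \<and>
        card {b\<in>arrs L. tgt L b = src L a \<and> [a, b] \<in> rels L} \<le> 1)"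

definition Lpath :: "('v,'a,'b) bquiver_scheme \<Rightarrow> 'a list \<Rightarrow> bool" where
  "Lpath L xs \<longleftrightarrow> is_qpath L xs \<and>
     (\<forall>i. Suc i < length xs \<longrightarrow> [xs ! i, xs ! Suc i] \<notin> rels L)"

definition Lantipath :: "('v,'a,'b) bquiver_scheme \<Rightarrow> 'a list \<Rightarrow> bool" where
  "Lantipath L xs \<longleftrightarrow> is_qpath L xs \<and>
     (\<forall>i. Suc i < length xs \<longrightarrow> [xs ! i, xs ! Suc i] \<in> rels L)"

definition max_path :: "('v,'a,'b) bquiver_scheme \<Rightarrow> 'a list \<Rightarrow> bool" where
  "max_path L xs \<longleftrightarrow> Lpath L xs \<and> \<not> (\<exists>ys. Lpath L ys \<and> is_subpath xs ys \<and> ys \<noteq> xs)"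

definition max_antipath :: "('v,'a,'b) bquiver_scheme \<Rightarrow> 'a list \<Rightarrow> bool" where
  "max_antipath L xs \<longleftrightarrow> Lantipath L xs \<and> \<not> (\<exists>ys. Lantipath L ys \<and> is_subpath xs ys \<and> ys \<noteq> xs)"

datatype ('v,'a) thread = Triv 'v | Nontriv "'a list"

fun thr_tgt :: "('v,'a,'b) bquiver_scheme \<Rightarrow> ('v,'a) thread \<Rightarrow> 'v" where
  "thr_tgt L (Triv x) = x"
| "thr_tgt L (Nontriv xs) = tgt L (hd xs)"

fun thr_src :: "('v,'a,'b) bquiver_scheme \<Rightarrow> ('v,'a) thread \<Rightarrow> 'v" where
  "thr_src L (Triv x) = x"
| "thr_src L (Nontriv xs) = src L (last xs)"

definition permitted :: "('v,'a,'b) bquiver_scheme \<Rightarrow> ('v,'a) thread set" where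
  "permitted L = {Nontriv xs | xs. max_path L xs} \<union>
     {Triv x | x. x \<in> verts L \<and> card {a\<in>arrs L. src L a = x} \<le> 1 \<and> card {b\<in>arrs L. tgt L b = x} \<le> 1 \<and>
        (\<forall>a\<in>arrs L. \<forall>b\<in>arrs L. src L a = x \<and> tgt L b = x \<longrightarrow> [a, b] \<notin> rels L)}"

definition forbidden :: "('v,'a,'b) bquiver_scheme \<Rightarrow> ('v,'a) thread set" where
  "forbidden L = {Nontriv xs | xs. max_antipath L xs} \<union>
     {Triv x | x. x \<in> verts L \<and> card {a\<in>arrs L. src L a = x} \<le> 1 \<and> card {b\<in>arrs L. tgt L b = x} \<le> 1 \<and>
        (\<forall>a\<in>arrs L. \<forall>b\<in>arrs L. src L a = x \<and> tgt L b = x \<longrightarrow> [a, b] \<in> rels L)}"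

definition Phi1 :: "('v,'a,'b) bquiver_scheme \<Rightarrow> ('v,'a) thread \<Rightarrow> ('v,'a) thread" where
  "Phi1 L \<sigma> = (case \<sigma> of
      Nontriv xs \<Rightarrow> (THE \<omega>. \<omega> \<in> forbidden L \<and> thr_tgt L \<omega> = tgt L (hd xs) \<and>
                        (case \<omega> of Triv _ \<Rightarrow> True | Nontriv ys \<Rightarrow> hd ys \<noteq> hd xs))
    | Triv x \<Rightarrow> (if \<exists>b\<in>arrs L. tgt L b = x
                 then (THE \<omega>. \<omega> \<in> forbidden L \<and>
                        (\<exists>ys. \<omega> = Nontriv ys \<and> hd ys = (THE b. b \<in> arrs L \<and> tgt L b = x)))
                 else Triv x))"

definition Phi2 :: "('v,'a,'b) bquiver_scheme \<Rightarrow> ('v,'a) thread \<Rightarrow> ('v,'a) thread" where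
  "Phi2 L \<omega> = (case \<omega> of
      Nontriv xs \<Rightarrow> (THE \<sigma>. \<sigma> \<in> permitted L \<and> thr_src L \<sigma> = src L (last xs) \<and>
                        (case \<sigma> of Triv _ \<Rightarrow> True | Nontriv ys \<Rightarrow> last ys \<noteq> last xs))
    | Triv x \<Rightarrow> (if \<exists>a\<in>arrs L. src L a = x
                 then (THE \<sigma>. \<sigma> \<in> permitted L \<and>
                        (\<exists>ys. \<sigma> = Nontriv ys \<and> last ys = (THE a. a \<in> arrs L \<and> src L a = x)))
                 else Triv x))"

definition Phi :: "('v,'a,'b) bquiver_scheme \<Rightarrow> ('v,'a) thread \<Rightarrow> ('v,'a) thread" where
  "Phi L = Phi1 L \<circ> Phi2 L"

definition Fprime :: "('v,'a,'b) bquiver_scheme \<Rightarrow> 'a set" where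
  "Fprime L = {a \<in> arrs L. \<not> (\<exists>xs. max_antipath L xs \<and> a \<in> set xs)}"

definition Phi' :: "('v,'a,'b) bquiver_scheme \<Rightarrow> 'a \<Rightarrow> 'a" where
  "Phi' L a = (THE a'. a' \<in> Fprime L \<and> [a, a'] \<in> rels L)"

definition orbits :: "('c \<Rightarrow> 'c) \<Rightarrow> 'c set \<Rightarrow> 'c set set" where
  "orbits f A = (\<lambda>x. {(f ^^ n) x | n. True}) ` A"

text \<open>The norm of the Avella-Alaminos--Geiss function: number of orbits of Phi on
  forbidden threads plus number of orbits of Phi' on F'.\<close>
definition AG_norm :: "('v,'a,'b) bquiver_scheme \<Rightarrow> nat" where
  "AG_norm L = card (orbits (Phi L) (forbidden L)) + card (orbits (Phi' L) (Fprime L))"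

text \<open>A representation: dimension vector d and a matrix for each arrow
  (vector space at vertex x is 'k^(d x)).\<close>
type_synonym ('v,'a,'k) qrep = "('v \<Rightarrow> nat) \<times> ('a \<Rightarrow> 'k mat)"

fun comp_path :: "('a \<Rightarrow> 'k::semiring_1 mat) \<Rightarrow> 'a list \<Rightarrow> 'k mat" where
  "comp_path m [] = 1\<^sub>m 0"
| "comp_path m [a] = m a"
| "comp_path m (a # b # as) = m a * comp_path m (b # as)"

definition is_rep :: "('v,'a,'b) bquiver_scheme \<Rightarrow> ('v,'a,'k::field) qrep \<Rightarrow> bool" where
  "is_rep L M \<longleftrightarrow>
     (\<forall>a\<in>arrs L. snd M a \<in> carrier_mat (fst M (tgt L a)) (fst M (src L a))) \<and>
     (\<forall>r\<in>rels L. comp_path (snd M) r = 0\<^sub>m (fst M (tgt L (hd r))) (fst M (src L (last r))))"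

definition is_hom :: "('v,'a,'b) bquiver_scheme \<Rightarrow> ('v,'a,'k::field) qrep \<Rightarrow> ('v,'a,'k) qrep
    \<Rightarrow> ('v \<Rightarrow> 'k mat) \<Rightarrow> bool" where
  "is_hom L M N f \<longleftrightarrow>
     (\<forall>x\<in>verts L. f x \<in> carrier_mat (fst N x) (fst M x)) \<and>
     (\<forall>a\<in>arrs L. f (tgt L a) * snd M a = snd N a * f (src L a))"

definition surj_hom :: "('v,'a,'b) bquiver_scheme \<Rightarrow> ('v,'a,'k::field) qrep \<Rightarrow> ('v,'a,'k) qrep
    \<Rightarrow> ('v \<Rightarrow> 'k mat) \<Rightarrow> bool" where
  "surj_hom L M N f \<longleftrightarrow> is_hom L M N f \<and>
     (\<forall>x\<in>verts L. \<forall>w\<in>carrier_vec (fst N x). \<exists>v\<in>carrier_vec (fst M x). f x *\<^sub>v v = w)"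

definition inj_hom :: "('v,'a,'b) bquiver_scheme \<Rightarrow> ('v,'a,'k::field) qrep \<Rightarrow> ('v,'a,'k) qrep
    \<Rightarrow> ('v \<Rightarrow> 'k mat) \<Rightarrow> bool" where
  "inj_hom L M N f \<longleftrightarrow> is_hom L M N f \<and>
     (\<forall>x\<in>verts L. \<forall>v\<in>carrier_vec (fst M x). f x *\<^sub>v v = 0\<^sub>v (fst N x) \<longrightarrow> v = 0\<^sub>v (fst M x))"

definition exact_at :: "('v,'a,'b) bquiver_scheme \<Rightarrow> ('v,'a,'k::field) qrep \<Rightarrow> ('v,'a,'k) qrep
    \<Rightarrow> ('v,'a,'k) qrep \<Rightarrow> ('v \<Rightarrow> 'k mat) \<Rightarrow> ('v \<Rightarrow> 'k mat) \<Rightarrow> bool" where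
  "exact_at L A B C f g \<longleftrightarrow>
     (\<forall>x\<in>verts L. \<forall>v\<in>carrier_vec (fst B x).
        g x *\<^sub>v v = 0\<^sub>v (fst C x) \<longleftrightarrow> (\<exists>u\<in>carrier_vec (fst A x). f x *\<^sub>v u = v))"

definition projective_rep :: "('v,'a,'b) bquiver_scheme \<Rightarrow> ('v,'a,'k::field) qrep \<Rightarrow> bool" where
  "projective_rep L P \<longleftrightarrow> is_rep L P \<and>
     (\<forall>X Y g f. is_rep L X \<and> is_rep L Y \<and> surj_hom L X Y g \<and> is_hom L P Y f \<longrightarrow>
        (\<exists>h. is_hom L P X h \<and> (\<forall>x\<in>verts L. g x * h x = f x)))"

definition pd_le :: "('v,'a,'b) bquiver_scheme \<Rightarrow> ('v,'a,'k::field) qrep \<Rightarrow> nat \<Rightarrow> bool" where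
  "pd_le L M n \<longleftrightarrow> (\<exists>(P :: nat \<Rightarrow> ('v,'a,'k) qrep) dd \<epsilon>.
     (\<forall>i\<le>n. projective_rep L (P i)) \<and>
     surj_hom L (P 0) M \<epsilon> \<and>
     (\<forall>i. 1 \<le> i \<and> i \<le> n \<longrightarrow> is_hom L (P i) (P (i - 1)) (dd i)) \<and>
     (if n = 0 then inj_hom L (P 0) M \<epsilon>
      else inj_hom L (P n) (P (n - 1)) (dd n) \<and>
           exact_at L (P 1) (P 0) M (dd 1) \<epsilon> \<and>
           (\<forall>i. 1 \<le> i \<and> i < n \<longrightarrow> exact_at L (P (i + 1)) (P i) (P (i - 1)) (dd (i + 1)) (dd i))))"

definition finite_gldim :: "('v,'a,'b) bquiver_scheme \<Rightarrow> 'k::field itself \<Rightarrow> bool" where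
  "finite_gldim L K \<longleftrightarrow> (\<exists>n. \<forall>M :: ('v,'a,'k) qrep. is_rep L M \<longrightarrow> pd_le L M n)"

definition alg_closed :: "'k::field itself \<Rightarrow> bool" where
  "alg_closed K \<longleftrightarrow> (\<forall>p :: 'k poly. degree p \<ge> 1 \<longrightarrow> (\<exists>x. poly p x = 0))"

end

theory Submission
  imports Defs
begin

text \<open>If the Avella-Alaminos--Geiss function has norm 1, then every arrow lies on a maximal antipath:
  otherwise the arrows off maximal antipaths contribute an orbit of \<Phi>', and the forbidden threads,
  which exist as soon as there is an arrow, contribute an orbit of \<Phi>. In a gentle quiver an antipath
  is determined by its first arrow, so every antipath is then a segment of a maximal one, and
  maximal antipaths do not repeat arrows; hence antipaths are shorter than the number of arrows plus 1.

  A gentle algebra is a quadratic monomial algebra, so every representation M has a projective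
  resolution whose i-th term is the sum of P(t w) \<otimes> M(s w) over the antipaths w of length i. Its
  exactness is checked with an explicit contracting homotopy of linear maps. As there are no long
  antipaths, the resolution is finite, with length bounded independently of M.\<close>

section \<open>Antipaths in gentle quivers\<close>

lemma gentle_finite_arrs: "gentle L \<Longrightarrow> finite (arrs L)"
  by (simp add: gentle_def bound_quiver_def)

lemma gentle_rel_shape:
  assumes "gentle L" "r \<in> rels L"
  shows "\<exists>a b. r = [a,b] \<and> a \<in> arrs L \<and> b \<in> arrs L \<and> src L a = tgt L b"
proof -
  have "is_qpath L r" "length r = 2" using assms by (auto simp: gentle_def bound_quiver_def)
  then obtain a b where "r = [a,b]" by (auto simp: numeral_2_eq_2 length_Suc_conv)
  then show ?thesis using \<open>is_qpath L r\<close> by (auto simp: is_qpath_def)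
qed

lemma gentle_rel_arrs:
  assumes "gentle L" "[a,b] \<in> rels L"
  shows "a \<in> arrs L" "b \<in> arrs L" "src L a = tgt L b"
  using gentle_rel_shape[OF assms] by auto

lemma card_le_one_eq:
  assumes "card S \<le> 1" "finite S" "x \<in> S" "y \<in> S"
  shows "x = y"
  using assms by (metis card_le_Suc0_iff_eq One_nat_def)

lemma gentle_rel_right_unique:
  assumes g: "gentle L" and r1: "[a,b] \<in> rels L" and r2: "[a,c] \<in> rels L"
  shows "b = c"
proof -
  let ?S = "{b\<in>arrs L. tgt L b = src L a \<and> [a, b] \<in> rels L}"
  have a: "a \<in> arrs L" using gentle_rel_arrs[OF g r1] by simp
  have "card ?S \<le> 1" using g a unfolding gentle_def by blast
  moreover have "finite ?S" using gentle_finite_arrs[OF g] by simp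
  moreover have "b \<in> ?S" using gentle_rel_arrs(2,3)[OF g r1] r1 by simp
  moreover have "c \<in> ?S" using gentle_rel_arrs(2,3)[OF g r2] r2 by simp
  ultimately show ?thesis by (rule card_le_one_eq)
qed

lemma gentle_rel_left_unique:
  assumes g: "gentle L" and r1: "[b,a] \<in> rels L" and r2: "[c,a] \<in> rels L"
  shows "b = c"
proof -
  let ?S = "{b\<in>arrs L. src L b = tgt L a \<and> [b, a] \<in> rels L}"
  have a: "a \<in> arrs L" using gentle_rel_arrs[OF g r1] by simp
  have "card ?S \<le> 1" using g a unfolding gentle_def by blast
  moreover have "finite ?S" using gentle_finite_arrs[OF g] by simp
  moreover have "b \<in> ?S" using gentle_rel_arrs(1,3)[OF g r1] r1 by simp
  moreover have "c \<in> ?S" using gentle_rel_arrs(1,3)[OF g r2] r2 by simp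
  ultimately show ?thesis by (rule card_le_one_eq)
qed

lemma Lantipath_rel:
  "Lantipath L xs \<Longrightarrow> Suc i < length xs \<Longrightarrow> [xs!i, xs!Suc i] \<in> rels L"
  by (simp add: Lantipath_def)

lemma Lantipath_repeat_shift:
  assumes g: "gentle L" and ap: "Lantipath L xs" and ij: "i < j" and eq: "xs!i = xs!j"
  shows "j + t < length xs \<Longrightarrow> xs!(i+t) = xs!(j+t)"
proof (induction t)
  case 0 then show ?case using eq by simp
next
  case (Suc t)
  then have IH: "xs!(i+t) = xs!(j+t)" by simp
  have "[xs!(i+t), xs!Suc (i+t)] \<in> rels L" using Lantipath_rel[OF ap] Suc.prems ij by simp
  moreover have "[xs!(j+t), xs!Suc (j+t)] \<in> rels L" using Lantipath_rel[OF ap] Suc.prems by simp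
  ultimately show ?case using gentle_rel_right_unique[OF g] IH by simp
qed

lemma Lantipath_Cons:
  "Lantipath L (\<alpha> # rest) \<longleftrightarrow> \<alpha> \<in> arrs L \<and>
     (rest = [] \<or> (Lantipath L rest \<and> src L \<alpha> = tgt L (hd rest) \<and> [\<alpha>, hd rest] \<in> rels L))"
proof (cases rest)
  case Nil then show ?thesis by (simp add: Lantipath_def is_qpath_def)
next
  case (Cons \<beta> r)
  show ?thesis
  proof
    assume A: "Lantipath L (\<alpha> # rest)"
    have "Lantipath L rest"
      unfolding Lantipath_def is_qpath_def
    proof (intro conjI allI impI)
      show "rest \<noteq> []" using Cons by simp
      show "set rest \<subseteq> arrs L" using A by (auto simp: Lantipath_def is_qpath_def)
      fix i assume "Suc i < length rest"
      then show "src L (rest ! i) = tgt L (rest ! Suc i)" "[rest ! i, rest ! Suc i] \<in> rels L"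
        using A unfolding Lantipath_def is_qpath_def by (metis Suc_less_eq length_Cons nth_Cons_Suc)+
    qed
    moreover have "src L \<alpha> = tgt L (hd rest)" "[\<alpha>, hd rest] \<in> rels L" "\<alpha> \<in> arrs L"
      using A Cons unfolding Lantipath_def is_qpath_def by force+
    ultimately show "\<alpha> \<in> arrs L \<and> (rest = [] \<or> (Lantipath L rest \<and> src L \<alpha> = tgt L (hd rest) \<and> [\<alpha>, hd rest] \<in> rels L))"
      by simp
  next
    assume B: "\<alpha> \<in> arrs L \<and> (rest = [] \<or> (Lantipath L rest \<and> src L \<alpha> = tgt L (hd rest) \<and> [\<alpha>, hd rest] \<in> rels L))"
    then have B': "Lantipath L rest" "src L \<alpha> = tgt L (hd rest)" "[\<alpha>, hd rest] \<in> rels L" "\<alpha> \<in> arrs L"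
      using Cons by auto
    show "Lantipath L (\<alpha> # rest)"
      unfolding Lantipath_def is_qpath_def
    proof (intro conjI allI impI)
      show "\<alpha> # rest \<noteq> []" by simp
      show "set (\<alpha> # rest) \<subseteq> arrs L" using B' by (auto simp: Lantipath_def is_qpath_def)
      fix i assume i: "Suc i < length (\<alpha> # rest)"
      show "src L ((\<alpha> # rest) ! i) = tgt L ((\<alpha> # rest) ! Suc i)"
        using B' i Cons by (cases i) (auto simp: Lantipath_def is_qpath_def)
      show "[(\<alpha> # rest) ! i, (\<alpha> # rest) ! Suc i] \<in> rels L"
        using B' i Cons by (cases i) (auto simp: Lantipath_def)
    qed
  qed
qed

lemma Lantipath_snoc:
  "Lantipath L (ws @ [\<beta>]) \<longleftrightarrow> \<beta> \<in> arrs L \<and>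
     (ws = [] \<or> (Lantipath L ws \<and> src L (last ws) = tgt L \<beta> \<and> [last ws, \<beta>] \<in> rels L))"
proof (induction ws)
  case Nil then show ?case by (simp add: Lantipath_Cons)
next
  case (Cons \<alpha> ws)
  show ?case
  proof (cases "ws = []")
    case True then show ?thesis by (auto simp: Lantipath_Cons)
  next
    case False
    then show ?thesis using Cons by (auto simp: Lantipath_Cons hd_append)
  qed
qed

lemma Lantipath_last_two_rel:
  assumes ap: "Lantipath L ws" and len: "length ws \<ge> 2"
  shows "[last (butlast ws), last ws] \<in> rels L"
proof -
  have "ws \<noteq> []" "butlast ws \<noteq> []" using len by (auto simp: length_butlast dest!: arg_cong[of _ _ length])
  then show ?thesis using ap Lantipath_snoc[of L "butlast ws" "last ws"] by simp
qed

lemma Lantipath_snoc_rel: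
  assumes g: "gentle L" and ap: "Lantipath L xs" and r: "[last xs, b] \<in> rels L"
  shows "Lantipath L (xs @ [b])"
  using ap r gentle_rel_arrs[OF g r] by (auto simp: Lantipath_snoc)

lemma not_distinct_conv_nth:
  assumes "\<not> distinct xs"
  shows "\<exists>i j. i < j \<and> j < length xs \<and> xs!i = xs!j"
  using assms by (metis distinct_conv_nth linorder_neqE_nat)

text \<open>In a gentle quiver an antipath is determined by its first arrow, so once an arrow repeats,
  the antipath runs around a cycle and can be continued forever.\<close>

lemma Lantipath_repeat_extends:
  assumes g: "gentle L" and ap: "Lantipath L xs" and nd: "\<not> distinct xs"
  shows "\<exists>b. [last xs, b] \<in> rels L"
proof -
  obtain i j where ij: "i < j" "j < length xs" "xs!i = xs!j" using not_distinct_conv_nth[OF nd] by blast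
  let ?n = "length xs"
  have sh: "xs!(i + (?n - 1 - j)) = xs!(j + (?n - 1 - j))"
    using Lantipath_repeat_shift[OF g ap ij(1) ij(3), of "?n - 1 - j"] ij by simp
  have e1: "j + (?n - 1 - j) = ?n - 1" using ij by simp
  have "xs \<noteq> []" using ij by auto
  then have lst: "last xs = xs!(?n - 1)" by (simp add: last_conv_nth)
  have "Suc (i + (?n - 1 - j)) < ?n" using ij by simp
  then have "[xs!(i + (?n - 1 - j)), xs!Suc (i + (?n - 1 - j))] \<in> rels L"
    using Lantipath_rel[OF ap] by blast
  then show ?thesis using sh e1 lst by auto
qed

lemma Lantipath_arrs: "Lantipath L xs \<Longrightarrow> set xs \<subseteq> arrs L"
  by (simp add: Lantipath_def is_qpath_def)

lemma Lantipath_distinct_length: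
  assumes g: "gentle L" and ap: "Lantipath L xs" and "distinct xs"
  shows "length xs \<le> card (arrs L)"
proof -
  have "length xs = card (set xs)" using \<open>distinct xs\<close> by (simp add: distinct_card)
  also have "\<dots> \<le> card (arrs L)" using Lantipath_arrs[OF ap] gentle_finite_arrs[OF g] by (rule card_mono[rotated])
  finally show ?thesis .
qed

lemma is_subpath_snoc: "is_subpath xs (xs @ [b])"
  unfolding is_subpath_def by (rule exI[of _ "[]"]) auto

lemma max_antipath_not_snoc: "max_antipath L xs \<Longrightarrow> \<not> Lantipath L (xs @ [b])"
  using is_subpath_snoc by (fastforce simp: max_antipath_def)

lemma max_antipath_distinct:
  assumes g: "gentle L" and m: "max_antipath L xs"
  shows "distinct xs"
proof (rule ccontr)
  assume "\<not> distinct xs"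
  moreover have ap: "Lantipath L xs" using m by (simp add: max_antipath_def)
  ultimately obtain b where "[last xs, b] \<in> rels L" using Lantipath_repeat_extends[OF g] by blast
  then show False using Lantipath_snoc_rel[OF g ap] max_antipath_not_snoc[OF m] by blast
qed

lemma max_antipath_length:
  assumes g: "gentle L" and m: "max_antipath L xs"
  shows "length xs \<le> card (arrs L)"
  using Lantipath_distinct_length[OF g _ max_antipath_distinct[OF g m]] m by (simp add: max_antipath_def)

text \<open>An antipath is a segment of the maximal antipath through its first arrow.\<close>

lemma Lantipath_length_le_if_Fprime_empty:
  assumes g: "gentle L" and F: "Fprime L = {}" and ap: "Lantipath L xs"
  shows "length xs \<le> card (arrs L)"
proof -
  have ne: "xs \<noteq> []" using ap by (simp add: Lantipath_def is_qpath_def)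
  have a: "xs!0 \<in> arrs L" using Lantipath_arrs[OF ap] ne by auto
  then obtain ys where ys: "max_antipath L ys" "xs!0 \<in> set ys" using F unfolding Fprime_def by blast
  then obtain k where k: "k < length ys" "ys!k = xs!0" by (metis in_set_conv_nth)
  have apy: "Lantipath L ys" using ys by (simp add: max_antipath_def)
  have segment: "t < length xs \<Longrightarrow> k + t < length ys \<and> ys!(k+t) = xs!t" for t
  proof (induction t)
    case 0 then show ?case using k by simp
  next
    case (Suc t)
    then have IH: "k + t < length ys" "ys!(k+t) = xs!t" by auto
    have rx: "[xs!t, xs!Suc t] \<in> rels L" using Lantipath_rel[OF ap] Suc.prems by simp
    show ?case
    proof (cases "Suc (k+t) < length ys")
      case True
      then have "[ys!(k+t), ys!Suc (k+t)] \<in> rels L" using Lantipath_rel[OF apy] by simp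
      then have "ys!Suc (k+t) = xs!Suc t" using gentle_rel_right_unique[OF g] rx IH by metis
      then show ?thesis using True by simp
    next
      case False
      then have "k + t = length ys - 1" using IH by simp
      then have "last ys = xs!t" using IH by (metis last_conv_nth list.size(3) not_less_zero)
      then have False using Lantipath_snoc_rel[OF g apy, of "xs!Suc t"] rx max_antipath_not_snoc[OF ys(1)] by simp
      then show ?thesis ..
    qed
  qed
  have "k + (length xs - 1) < length ys" using segment[of "length xs - 1"] ne by simp
  then have "length xs \<le> length ys" by simp
  also have "\<dots> \<le> card (arrs L)" by (rule max_antipath_length[OF g ys(1)])
  finally show ?thesis .
qed

lemma finite_forbidden:
  assumes g: "gentle L"
  shows "finite (forbidden L)"
proof -
  let ?short = "{xs. set xs \<subseteq> arrs L \<and> length xs \<le> card (arrs L)}"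
  have "xs \<in> ?short" if "max_antipath L xs" for xs
    using max_antipath_length[OF g that] that by (auto simp: max_antipath_def dest: Lantipath_arrs)
  then have "forbidden L \<subseteq> Nontriv ` ?short \<union> Triv ` verts L"
    unfolding forbidden_def by blast
  moreover have "finite (Nontriv ` ?short \<union> Triv ` verts L)"
    using finite_lists_length_le[OF gentle_finite_arrs[OF g]] g by (simp add: gentle_def bound_quiver_def)
  ultimately show ?thesis by (rule finite_subset)
qed

lemma nth_append_last_hd:
  assumes "ss \<noteq> []" "xs \<noteq> []"
  shows "(ps @ xs @ ss) ! (length ps + length xs - 1) = last xs"
    "(ps @ xs @ ss) ! Suc (length ps + length xs - 1) = hd ss"
proof -
  have l: "length xs > 0" using assms by simp
  have "\<not> length ps + length xs - 1 < length ps" using l by arith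
  then have "(ps @ xs @ ss) ! (length ps + length xs - 1) = (xs @ ss) ! (length xs - 1)"
    using l by (simp add: nth_append)
  also have "\<dots> = last xs" using l assms by (simp add: nth_append last_conv_nth)
  finally show "(ps @ xs @ ss) ! (length ps + length xs - 1) = last xs" .
  show "(ps @ xs @ ss) ! Suc (length ps + length xs - 1) = hd ss"
    using l assms by (simp add: nth_append hd_conv_nth)
qed

lemma max_antipath_if_longest_ending:
  assumes ap: "Lantipath L xs" and nb: "\<And>b. [last xs, b] \<notin> rels L"
    and longest: "\<And>ys. Lantipath L ys \<Longrightarrow> last ys = last xs \<Longrightarrow> length ys \<le> length xs"
  shows "max_antipath L xs"
  unfolding max_antipath_def
proof (intro conjI notI ap)
  assume "\<exists>ys. Lantipath L ys \<and> is_subpath xs ys \<and> ys \<noteq> xs"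
  then obtain ys ps ss where ys: "Lantipath L ys" "ys = ps @ xs @ ss" "ys \<noteq> xs"
    by (auto simp: is_subpath_def)
  have xne: "xs \<noteq> []" using ap by (simp add: Lantipath_def is_qpath_def)
  show False
  proof (cases "ss = []")
    case False
    have "Suc (length ps + length xs - 1) < length ys" using ys(2) False xne by (simp add: length_greater_0_conv)
    then have "[ys ! (length ps + length xs - 1), ys ! Suc (length ps + length xs - 1)] \<in> rels L"
      using Lantipath_rel[OF ys(1)] by blast
    then show False using nth_append_last_hd[OF False xne, of ps] ys(2) nb by auto
  next
    case True
    then have "ps \<noteq> []" using ys by auto
    moreover have "last ys = last xs" using ys(2) True xne by simp
    then have "length ys \<le> length xs" using longest ys(1) by blast
    ultimately show False using ys(2) True by simp
  qed
qed

lemma gentle_rel_right_exists: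
  assumes g: "gentle L" and nomax: "\<And>xs. \<not> max_antipath L xs" and a: "a \<in> arrs L"
  shows "\<exists>b. [a,b] \<in> rels L"
proof (rule ccontr)
  assume nb: "\<nexists>b. [a,b] \<in> rels L"
  let ?ending = "\<lambda>xs. Lantipath L xs \<and> last xs = a"
  have short: "\<forall>xs. ?ending xs \<longrightarrow> length xs < Suc (card (arrs L))"
  proof (intro allI impI)
    fix xs assume xs: "?ending xs"
    have "distinct xs" using Lantipath_repeat_extends[OF g] xs nb by blast
    then show "length xs < Suc (card (arrs L))" using Lantipath_distinct_length[OF g] xs by fastforce
  qed
  have "?ending [a]" using a by (simp add: Lantipath_def is_qpath_def)
  then obtain xs where xs: "?ending xs" and longest: "\<forall>ys. ?ending ys \<longrightarrow> length ys \<le> length xs"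
    using ex_has_greatest_nat[OF _ short] by blast
  then have "max_antipath L xs" using nb by (intro max_antipath_if_longest_ending) auto
  then show False using nomax by blast
qed

text \<open>Otherwise src \<alpha> carries a trivial forbidden thread: its only incoming arrow is the relation
  successor of \<alpha>, and its only outgoing arrow is \<alpha>, since every arrow has a relation successor
  when there are no maximal antipaths.\<close>

lemma gentle_path_pred_exists:
  assumes g: "gentle L" and nofb: "forbidden L = {}" and al: "\<alpha> \<in> arrs L"
  shows "\<exists>\<gamma>\<in>arrs L. tgt L \<gamma> = src L \<alpha> \<and> [\<alpha>,\<gamma>] \<notin> rels L"
proof (rule ccontr)
  assume H: "\<not> ?thesis"
  then have H': "\<And>\<gamma>. \<gamma>\<in>arrs L \<Longrightarrow> tgt L \<gamma> = src L \<alpha> \<Longrightarrow> [\<alpha>,\<gamma>] \<in> rels L" by blast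
  have nomax: "\<And>xs. \<not> max_antipath L xs" using nofb unfolding forbidden_def by blast
  let ?y = "src L \<alpha>"
  have fa: "finite (arrs L)" using g by (rule gentle_finite_arrs)
  have y: "?y \<in> verts L" using g al by (simp add: gentle_def bound_quiver_def)
  have cin: "card {b\<in>arrs L. tgt L b = ?y} \<le> 1"
  proof -
    have sub: "{b\<in>arrs L. tgt L b = ?y} \<subseteq> {b\<in>arrs L. tgt L b = src L \<alpha> \<and> [\<alpha>, b] \<in> rels L}" using H' by auto
    have c: "card {b\<in>arrs L. tgt L b = src L \<alpha> \<and> [\<alpha>, b] \<in> rels L} \<le> 1" using g al unfolding gentle_def by blast
    have fin: "finite {b\<in>arrs L. tgt L b = src L \<alpha> \<and> [\<alpha>, b] \<in> rels L}" using fa by simp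
    from card_mono[OF fin sub] c show ?thesis by linarith
  qed
  obtain \<gamma>0 where r0: "[\<alpha>,\<gamma>0] \<in> rels L" using gentle_rel_right_exists[OF g nomax al] by blast
  have cout: "card {a\<in>arrs L. src L a = ?y} \<le> 1"
  proof -
    have "{a\<in>arrs L. src L a = ?y} \<subseteq> {\<alpha>}"
    proof
      fix a' assume a': "a' \<in> {a\<in>arrs L. src L a = ?y}"
      obtain \<gamma>' where r': "[a',\<gamma>'] \<in> rels L" using gentle_rel_right_exists[OF g nomax] a' by blast
      have "\<gamma>' \<in> {b\<in>arrs L. tgt L b = ?y}" "\<gamma>0 \<in> {b\<in>arrs L. tgt L b = ?y}"
        using gentle_rel_arrs[OF g r'] gentle_rel_arrs[OF g r0] a' by auto
      then have "\<gamma>' = \<gamma>0" using card_le_one_eq[OF cin] fa by auto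
      then show "a' \<in> {\<alpha>}" using gentle_rel_left_unique[OF g r' ] r0 by auto
    qed
    then have "card {a\<in>arrs L. src L a = ?y} \<le> card {\<alpha>}" by (intro card_mono) auto
    then show ?thesis by simp
  qed
  have rel: "\<forall>a\<in>arrs L. \<forall>b\<in>arrs L. src L a = ?y \<and> tgt L b = ?y \<longrightarrow> [a, b] \<in> rels L"
  proof (intro ballI impI)
    fix a b assume ab: "a \<in> arrs L" "b \<in> arrs L" "src L a = ?y \<and> tgt L b = ?y"
    have "a \<in> {a\<in>arrs L. src L a = ?y}" "\<alpha> \<in> {a\<in>arrs L. src L a = ?y}" using ab al by auto
    then have "a = \<alpha>" using card_le_one_eq[OF cout] fa by auto
    then show "[a,b] \<in> rels L" using H' ab by auto
  qed
  have "Triv ?y \<in> forbidden L" unfolding forbidden_def using y cin cout rel by blast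
  then show False using nofb by simp
qed

text \<open>Without forbidden threads, repeatedly choosing such predecessors yields arbitrarily long
  paths avoiding the relations, which a bound quiver does not have.\<close>

lemma forbidden_nonempty:
  assumes g: "gentle L" and ne: "arrs L \<noteq> {}"
  shows "forbidden L \<noteq> {}"
proof
  assume nofb: "forbidden L = {}"
  define f where "f \<alpha> = (SOME \<gamma>. \<gamma>\<in>arrs L \<and> tgt L \<gamma> = src L \<alpha> \<and> [\<alpha>,\<gamma>] \<notin> rels L)" for \<alpha>
  have f: "\<And>\<alpha>. \<alpha> \<in> arrs L \<Longrightarrow> f \<alpha> \<in> arrs L \<and> tgt L (f \<alpha>) = src L \<alpha> \<and> [\<alpha>, f \<alpha>] \<notin> rels L"
  proof -
    fix \<alpha> assume "\<alpha> \<in> arrs L"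
    then have "\<exists>\<gamma>. \<gamma>\<in>arrs L \<and> tgt L \<gamma> = src L \<alpha> \<and> [\<alpha>,\<gamma>] \<notin> rels L"
      using gentle_path_pred_exists[OF g nofb] by blast
    then show "f \<alpha> \<in> arrs L \<and> tgt L (f \<alpha>) = src L \<alpha> \<and> [\<alpha>, f \<alpha>] \<notin> rels L"
      unfolding f_def by (rule someI_ex)
  qed
  obtain a0 where a0: "a0 \<in> arrs L" using ne by blast
  have fk: "(f ^^ k) a0 \<in> arrs L" for k by (induction k) (auto simp: a0 f)
  obtain n where n: "n > 0" "\<forall>p. is_qpath L p \<and> length p = n \<longrightarrow> (\<exists>r\<in>rels L. is_subpath r p)"
    using g by (auto simp: gentle_def bound_quiver_def)
  define p where "p = map (\<lambda>k. (f ^^ k) a0) [0..<n]"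
  have pn: "length p = n" by (simp add: p_def)
  have pi: "\<And>i. i < n \<Longrightarrow> p ! i = (f ^^ i) a0" by (simp add: p_def)
  have qp: "is_qpath L p"
    unfolding is_qpath_def using n(1) fk f by (auto simp: p_def)
  then obtain r where r: "r \<in> rels L" "is_subpath r p" using n pn by blast
  obtain u v where uv: "r = [u,v]" using gentle_rel_shape[OF g r(1)] by blast
  obtain ps ss where pss: "p = ps @ [u,v] @ ss" using r(2) uv by (auto simp: is_subpath_def)
  let ?i = "length ps"
  have i: "Suc ?i < n" using pss pn by simp
  have "p ! ?i = u" "p ! Suc ?i = v" using pss by (auto simp: nth_append)
  then have "u = (f ^^ ?i) a0" "v = f ((f ^^ ?i) a0)" using pi i by auto
  then show False using f[OF fk[of ?i]] r(1) uv by simp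
qed

lemma card_orbits_pos: "finite A \<Longrightarrow> A \<noteq> {} \<Longrightarrow> card (orbits f A) > 0"
  unfolding orbits_def by (simp add: card_gt_0_iff)

lemma AG_norm_one_Fprime_empty:
  assumes g: "gentle L" and norm: "AG_norm L = 1"
  shows "Fprime L = {}"
proof (rule ccontr)
  assume ne: "Fprime L \<noteq> {}"
  then have "arrs L \<noteq> {}" by (auto simp: Fprime_def)
  then have "card (orbits (Phi L) (forbidden L)) > 0"
    using forbidden_nonempty[OF g] finite_forbidden[OF g] by (intro card_orbits_pos)
  moreover have "card (orbits (Phi' L) (Fprime L)) > 0"
    using ne gentle_finite_arrs[OF g] by (intro card_orbits_pos) (simp_all add: Fprime_def)
  ultimately show False using norm by (simp add: AG_norm_def)
qed

section \<open>Matrices indexed by lists\<close>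

definition idx_mat :: "'c list \<Rightarrow> 'b list \<Rightarrow> ('c \<Rightarrow> 'b \<Rightarrow> 'k::comm_ring_1) \<Rightarrow> 'k mat" where
  "idx_mat cs bs K = mat (length cs) (length bs) (\<lambda>(r,s). K (cs!r) (bs!s))"

definition idx_vec :: "'b list \<Rightarrow> ('b \<Rightarrow> 'k::comm_ring_1) \<Rightarrow> 'k vec" where
  "idx_vec bs \<phi> = vec (length bs) (\<lambda>r. \<phi> (bs!r))"

lemma idx_mat_carrier[simp]: "idx_mat cs bs K \<in> carrier_mat (length cs) (length bs)"
  by (simp add: idx_mat_def)

lemma idx_mat_dims[simp]: "dim_row (idx_mat cs bs K) = length cs" "dim_col (idx_mat cs bs K) = length bs"
  by (simp_all add: idx_mat_def)

lemma idx_vec_carrier[simp]: "idx_vec bs f \<in> carrier_vec (length bs)" "dim_vec (idx_vec bs f) = length bs"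
  unfolding idx_vec_def by (rule vec_carrier, rule dim_vec)

lemma idx_mat_carrier'[simp]: "length cs = n \<Longrightarrow> length bs = m \<Longrightarrow> idx_mat cs bs K \<in> carrier_mat n m"
  by (simp add: idx_mat_def)

lemma idx_vec_carrier'[simp]: "length bs = n \<Longrightarrow> idx_vec bs f \<in> carrier_vec n"
  using idx_vec_carrier(1) by blast

lemma sum_nth_distinct:
  assumes "distinct bs"
  shows "(\<Sum>t\<in>{0..<length bs}. f (bs!t)) = (\<Sum>b\<in>set bs. f b)"
proof -
  have "bij_betw ((!) bs) {..<length bs} (set bs)"
    by (rule bij_betw_nth[OF assms]) auto
  then have "(\<Sum>t\<in>{..<length bs}. f (bs!t)) = (\<Sum>b\<in>set bs. f b)"
    by (rule sum.reindex_bij_betw)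
  then show ?thesis by (simp add: atLeast0LessThan)
qed

lemma idx_mat_mult:
  assumes "distinct bs"
  shows "idx_mat cs bs L * idx_mat bs as K = idx_mat cs as (\<lambda>c a. \<Sum>b\<in>set bs. L c b * K b a)"
proof (rule eq_matI)
  fix i j assume i: "i < dim_row (idx_mat cs as (\<lambda>c a. \<Sum>b\<in>set bs. L c b * K b a))"
    and j: "j < dim_col (idx_mat cs as (\<lambda>c a. \<Sum>b\<in>set bs. L c b * K b a))"
  then have i': "i < length cs" and j': "j < length as" by auto
  have "(idx_mat cs bs L * idx_mat bs as K) $$ (i,j) = (\<Sum>t\<in>{0..<length bs}. L (cs!i) (bs!t) * K (bs!t) (as!j))"
    using i' j' by (simp add: idx_mat_def scalar_prod_def)
  also have "\<dots> = (\<Sum>b\<in>set bs. L (cs!i) b * K b (as!j))"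
    by (rule sum_nth_distinct[OF assms])
  finally show "(idx_mat cs bs L * idx_mat bs as K) $$ (i,j) = idx_mat cs as (\<lambda>c a. \<Sum>b\<in>set bs. L c b * K b a) $$ (i,j)"
    using i' j' by (simp add: idx_mat_def)
qed auto

lemma idx_mat_mult_idx_vec:
  assumes "distinct bs"
  shows "idx_mat cs bs K *\<^sub>v idx_vec bs \<phi> = idx_vec cs (\<lambda>c. \<Sum>b\<in>set bs. K c b * \<phi> b)"
proof (rule eq_vecI)
  fix i assume "i < dim_vec (idx_vec cs (\<lambda>c. \<Sum>b\<in>set bs. K c b * \<phi> b))"
  then have i: "i < length cs" by simp
  have "(idx_mat cs bs K *\<^sub>v idx_vec bs \<phi>) $ i = (\<Sum>t\<in>{0..<length bs}. K (cs!i) (bs!t) * \<phi> (bs!t))"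
    using i by (simp add: idx_mat_def idx_vec_def scalar_prod_def)
  also have "\<dots> = (\<Sum>b\<in>set bs. K (cs!i) b * \<phi> b)" by (rule sum_nth_distinct[OF assms])
  finally show "(idx_mat cs bs K *\<^sub>v idx_vec bs \<phi>) $ i = idx_vec cs (\<lambda>c. \<Sum>b\<in>set bs. K c b * \<phi> b) $ i"
    using i by (simp add: idx_vec_def)
qed simp

lemma idx_mat_cong:
  assumes "\<And>c a. c \<in> set cs \<Longrightarrow> a \<in> set as \<Longrightarrow> K c a = K' c a"
  shows "idx_mat cs as K = idx_mat cs as K'"
  using assms by (auto simp: idx_mat_def intro!: eq_matI)

lemma idx_vec_cong:
  assumes "\<And>c. c \<in> set cs \<Longrightarrow> f c = g c"
  shows "idx_vec cs f = idx_vec cs g"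
  using assms by (auto simp: idx_vec_def intro!: eq_vecI)

lemma idx_mat_one:
  assumes "distinct bs"
  shows "idx_mat bs bs (\<lambda>c a. if c = a then 1 else 0) = 1\<^sub>m (length bs)"
  using assms by (auto simp: idx_mat_def nth_eq_iff_index_eq intro!: eq_matI)

lemma idx_mat_add:
  "idx_mat cs as K + idx_mat cs as K' = idx_mat cs as (\<lambda>c a. K c a + K' c a)"
  by (auto simp: idx_mat_def intro!: eq_matI)

lemma idx_mat_zero:
  "idx_mat cs as (\<lambda>c a. 0) = 0\<^sub>m (length cs) (length as)"
  by (auto simp: idx_mat_def intro!: eq_matI)

lemma mat_as_idx_mat:
  assumes "A \<in> carrier_mat n m"
  shows "A = idx_mat [0..<n] [0..<m] (\<lambda>i j. A $$ (i,j))"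
  using assms by (auto simp: idx_mat_def intro!: eq_matI)

lemma vec_as_idx_vec:
  assumes "v \<in> carrier_vec n"
  shows "v = idx_vec [0..<n] (\<lambda>i. v $ i)"
  using assms by (auto simp: idx_vec_def intro!: eq_vecI)

lemma idx_vec_delta_unit:
  assumes "distinct bs" "s < length bs"
  shows "idx_vec bs (\<lambda>b. if b = bs!s then 1 else 0) = unit_vec (length bs) s"
  using assms by (auto simp: idx_vec_def unit_vec_def nth_eq_iff_index_eq intro!: eq_vecI)

lemma mat_mult_unit_vec_nth:
  fixes A :: "'k::comm_ring_1 mat"
  assumes "A \<in> carrier_mat n m" "j < m" "i < n"
  shows "(A *\<^sub>v unit_vec m j) $ i = A $$ (i,j)"
proof -
  have "(A *\<^sub>v unit_vec m j) $ i = (\<Sum>ia = 0..<m. A $$ (i, ia) * (if ia = j then 1 else 0))"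
    using assms by (simp add: scalar_prod_def unit_vec_def)
  also have "\<dots> = (\<Sum>ia = 0..<m. if ia = j then A $$ (i, ia) else 0)"
    by (rule sum.cong) auto
  also have "\<dots> = A $$ (i,j)" using assms by simp
  finally show ?thesis .
qed

lemma mat_eq_by_unit_vecs:
  fixes A :: "'k::comm_ring_1 mat"
  assumes "A \<in> carrier_mat n m" "B \<in> carrier_mat n m"
    and "\<And>j. j < m \<Longrightarrow> A *\<^sub>v unit_vec m j = B *\<^sub>v unit_vec m j"
  shows "A = B"
proof (rule eq_matI)
  fix i j assume "i < dim_row B" "j < dim_col B"
  then have "i < n" "j < m" using assms by auto
  then show "A $$ (i,j) = B $$ (i,j)" using assms mat_mult_unit_vec_nth by metis
qed (use assms in auto)

lemma mat_mult_entry_sum: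
  fixes A :: "'k::comm_ring_1 mat"
  assumes "A \<in> carrier_mat n m" "B \<in> carrier_mat m p" "i < n" "j < p"
  shows "(A * B) $$ (i,j) = (\<Sum>k\<in>{0..<m}. A $$ (i,k) * B $$ (k,j))"
  using assms by (simp add: scalar_prod_def)

lemma sum_one_mat_col:
  assumes "j < n"
  shows "(\<Sum>j'\<in>{0..<n}. 1\<^sub>m n $$ (j',j) * f j') = (f j :: 'k::comm_ring_1)"
proof -
  have "(\<Sum>j'\<in>{0..<n}. 1\<^sub>m n $$ (j',j) * f j') = (\<Sum>j'\<in>{0..<n}. if j' = j then f j' else 0)"
    using assms by (intro sum.cong) auto
  then show ?thesis using assms by simp
qed

lemma sum_mult_sum_zero:
  fixes A :: "'k::comm_ring_1 mat"
  assumes A: "A \<in> carrier_mat n m" and B: "B \<in> carrier_mat m p" and AB: "A * B = 0\<^sub>m n p" and j: "j < p"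
  shows "(\<Sum>k\<in>{0..<m}. B $$ (k,j) * (\<Sum>i\<in>{0..<n}. A $$ (i,k) * f i)) = 0"
proof -
  have "(\<Sum>k\<in>{0..<m}. B $$ (k,j) * (\<Sum>i\<in>{0..<n}. A $$ (i,k) * f i))
      = (\<Sum>i\<in>{0..<n}. (\<Sum>k\<in>{0..<m}. A $$ (i,k) * B $$ (k,j)) * f i)"
    by (simp add: sum_distrib_left sum_distrib_right sum.swap[of _ "{0..<m}"] mult.assoc mult.left_commute)
  also have "\<dots> = (\<Sum>i\<in>{0..<n}. (A * B) $$ (i,j) * f i)"
    using A B j by (intro sum.cong) (simp_all add: scalar_prod_def)
  finally show ?thesis using AB j by simp
qed

lemma zero_mat_mult_vec[simp]:
  "(u :: 'k::comm_ring_1 vec) \<in> carrier_vec m \<Longrightarrow> 0\<^sub>m n m *\<^sub>v u = 0\<^sub>v n"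
  by (auto intro!: eq_vecI simp: scalar_prod_def)

lemma mat_mult_zero_vec[simp]:
  "(A :: 'k::comm_ring_1 mat) \<in> carrier_mat n m \<Longrightarrow> A *\<^sub>v 0\<^sub>v m = 0\<^sub>v n"
  by (auto intro!: eq_vecI simp: scalar_prod_def)

definition enum_set :: "'b set \<Rightarrow> 'b list" where
  "enum_set B = (SOME xs. set xs = B \<and> distinct xs)"

lemma enum_set:
  assumes "finite B"
  shows "set (enum_set B) = B" "distinct (enum_set B)" "length (enum_set B) = card B"
proof -
  have "\<exists>xs. set xs = B \<and> distinct xs" using finite_distinct_list[OF assms] by blast
  then have *: "set (enum_set B) = B \<and> distinct (enum_set B)" unfolding enum_set_def by (rule someI_ex)
  then show "set (enum_set B) = B" "distinct (enum_set B)" by auto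
  then show "length (enum_set B) = card B" using distinct_card by fastforce
qed

lemma sum_mult_if_eq:
  fixes f :: "'b \<Rightarrow> 'k::comm_ring_1"
  assumes "finite B"
  shows "(\<Sum>b\<in>B. f b * (if b = \<beta> then x else 0)) = (if \<beta> \<in> B then f \<beta> * x else 0)"
proof -
  have "(\<Sum>b\<in>B. f b * (if b = \<beta> then x else 0)) = (\<Sum>b\<in>B. if b = \<beta> then f \<beta> * x else 0)"
    by (rule sum.cong) auto
  then show ?thesis using assms by simp
qed

section \<open>Resolutions from contracting homotopies\<close>

lemma exact_at_of_homotopy:
  fixes A B C :: "('v,'a,'k::field) qrep"
  assumes f: "\<And>x. x \<in> verts L \<Longrightarrow> f x \<in> carrier_mat (fst B x) (fst A x)"
    and g: "\<And>x. x \<in> verts L \<Longrightarrow> g x \<in> carrier_mat (fst C x) (fst B x)"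
    and s: "\<And>x. x \<in> verts L \<Longrightarrow> s x \<in> carrier_mat (fst A x) (fst B x)"
    and t: "\<And>x. x \<in> verts L \<Longrightarrow> t x \<in> carrier_mat (fst B x) (fst C x)"
    and gf: "\<And>x. x \<in> verts L \<Longrightarrow> g x * f x = 0\<^sub>m (fst C x) (fst A x)"
    and homotopy: "\<And>x. x \<in> verts L \<Longrightarrow> f x * s x + t x * g x = 1\<^sub>m (fst B x)"
  shows "exact_at L A B C f g"
  unfolding exact_at_def
proof (intro ballI iffI)
  fix x and v :: "'k vec" assume x: "x \<in> verts L" and v: "v \<in> carrier_vec (fst B x)"
  note car = f[OF x] g[OF x] s[OF x] t[OF x]
  {
    assume z: "g x *\<^sub>v v = 0\<^sub>v (fst C x)"
    have "v = (f x * s x + t x * g x) *\<^sub>v v" using homotopy[OF x] v by simp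
    also have "\<dots> = f x *\<^sub>v (s x *\<^sub>v v) + t x *\<^sub>v (g x *\<^sub>v v)"
      using car v by (simp add: add_mult_distrib_mat_vec[of _ "fst B x" "fst B x"])
    also have "t x *\<^sub>v (g x *\<^sub>v v) = 0\<^sub>v (fst B x)" using z car by simp
    finally have "v = f x *\<^sub>v (s x *\<^sub>v v)" using car v by simp
    then show "\<exists>u\<in>carrier_vec (fst A x). f x *\<^sub>v u = v" using car v by (intro bexI[of _ "s x *\<^sub>v v"]) auto
  next
    assume "\<exists>u\<in>carrier_vec (fst A x). f x *\<^sub>v u = v"
    then obtain u where u: "u \<in> carrier_vec (fst A x)" and uv: "f x *\<^sub>v u = v" by blast
    have "g x *\<^sub>v v = (g x * f x) *\<^sub>v u" using uv car u by simp
    then show "g x *\<^sub>v v = 0\<^sub>v (fst C x)" using gf[OF x] u by simp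
  }
qed

lemma surj_hom_of_right_inverse:
  fixes P M :: "('v,'a,'k::field) qrep"
  assumes e: "is_hom L P M e"
    and s: "\<And>x. x \<in> verts L \<Longrightarrow> s x \<in> carrier_mat (fst P x) (fst M x)"
    and es: "\<And>x. x \<in> verts L \<Longrightarrow> e x * s x = 1\<^sub>m (fst M x)"
  shows "surj_hom L P M e"
  unfolding surj_hom_def
proof (intro conjI ballI e)
  fix x and w :: "'k vec" assume x: "x \<in> verts L" and w: "w \<in> carrier_vec (fst M x)"
  have "e x \<in> carrier_mat (fst M x) (fst P x)" using e x by (simp add: is_hom_def)
  then have "e x *\<^sub>v (s x *\<^sub>v w) = w" using s[OF x] es[OF x] w by (simp flip: assoc_mult_mat_vec)
  then show "\<exists>v\<in>carrier_vec (fst P x). e x *\<^sub>v v = w" using s[OF x] w by (intro bexI) auto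
qed

lemma inj_hom_of_left_inverse:
  fixes P Q :: "('v,'a,'k::field) qrep"
  assumes d: "is_hom L P Q d"
    and t: "\<And>x. x \<in> verts L \<Longrightarrow> t x \<in> carrier_mat (fst P x) (fst Q x)"
    and td: "\<And>x. x \<in> verts L \<Longrightarrow> t x * d x = 1\<^sub>m (fst P x)"
  shows "inj_hom L P Q d"
  unfolding inj_hom_def
proof (intro conjI ballI impI d)
  fix x and v :: "'k vec" assume x: "x \<in> verts L" and v: "v \<in> carrier_vec (fst P x)"
    and z: "d x *\<^sub>v v = 0\<^sub>v (fst Q x)"
  have "d x \<in> carrier_mat (fst Q x) (fst P x)" using d x by (simp add: is_hom_def)
  then have "v = t x *\<^sub>v (d x *\<^sub>v v)" using t[OF x] td[OF x] v by (simp flip: assoc_mult_mat_vec)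
  then show "v = 0\<^sub>v (fst P x)" using z t[OF x] by simp
qed

text \<open>Exactness is a vertexwise condition, so the homotopy only needs to consist of linear maps:
  it need not be a morphism of representations.\<close>

lemma pd_le_of_contracting_homotopy:
  fixes M :: "('v,'a,'k::field) qrep" and P :: "nat \<Rightarrow> ('v,'a,'k) qrep"
  assumes n: "n \<ge> 1"
    and proj: "\<And>i. i \<le> n \<Longrightarrow> projective_rep L (P i)"
    and eps_hom: "is_hom L (P 0) M \<epsilon>"
    and d_hom: "\<And>i. 1 \<le> i \<Longrightarrow> i \<le> n \<Longrightarrow> is_hom L (P i) (P (i-1)) (d i)"
    and s: "\<And>x. x \<in> verts L \<Longrightarrow> s x \<in> carrier_mat (fst (P 0) x) (fst M x)"
    and h: "\<And>x i. x \<in> verts L \<Longrightarrow> i < n \<Longrightarrow> h i x \<in> carrier_mat (fst (P (Suc i)) x) (fst (P i) x)"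
    and eps_s: "\<And>x. x \<in> verts L \<Longrightarrow> \<epsilon> x * s x = 1\<^sub>m (fst M x)"
    and eps_d: "\<And>x. x \<in> verts L \<Longrightarrow> \<epsilon> x * d 1 x = 0\<^sub>m (fst M x) (fst (P 1) x)"
    and d_d: "\<And>x i. x \<in> verts L \<Longrightarrow> 1 \<le> i \<Longrightarrow> i < n \<Longrightarrow>
                d i x * d (Suc i) x = 0\<^sub>m (fst (P (i-1)) x) (fst (P (Suc i)) x)"
    and homotopy0: "\<And>x. x \<in> verts L \<Longrightarrow> d 1 x * h 0 x + s x * \<epsilon> x = 1\<^sub>m (fst (P 0) x)"
    and homotopy: "\<And>x i. x \<in> verts L \<Longrightarrow> 1 \<le> i \<Longrightarrow> i < n \<Longrightarrow>
                d (Suc i) x * h i x + h (i-1) x * d i x = 1\<^sub>m (fst (P i) x)"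
    and homotopy_top: "\<And>x. x \<in> verts L \<Longrightarrow> h (n-1) x * d n x = 1\<^sub>m (fst (P n) x)"
  shows "pd_le L M n"
proof -
  have eps: "\<And>x. x \<in> verts L \<Longrightarrow> \<epsilon> x \<in> carrier_mat (fst M x) (fst (P 0) x)"
    using eps_hom by (simp add: is_hom_def)
  have d: "\<And>x i. x \<in> verts L \<Longrightarrow> 1 \<le> i \<Longrightarrow> i \<le> n \<Longrightarrow> d i x \<in> carrier_mat (fst (P (i-1)) x) (fst (P i) x)"
    using d_hom by (simp add: is_hom_def)
  have "surj_hom L (P 0) M \<epsilon>" by (rule surj_hom_of_right_inverse[OF eps_hom s eps_s])
  moreover have "inj_hom L (P n) (P (n - 1)) (d n)"
  proof (rule inj_hom_of_left_inverse[where t = "h (n - 1)"])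
    show "is_hom L (P n) (P (n - 1)) (d n)" using d_hom n by simp
    show "h (n - 1) x \<in> carrier_mat (fst (P n) x) (fst (P (n - 1)) x)" if "x \<in> verts L" for x
      using h[OF that, of "n - 1"] n by simp
  qed (rule homotopy_top)
  moreover have "exact_at L (P 1) (P 0) M (d 1) \<epsilon>"
    by (rule exact_at_of_homotopy[where s = "h 0" and t = s]) (use n d[of _ 1] s h[of _ 0] eps eps_d homotopy0 in auto)
  moreover have "exact_at L (P (i + 1)) (P i) (P (i - 1)) (d (i + 1)) (d i)" if "1 \<le> i" "i < n" for i
    by (rule exact_at_of_homotopy[where s = "h i" and t = "h (i - 1)"])
       (use that d[of _ i] d[of _ "Suc i"] h[of _ i] h[of _ "i - 1"] d_d homotopy in auto)
  ultimately show ?thesis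
    unfolding pd_le_def using n proj d_hom by (intro exI[of _ P] exI[of _ d] exI[of _ \<epsilon>]) auto
qed

section \<open>Walks and their matrices\<close>

lemma rep_rel_zero:
  assumes "is_rep L M" "[a, b] \<in> rels L"
  shows "snd M a * snd M b = 0\<^sub>m (fst M (tgt L a)) (fst M (src L b))"
  using assms unfolding is_rep_def by fastforce

text \<open>A walk from x to y is a path of the quiver, possibly trivial; an L-walk is a walk that contains
  no relation, i.e. a nonzero path of the algebra.\<close>

definition walk :: "('v,'a,'b) bquiver_scheme \<Rightarrow> 'v \<Rightarrow> 'v \<Rightarrow> 'a list \<Rightarrow> bool" where
  "walk L x y ps \<longleftrightarrow> (ps = [] \<and> x = y \<and> x \<in> verts L) \<or>
     (is_qpath L ps \<and> src L (last ps) = x \<and> tgt L (hd ps) = y)"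

definition Lwalk :: "('v,'a,'b) bquiver_scheme \<Rightarrow> 'v \<Rightarrow> 'v \<Rightarrow> 'a list \<Rightarrow> bool" where
  "Lwalk L x y ps \<longleftrightarrow> walk L x y ps \<and> (\<forall>i. Suc i < length ps \<longrightarrow> [ps ! i, ps ! Suc i] \<notin> rels L)"

definition walk_mat :: "('v,'a,'k::field) qrep \<Rightarrow> 'v \<Rightarrow> 'a list \<Rightarrow> 'k mat" where
  "walk_mat M x ps = (if ps = [] then 1\<^sub>m (fst M x) else comp_path (snd M) ps)"

lemma walk_Nil[simp]: "walk L x y [] \<longleftrightarrow> x = y \<and> x \<in> verts L"
  by (simp add: walk_def is_qpath_def)

lemma walk_Cons:
  assumes bound: "bound_quiver L"
  shows "walk L x z (\<gamma> # ps) \<longleftrightarrow> \<gamma> \<in> arrs L \<and> tgt L \<gamma> = z \<and> walk L x (src L \<gamma>) ps"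
proof
  assume c: "walk L x z (\<gamma> # ps)"
  then have q: "is_qpath L (\<gamma> # ps)" "src L (last (\<gamma>#ps)) = x" "tgt L \<gamma> = z" by (auto simp: walk_def)
  then have g: "\<gamma> \<in> arrs L" by (simp add: is_qpath_def)
  show "\<gamma> \<in> arrs L \<and> tgt L \<gamma> = z \<and> walk L x (src L \<gamma>) ps"
  proof (cases ps)
    case Nil then show ?thesis using q g bound by (auto simp: bound_quiver_def)
  next
    case (Cons \<delta> qs)
    have "is_qpath L ps" using q Cons
      by (auto simp: is_qpath_def)
    moreover have "src L \<gamma> = tgt L \<delta>" using q Cons by (auto simp: is_qpath_def)
    ultimately show ?thesis using q g Cons by (auto simp: walk_def)
  qed
next
  assume H: "\<gamma> \<in> arrs L \<and> tgt L \<gamma> = z \<and> walk L x (src L \<gamma>) ps"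
  show "walk L x z (\<gamma> # ps)"
  proof (cases ps)
    case Nil then show ?thesis using H by (simp add: walk_def is_qpath_def)
  next
    case (Cons \<delta> qs)
    then have q: "is_qpath L ps" "src L (last ps) = x" "tgt L \<delta> = src L \<gamma>" using H by (auto simp: walk_def)
    have "is_qpath L (\<gamma> # ps)"
      unfolding is_qpath_def
    proof (intro conjI allI impI)
      show "set (\<gamma> # ps) \<subseteq> arrs L" using q H by (auto simp: is_qpath_def)
      fix i assume "Suc i < length (\<gamma> # ps)"
      then show "src L ((\<gamma> # ps) ! i) = tgt L ((\<gamma> # ps) ! Suc i)"
        using q Cons by (cases i) (auto simp: is_qpath_def)
    qed simp
    then show ?thesis using q H Cons by (simp add: walk_def)
  qed
qed

lemma Lwalk_Cons:
  assumes bound: "bound_quiver L"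
  shows "Lwalk L x z (\<gamma> # ps) \<longleftrightarrow> \<gamma> \<in> arrs L \<and> tgt L \<gamma> = z \<and> Lwalk L x (src L \<gamma>) ps \<and>
            (ps = [] \<or> [\<gamma>, hd ps] \<notin> rels L)"
proof -
  have "(\<forall>i. Suc i < length (\<gamma>#ps) \<longrightarrow> [(\<gamma>#ps) ! i, (\<gamma>#ps) ! Suc i] \<notin> rels L) \<longleftrightarrow>
        (\<forall>i. Suc i < length ps \<longrightarrow> [ps ! i, ps ! Suc i] \<notin> rels L) \<and> (ps = [] \<or> [\<gamma>, hd ps] \<notin> rels L)"
    (is "?A \<longleftrightarrow> ?B \<and> ?C")
  proof
    assume A: ?A
    have B: ?B
    proof (intro allI impI)
      fix i assume "Suc i < length ps"
      then show "[ps ! i, ps ! Suc i] \<notin> rels L" using A[rule_format, of "Suc i"] by simp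
    qed
    have C: ?C using A[rule_format, of 0] by (cases ps) auto
    show "?B \<and> ?C" using B C by simp
  next
    assume BC: "?B \<and> ?C"
    show ?A
    proof (intro allI impI)
      fix i assume i: "Suc i < length (\<gamma>#ps)"
      show "[(\<gamma>#ps) ! i, (\<gamma>#ps) ! Suc i] \<notin> rels L"
      proof (cases i)
        case 0 then show ?thesis using BC i by (cases ps) auto
      next
        case (Suc j) then show ?thesis using BC i by auto
      qed
    qed
  qed
  then show ?thesis unfolding Lwalk_def using walk_Cons[OF bound] by blast
qed

lemma Lwalk_Nil[simp]: "Lwalk L x y [] \<longleftrightarrow> x = y \<and> x \<in> verts L"
  by (simp add: Lwalk_def)

lemma walk_src_verts:
  assumes bound: "bound_quiver L" and c: "walk L x y ps"
  shows "x \<in> verts L"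
proof (cases "ps = []")
  case True then show ?thesis using c by auto
next
  case False
  then have "src L (last ps) = x" "last ps \<in> arrs L" using c by (auto simp: walk_def is_qpath_def)
  then show ?thesis using bound by (auto simp: bound_quiver_def)
qed

lemma walk_tgt_verts:
  assumes bound: "bound_quiver L" and c: "walk L x y ps"
  shows "y \<in> verts L"
proof (cases "ps = []")
  case True then show ?thesis using c by auto
next
  case False
  then have "tgt L (hd ps) = y" "hd ps \<in> arrs L" using c by (auto simp: walk_def is_qpath_def)
  then show ?thesis using bound by (auto simp: bound_quiver_def)
qed

lemma walk_mat_carrier:
  assumes bound: "bound_quiver L" and M: "is_rep L M" and c: "walk L x y ps"
  shows "walk_mat M x ps \<in> carrier_mat (fst M y) (fst M x)"
  using c
proof (induction ps arbitrary: y)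
  case Nil then show ?case by (auto simp: walk_mat_def)
next
  case (Cons \<gamma> ps)
  then have h: "\<gamma> \<in> arrs L" "tgt L \<gamma> = y" "walk L x (src L \<gamma>) ps" using walk_Cons[OF bound] by auto
  have g: "snd M \<gamma> \<in> carrier_mat (fst M y) (fst M (src L \<gamma>))" using M h by (auto simp: is_rep_def)
  show ?case
  proof (cases ps)
    case Nil then show ?thesis using g h by (simp add: walk_mat_def)
  next
    case (Cons \<delta> qs)
    have "walk_mat M x (\<gamma> # ps) = snd M \<gamma> * walk_mat M x ps" using Cons by (simp add: walk_mat_def)
    then show ?thesis using g Cons.IH[OF h(3)] by simp
  qed
qed

lemma walk_mat_Cons:
  assumes bound: "bound_quiver L" and M: "is_rep L M" and c: "walk L x (src L \<gamma>) ps" and g: "\<gamma> \<in> arrs L"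
  shows "walk_mat M x (\<gamma> # ps) = snd M \<gamma> * walk_mat M x ps"
proof (cases ps)
  case Nil
  have "snd M \<gamma> \<in> carrier_mat (fst M (tgt L \<gamma>)) (fst M (src L \<gamma>))" using M g by (auto simp: is_rep_def)
  then show ?thesis using Nil c by (simp add: walk_mat_def)
next
  case (Cons \<delta> qs) then show ?thesis by (simp add: walk_mat_def)
qed

lemma walk_mat_Cons_rel:
  assumes bound: "bound_quiver L" and M: "is_rep L M" and c: "walk L x (src L \<gamma>) ps" and g: "\<gamma> \<in> arrs L"
    and ne: "ps \<noteq> []" and r: "[\<gamma>, hd ps] \<in> rels L"
  shows "snd M \<gamma> * walk_mat M x ps = 0\<^sub>m (fst M (tgt L \<gamma>)) (fst M x)"
proof -
  obtain \<delta> qs where ps: "ps = \<delta> # qs" using ne by (cases ps) auto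
  have h: "\<delta> \<in> arrs L" "tgt L \<delta> = src L \<gamma>" "walk L x (src L \<delta>) qs" using c ps walk_Cons[OF bound] by auto
  have gc: "snd M \<gamma> \<in> carrier_mat (fst M (tgt L \<gamma>)) (fst M (src L \<gamma>))" using M g by (auto simp: is_rep_def)
  have dc: "snd M \<delta> \<in> carrier_mat (fst M (src L \<gamma>)) (fst M (src L \<delta>))" using M h by (auto simp: is_rep_def)
  have qc: "walk_mat M x qs \<in> carrier_mat (fst M (src L \<delta>)) (fst M x)" by (rule walk_mat_carrier[OF bound M h(3)])
  have z: "snd M \<gamma> * snd M \<delta> = 0\<^sub>m (fst M (tgt L \<gamma>)) (fst M (src L \<delta>))"
    using rep_rel_zero[OF M] r ps by simp
  have "snd M \<gamma> * walk_mat M x ps = snd M \<gamma> * (snd M \<delta> * walk_mat M x qs)" using walk_mat_Cons[OF bound M h(3) h(1)] ps by simp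
  also have "\<dots> = (snd M \<gamma> * snd M \<delta>) * walk_mat M x qs" using gc dc qc by simp
  also have "\<dots> = 0\<^sub>m (fst M (tgt L \<gamma>)) (fst M x)" using z qc by simp
  finally show ?thesis .
qed

lemma hom_walk_mat:
  assumes bound: "bound_quiver L" and X: "is_rep L X" and Y: "is_rep L Y" and f: "is_hom L X Y f"
    and c: "walk L x y ps"
  shows "f y * walk_mat X x ps = walk_mat Y x ps * f x"
  using c
proof (induction ps arbitrary: y)
  case Nil
  then have xy: "x = y" "x \<in> verts L" by auto
  then have "f x \<in> carrier_mat (fst Y x) (fst X x)" using f by (simp add: is_hom_def)
  then show ?case using xy by (simp add: walk_mat_def)
next
  case (Cons \<gamma> ps)
  then have h: "\<gamma> \<in> arrs L" "tgt L \<gamma> = y" "walk L x (src L \<gamma>) ps" using walk_Cons[OF bound] by auto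
  have sv: "src L \<gamma> \<in> verts L" "tgt L \<gamma> \<in> verts L" using bound h by (auto simp: bound_quiver_def)
  have fy: "f y \<in> carrier_mat (fst Y y) (fst X y)" using f sv h by (simp add: is_hom_def)
  have fs: "f (src L \<gamma>) \<in> carrier_mat (fst Y (src L \<gamma>)) (fst X (src L \<gamma>))" using f sv by (simp add: is_hom_def)
  have fx: "x \<in> verts L" by (rule walk_src_verts[OF bound h(3)])
  have Xg: "snd X \<gamma> \<in> carrier_mat (fst X y) (fst X (src L \<gamma>))" using X h by (auto simp: is_rep_def)
  have Yg: "snd Y \<gamma> \<in> carrier_mat (fst Y y) (fst Y (src L \<gamma>))" using Y h by (auto simp: is_rep_def)
  have Xp: "walk_mat X x ps \<in> carrier_mat (fst X (src L \<gamma>)) (fst X x)" by (rule walk_mat_carrier[OF bound X h(3)])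
  have Yp: "walk_mat Y x ps \<in> carrier_mat (fst Y (src L \<gamma>)) (fst Y x)" by (rule walk_mat_carrier[OF bound Y h(3)])
  have fxc: "f x \<in> carrier_mat (fst Y x) (fst X x)" using f fx by (simp add: is_hom_def)
  have comm: "f y * snd X \<gamma> = snd Y \<gamma> * f (src L \<gamma>)" using f h by (auto simp: is_hom_def)
  have "f y * walk_mat X x (\<gamma> # ps) = f y * (snd X \<gamma> * walk_mat X x ps)" using walk_mat_Cons[OF bound X h(3) h(1)] by simp
  also have "\<dots> = (f y * snd X \<gamma>) * walk_mat X x ps" using fy Xg Xp by simp
  also have "\<dots> = (snd Y \<gamma> * f (src L \<gamma>)) * walk_mat X x ps" using comm by simp
  also have "\<dots> = snd Y \<gamma> * (f (src L \<gamma>) * walk_mat X x ps)" using Yg fs Xp by simp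
  also have "\<dots> = snd Y \<gamma> * (walk_mat Y x ps * f x)" using Cons.IH[OF h(3)] by simp
  also have "\<dots> = (snd Y \<gamma> * walk_mat Y x ps) * f x" using Yg Yp fxc by simp
  also have "\<dots> = walk_mat Y x (\<gamma> # ps) * f x" using walk_mat_Cons[OF bound Y h(3) h(1)] by simp
  finally show ?case .
qed

lemma walk_snoc:
  assumes bound: "bound_quiver L" and c: "walk L x y ps" and a: "\<alpha> \<in> arrs L" "tgt L \<alpha> = x"
  shows "walk L (src L \<alpha>) y (ps @ [\<alpha>])"
  using c
proof (induction ps arbitrary: y)
  case Nil
  then have "y = x" by simp
  then show ?case using a by (simp add: walk_def is_qpath_def)
next
  case (Cons \<gamma> ps)
  then have h: "\<gamma> \<in> arrs L" "tgt L \<gamma> = y" "walk L x (src L \<gamma>) ps" using walk_Cons[OF bound] by auto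
  show ?case using Cons.IH[OF h(3)] h walk_Cons[OF bound] by simp
qed

lemma Lwalk_snoc:
  assumes bound: "bound_quiver L" and c: "Lwalk L x y ps" and a: "\<alpha> \<in> arrs L" "tgt L \<alpha> = x"
  shows "Lwalk L (src L \<alpha>) y (ps @ [\<alpha>]) \<longleftrightarrow> (ps = [] \<or> [last ps, \<alpha>] \<notin> rels L)"
  using c
proof (induction ps arbitrary: y)
  case Nil
  then have xy: "x = y" "x \<in> verts L" by auto
  have "walk L (src L \<alpha>) y ([] @ [\<alpha>])" by (rule walk_snoc[OF bound _ a]) (use xy in simp)
  then show ?case by (simp add: Lwalk_def)
next
  case (Cons \<gamma> ps)
  then have h: "\<gamma> \<in> arrs L" "tgt L \<gamma> = y" "Lwalk L x (src L \<gamma>) ps" "ps = [] \<or> [\<gamma>, hd ps] \<notin> rels L"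
    using Lwalk_Cons[OF bound] by auto
  have "Lwalk L (src L \<alpha>) y ((\<gamma> # ps) @ [\<alpha>]) \<longleftrightarrow> Lwalk L (src L \<alpha>) (src L \<gamma>) (ps @ [\<alpha>]) \<and> [\<gamma>, hd (ps @ [\<alpha>])] \<notin> rels L"
    using Lwalk_Cons[OF bound, of "src L \<alpha>" y \<gamma> "ps @ [\<alpha>]"] h by simp
  also have "\<dots> \<longleftrightarrow> (ps = [] \<or> [last ps, \<alpha>] \<notin> rels L) \<and> [\<gamma>, hd (ps @ [\<alpha>])] \<notin> rels L"
    using Cons.IH[OF h(3)] by simp
  also have "\<dots> \<longleftrightarrow> ((\<gamma> # ps) = [] \<or> [last (\<gamma> # ps), \<alpha>] \<notin> rels L)"
    using h(4) by (cases ps) auto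
  finally show ?case by simp
qed

lemma Lwalk_prefix:
  assumes bound: "bound_quiver L" and c: "Lwalk L x y (qs @ ps)" and ne: "qs \<noteq> []"
  shows "Lwalk L (src L (last qs)) y qs"
  using c ne
proof (induction qs arbitrary: y)
  case Nil then show ?case by simp
next
  case (Cons \<gamma> qs)
  then have h: "\<gamma> \<in> arrs L" "tgt L \<gamma> = y" "Lwalk L x (src L \<gamma>) (qs @ ps)" "qs @ ps = [] \<or> [\<gamma>, hd (qs @ ps)] \<notin> rels L"
    using Lwalk_Cons[OF bound] by auto
  show ?case
  proof (cases "qs = []")
    case True
    have "src L \<gamma> \<in> verts L" using h bound by (auto simp: bound_quiver_def)
    then show ?thesis using True h Lwalk_Cons[OF bound] by simp
  next
    case False
    then have "Lwalk L (src L (last qs)) (src L \<gamma>) qs" using Cons.IH[OF h(3)] by simp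
    then show ?thesis using False h Lwalk_Cons[OF bound] by simp
  qed
qed

lemma Lwalk_take:
  assumes bound: "bound_quiver L" and c: "Lwalk L x y ps" and k: "k < length ps"
  shows "Lwalk L (tgt L (ps!k)) y (take k ps)"
proof (cases "k = 0")
  case True
  have "ps \<noteq> []" using k by auto
  then have "tgt L (hd ps) = y" "hd ps \<in> arrs L" using c by (auto simp: Lwalk_def walk_def is_qpath_def)
  then show ?thesis using True bound k by (auto simp: hd_conv_nth bound_quiver_def)
next
  case False
  have ne': "take k ps \<noteq> []" using False k by auto
  have c': "Lwalk L x y (take k ps @ drop k ps)" using c by simp
  have "Lwalk L (src L (last (take k ps))) y (take k ps)" by (rule Lwalk_prefix[OF bound c' ne'])
  moreover have "src L (last (take k ps)) = tgt L (ps!k)"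
  proof -
    have "take k ps \<noteq> []" using False k by auto
    then have "last (take k ps) = take k ps ! (length (take k ps) - 1)" by (simp add: last_conv_nth)
    then have "last (take k ps) = ps ! (k - 1)" using False k by (simp add: min_def)
    moreover have "src L (ps ! (k-1)) = tgt L (ps ! Suc (k-1))"
      using c k False by (auto simp: Lwalk_def walk_def is_qpath_def)
    ultimately show ?thesis using False by simp
  qed
  ultimately show ?thesis by simp
qed

lemma walk_drop:
  assumes bound: "bound_quiver L" and c: "walk L x y ps" and k: "k < length ps"
  shows "walk L x (src L (ps!k)) (drop (Suc k) ps)"
  using c k
proof (induction ps arbitrary: y k)
  case Nil then show ?case by simp
next
  case (Cons \<gamma> ps)
  then have h: "\<gamma> \<in> arrs L" "tgt L \<gamma> = y" "walk L x (src L \<gamma>) ps" using walk_Cons[OF bound] by auto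
  show ?case
  proof (cases k)
    case 0 then show ?thesis using h by simp
  next
    case (Suc k') then show ?thesis using Cons.IH[OF h(3), of k'] Cons.prems by simp
  qed
qed

lemma Lwalk_butlast:
  assumes bound: "bound_quiver L" and c: "Lwalk L x y ps" and ne: "ps \<noteq> []"
  shows "Lwalk L (tgt L (last ps)) y (butlast ps)"
proof -
  have "Lwalk L (tgt L (ps ! (length ps - 1))) y (take (length ps - 1) ps)"
    using Lwalk_take[OF bound c] ne by simp
  then show ?thesis using ne by (simp add: last_conv_nth butlast_conv_take)
qed

lemma walk_mat_snoc:
  assumes bound: "bound_quiver L" and M: "is_rep L M" and c: "walk L x y ps" and a: "\<alpha> \<in> arrs L" "tgt L \<alpha> = x"
  shows "walk_mat M (src L \<alpha>) (ps @ [\<alpha>]) = walk_mat M x ps * snd M \<alpha>"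
  using c
proof (induction ps arbitrary: y)
  case Nil
  have "snd M \<alpha> \<in> carrier_mat (fst M x) (fst M (src L \<alpha>))" using M a by (auto simp: is_rep_def)
  then show ?case using Nil by (auto simp: walk_mat_def)
next
  case (Cons \<gamma> ps)
  then have h: "\<gamma> \<in> arrs L" "tgt L \<gamma> = y" "walk L x (src L \<gamma>) ps" using walk_Cons[OF bound] by auto
  have c2: "walk L (src L \<alpha>) (src L \<gamma>) (ps @ [\<alpha>])" by (rule walk_snoc[OF bound h(3) a])
  have Gc: "snd M \<gamma> \<in> carrier_mat (fst M y) (fst M (src L \<gamma>))" using M h by (auto simp: is_rep_def)
  have Pc: "walk_mat M x ps \<in> carrier_mat (fst M (src L \<gamma>)) (fst M x)" by (rule walk_mat_carrier[OF bound M h(3)])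
  have Ac: "snd M \<alpha> \<in> carrier_mat (fst M x) (fst M (src L \<alpha>))" using M a by (auto simp: is_rep_def)
  have "walk_mat M (src L \<alpha>) ((\<gamma> # ps) @ [\<alpha>]) = snd M \<gamma> * walk_mat M (src L \<alpha>) (ps @ [\<alpha>])"
    using walk_mat_Cons[OF bound M c2 h(1)] by simp
  also have "\<dots> = snd M \<gamma> * (walk_mat M x ps * snd M \<alpha>)" using Cons.IH[OF h(3)] by simp
  also have "\<dots> = (snd M \<gamma> * walk_mat M x ps) * snd M \<alpha>" using Gc Pc Ac by simp
  also have "\<dots> = walk_mat M x (\<gamma> # ps) * snd M \<alpha>" using walk_mat_Cons[OF bound M h(3) h(1)] by simp
  finally show ?case .
qed

lemma walk_mat_snoc_rel:
  assumes bound: "bound_quiver L" and M: "is_rep L M" and c: "walk L x y ps" and a: "\<alpha> \<in> arrs L" "tgt L \<alpha> = x"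
    and ne: "ps \<noteq> []" and r: "[last ps, \<alpha>] \<in> rels L"
  shows "walk_mat M x ps * snd M \<alpha> = 0\<^sub>m (fst M y) (fst M (src L \<alpha>))"
  using c ne r
proof (induction ps arbitrary: y)
  case Nil then show ?case by simp
next
  case (Cons \<gamma> ps)
  then have h: "\<gamma> \<in> arrs L" "tgt L \<gamma> = y" "walk L x (src L \<gamma>) ps" using walk_Cons[OF bound] by auto
  have Gc: "snd M \<gamma> \<in> carrier_mat (fst M y) (fst M (src L \<gamma>))" using M h by (auto simp: is_rep_def)
  have Ac: "snd M \<alpha> \<in> carrier_mat (fst M x) (fst M (src L \<alpha>))" using M a by (auto simp: is_rep_def)
  show ?case
  proof (cases "ps = []")
    case True
    then have xg: "x = src L \<gamma>" using h by simp
    have r': "[\<gamma>, \<alpha>] \<in> rels L" using Cons.prems True by simp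
    then have "snd M \<gamma> * snd M \<alpha> = 0\<^sub>m (fst M y) (fst M (src L \<alpha>))" using rep_rel_zero[OF M] h by simp
    then show ?thesis using True Gc by (simp add: walk_mat_def)
  next
    case False
    have Pc: "walk_mat M x ps \<in> carrier_mat (fst M (src L \<gamma>)) (fst M x)" by (rule walk_mat_carrier[OF bound M h(3)])
    have r': "[last ps, \<alpha>] \<in> rels L" using Cons.prems False by simp
    have "walk_mat M x (\<gamma> # ps) * snd M \<alpha> = (snd M \<gamma> * walk_mat M x ps) * snd M \<alpha>"
      using walk_mat_Cons[OF bound M h(3) h(1)] by simp
    also have "\<dots> = snd M \<gamma> * (walk_mat M x ps * snd M \<alpha>)" using Gc Pc Ac by simp
    also have "\<dots> = snd M \<gamma> * 0\<^sub>m (fst M (src L \<gamma>)) (fst M (src L \<alpha>))"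
      using Cons.IH[OF h(3) False r'] by simp
    also have "\<dots> = 0\<^sub>m (fst M y) (fst M (src L \<alpha>))" using Gc by simp
    finally show ?thesis .
  qed
qed

lemma walk_mat_drop:
  assumes bound: "bound_quiver L" and M: "is_rep L M" and c: "walk L x y ps" and k: "k < length ps"
  shows "walk_mat M x (drop k ps) = snd M (ps!k) * walk_mat M x (drop (Suc k) ps)"
proof -
  have d: "drop k ps = ps!k # drop (Suc k) ps" using k by (simp add: Cons_nth_drop_Suc)
  have a: "ps!k \<in> arrs L" using c k by (auto simp: walk_def is_qpath_def)
  show ?thesis unfolding d by (rule walk_mat_Cons[OF bound M walk_drop[OF bound c k] a])
qed

lemma Lwalk_last_src:
  assumes "Lwalk L x y ps" "ps \<noteq> []"
  shows "src L (last ps) = x"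
  using assms by (auto simp: Lwalk_def walk_def)

lemma Lwalk_snoc_not_rel:
  assumes "Lwalk L z y (qs @ [a,b])"
  shows "[a,b] \<notin> rels L"
proof -
  have "(qs @ [a,b]) ! length qs = a" "(qs @ [a,b]) ! Suc (length qs) = b" by (auto simp: nth_append)
  moreover have "Suc (length qs) < length (qs @ [a,b])" by simp
  ultimately show ?thesis using assms unfolding Lwalk_def by metis
qed

section \<open>Free representations\<close>

text \<open>free_rep L G v is the direct sum over g \<in> G of the indecomposable projective at v g. Its basis
  at y consists of the paths of \<Lambda> from v g to y (including the trivial one), and an arrow \<gamma> sends a
  path p to \<gamma>p, or to 0 when \<gamma>p contains a relation.\<close>

definition free_basis :: "('v,'a,'b) bquiver_scheme \<Rightarrow> 'g set \<Rightarrow> ('g \<Rightarrow> 'v) \<Rightarrow> 'v \<Rightarrow> ('g \<times> 'a list) set" where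
  "free_basis L G v y = {(g,ps). g \<in> G \<and> Lwalk L (v g) y ps}"

definition free_arrow_entry :: "'a \<Rightarrow> ('g \<times> 'a list) \<Rightarrow> ('g \<times> 'a list) \<Rightarrow> 'k::comm_ring_1" where
  "free_arrow_entry \<gamma> c b = (if c = (fst b, \<gamma> # snd b) then 1 else 0)"

definition free_rep :: "('v,'a,'b) bquiver_scheme \<Rightarrow> 'g set \<Rightarrow> ('g \<Rightarrow> 'v) \<Rightarrow> ('v,'a,'k::field) qrep" where
  "free_rep L G v = (\<lambda>y. card (free_basis L G v y),
     \<lambda>\<gamma>. idx_mat (enum_set (free_basis L G v (tgt L \<gamma>))) (enum_set (free_basis L G v (src L \<gamma>))) (free_arrow_entry \<gamma>))"

lemma Lwalk_length_bounded:
  assumes g: "gentle L"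
  obtains N where "\<And>x y ps. walk L x y ps \<Longrightarrow> (\<forall>i. Suc i < length ps \<longrightarrow> [ps ! i, ps ! Suc i] \<notin> rels L) \<Longrightarrow> length ps < N"
proof -
  obtain n where n: "n > 0" "\<forall>p. is_qpath L p \<and> length p = n \<longrightarrow> (\<exists>r\<in>rels L. is_subpath r p)"
    using g by (auto simp: gentle_def bound_quiver_def)
  have "length ps < n" if c: "walk L x y ps" and nr: "\<forall>i. Suc i < length ps \<longrightarrow> [ps ! i, ps ! Suc i] \<notin> rels L" for x y ps
  proof (rule ccontr)
    assume "\<not> length ps < n"
    then have ln: "length ps \<ge> n" by simp
    then have ne: "ps \<noteq> []" using n by auto
    then have qp: "is_qpath L ps" using c by (auto simp: walk_def)
    let ?p = "take n ps"
    have "is_qpath L ?p" using qp ln n by (auto simp: is_qpath_def dest: in_set_takeD)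
    moreover have "length ?p = n" using ln by simp
    ultimately obtain r where r: "r \<in> rels L" "is_subpath r ?p" using n by blast
    have "length r = 2" using r g by (auto simp: gentle_def)
    then obtain u v where uv: "r = [u,v]" by (auto simp: numeral_2_eq_2 length_Suc_conv)
    obtain as bs where ab: "?p = as @ [u,v] @ bs" using r(2) uv by (auto simp: is_subpath_def)
    have l: "Suc (length as) < length ?p" using ab by simp
    have "?p ! length as = u" "?p ! Suc (length as) = v" using ab by (auto simp: nth_append)
    then have "ps ! length as = u" "ps ! Suc (length as) = v" "Suc (length as) < length ps"
      using l by auto
    then show False using nr r(1) uv by auto
  qed
  then show ?thesis using that by blast
qed

lemma Lwalk_length_bound:
  assumes g: "gentle L"
  obtains N where "\<And>x y ps. Lwalk L x y ps \<Longrightarrow> length ps < N"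
  using Lwalk_length_bounded[OF g] unfolding Lwalk_def by metis

lemma Lwalk_arrs: "Lwalk L x y ps \<Longrightarrow> set ps \<subseteq> arrs L"
  by (auto simp: Lwalk_def walk_def is_qpath_def)

lemma finite_free_basis:
  assumes g: "gentle L" and G: "finite G"
  shows "finite (free_basis L G v y)"
proof -
  obtain N where N: "\<And>x y ps. Lwalk L x y ps \<Longrightarrow> length ps < N" using Lwalk_length_bound[OF g] by blast
  have fa: "finite (arrs L)" using g by (simp add: gentle_def bound_quiver_def)
  have "free_basis L G v y \<subseteq> G \<times> {ps. set ps \<subseteq> arrs L \<and> length ps \<le> N}"
    using N Lwalk_arrs unfolding free_basis_def by (fastforce simp: less_imp_le)
  moreover have "finite (G \<times> {ps. set ps \<subseteq> arrs L \<and> length ps \<le> N})"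
    using G finite_lists_length_le[OF fa] by simp
  ultimately show ?thesis by (rule finite_subset)
qed

lemma enum_free_basis:
  assumes g: "gentle L" and G: "finite G"
  shows "set (enum_set (free_basis L G v y)) = free_basis L G v y" "distinct (enum_set (free_basis L G v y))"
    "length (enum_set (free_basis L G v y)) = card (free_basis L G v y)"
  using enum_set[OF finite_free_basis[OF g G]] by auto

lemma free_rep_dim[simp]: "fst (free_rep L G v) y = card (free_basis L G v y)"
  by (simp add: free_rep_def)

lemma free_rep_arrow: "snd (free_rep L G v) \<gamma> = idx_mat (enum_set (free_basis L G v (tgt L \<gamma>))) (enum_set (free_basis L G v (src L \<gamma>))) (free_arrow_entry \<gamma>)"
  by (simp add: free_rep_def)

lemma free_basis_iff: "(g, ps) \<in> free_basis L G v y \<longleftrightarrow> g \<in> G \<and> Lwalk L (v g) y ps"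
  by (simp add: free_basis_def)

lemma free_rep_is_rep:
  assumes g: "gentle L" and G: "finite G"
  shows "is_rep L (free_rep L G v :: ('v,'a,'k::field) qrep)"
  unfolding is_rep_def
proof (intro conjI ballI)
  have bound: "bound_quiver L" using g by (simp add: gentle_def)
  fix \<gamma> assume "\<gamma> \<in> arrs L"
  show "snd (free_rep L G v :: ('v,'a,'k) qrep) \<gamma> \<in> carrier_mat (fst (free_rep L G v :: ('v,'a,'k) qrep) (tgt L \<gamma>)) (fst (free_rep L G v :: ('v,'a,'k) qrep) (src L \<gamma>))"
    using enum_free_basis[OF g G] by (simp add: free_rep_arrow)
next
  have bound: "bound_quiver L" using g by (simp add: gentle_def)
  fix r assume r: "r \<in> rels L"
  obtain \<gamma> \<delta> where gd: "r = [\<gamma>,\<delta>]" "\<gamma> \<in> arrs L" "\<delta> \<in> arrs L" "src L \<gamma> = tgt L \<delta>"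
    using gentle_rel_shape[OF g r] by blast
  let ?e = "\<lambda>y. enum_set (free_basis L G v y)"
  have "comp_path (snd (free_rep L G v :: ('v,'a,'k) qrep)) r =
        idx_mat (?e (tgt L \<gamma>)) (?e (src L \<gamma>)) (free_arrow_entry \<gamma>) * idx_mat (?e (src L \<gamma>)) (?e (src L \<delta>)) (free_arrow_entry \<delta>)"
    using gd by (simp add: free_rep_arrow)
  also have "\<dots> = idx_mat (?e (tgt L \<gamma>)) (?e (src L \<delta>)) (\<lambda>c a. \<Sum>b\<in>free_basis L G v (src L \<gamma>). (free_arrow_entry \<gamma> c b :: 'k) * free_arrow_entry \<delta> b a)"
    using idx_mat_mult[OF enum_free_basis(2)[OF g G]] enum_free_basis(1)[OF g G] by simp
  also have "\<dots> = idx_mat (?e (tgt L \<gamma>)) (?e (src L \<delta>)) (\<lambda>c a. 0)"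
  proof (rule idx_mat_cong)
    fix c a assume c: "c \<in> set (?e (tgt L \<gamma>))" and a: "a \<in> set (?e (src L \<delta>))"
    obtain g0 ps where a': "a = (g0, ps)" by (cases a)
    have "(\<Sum>b\<in>free_basis L G v (src L \<gamma>). (free_arrow_entry \<gamma> c b :: 'k) * free_arrow_entry \<delta> b a) =
          (\<Sum>b\<in>free_basis L G v (src L \<gamma>). free_arrow_entry \<gamma> c b * (if b = (g0, \<delta> # ps) then 1 else 0))"
      unfolding free_arrow_entry_def a' by (rule sum.cong) auto
    also have "\<dots> = (if (g0, \<delta> # ps) \<in> free_basis L G v (src L \<gamma>) then free_arrow_entry \<gamma> c (g0, \<delta> # ps) * 1 else 0)"
      by (rule sum_mult_if_eq[OF finite_free_basis[OF g G]])
    also have "\<dots> = 0"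
    proof -
      have "c \<noteq> (g0, \<gamma> # \<delta> # ps)"
      proof
        assume "c = (g0, \<gamma> # \<delta> # ps)"
        then have "Lwalk L (v g0) (tgt L \<gamma>) (\<gamma> # \<delta> # ps)" using c enum_free_basis(1)[OF g G] by (simp add: free_basis_iff)
        then show False using Lwalk_Cons[OF bound] gd r by auto
      qed
      then show ?thesis by (simp add: free_arrow_entry_def)
    qed
    finally show "(\<Sum>b\<in>free_basis L G v (src L \<gamma>). (free_arrow_entry \<gamma> c b :: 'k) * free_arrow_entry \<delta> b a) = 0" .
  qed
  also have "\<dots> = 0\<^sub>m (fst (free_rep L G v :: ('v,'a,'k) qrep) (tgt L (hd r))) (fst (free_rep L G v :: ('v,'a,'k) qrep) (src L (last r)))"
    using gd enum_free_basis[OF g G] by (simp add: idx_mat_zero)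
  finally show "comp_path (snd (free_rep L G v :: ('v,'a,'k) qrep)) r =
     0\<^sub>m (fst (free_rep L G v :: ('v,'a,'k) qrep) (tgt L (hd r))) (fst (free_rep L G v :: ('v,'a,'k) qrep) (src L (last r)))" .
qed

lemma Lwalk_walk: "Lwalk L x y ps \<Longrightarrow> walk L x y ps" by (simp add: Lwalk_def)

definition free_gen :: "('v,'a,'b) bquiver_scheme \<Rightarrow> 'g set \<Rightarrow> ('g \<Rightarrow> 'v) \<Rightarrow> 'g \<Rightarrow> 'k::comm_ring_1 vec" where
  "free_gen L G v g0 = idx_vec (enum_set (free_basis L G v (v g0))) (\<lambda>b. if b = (g0,[]) then 1 else 0)"

lemma free_rep_walk_mat_generator:
  assumes g: "gentle L" and G: "finite G" and g0: "g0 \<in> G"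
  shows "Lwalk L (v g0) y ps \<Longrightarrow>
    walk_mat (free_rep L G v :: ('v,'a,'k::field) qrep) (v g0) ps *\<^sub>v free_gen L G v g0
    = idx_vec (enum_set (free_basis L G v y)) (\<lambda>b. if b = (g0,ps) then 1 else 0)"
proof (induction ps arbitrary: y)
  case Nil
  then have y: "y = v g0" by simp
  show ?case using y enum_free_basis[OF g G] by (simp add: walk_mat_def free_gen_def)
next
  case (Cons \<gamma> ps)
  have bound: "bound_quiver L" using g by (simp add: gentle_def)
  let ?F = "free_rep L G v :: ('v,'a,'k) qrep"
  let ?e = "\<lambda>y. enum_set (free_basis L G v y)"
  let ?w = "free_gen L G v g0 :: 'k vec"
  have h: "\<gamma> \<in> arrs L" "tgt L \<gamma> = y" "Lwalk L (v g0) (src L \<gamma>) ps" using Cons.prems Lwalk_Cons[OF bound] by auto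
  have F: "is_rep L ?F" by (rule free_rep_is_rep[OF g G])
  have pc: "walk_mat ?F (v g0) ps \<in> carrier_mat (fst ?F (src L \<gamma>)) (fst ?F (v g0))"
    by (rule walk_mat_carrier[OF bound F Lwalk_walk[OF h(3)]])
  have Ac: "snd ?F \<gamma> \<in> carrier_mat (fst ?F (tgt L \<gamma>)) (fst ?F (src L \<gamma>))" using F h by (auto simp: is_rep_def)
  have wc: "?w \<in> carrier_vec (fst ?F (v g0))" using enum_free_basis[OF g G] by (simp add: free_gen_def)
  have "walk_mat ?F (v g0) (\<gamma> # ps) *\<^sub>v ?w = (snd ?F \<gamma> * walk_mat ?F (v g0) ps) *\<^sub>v ?w"
    using walk_mat_Cons[OF bound F Lwalk_walk[OF h(3)] h(1)] by simp
  also have "\<dots> = snd ?F \<gamma> *\<^sub>v (walk_mat ?F (v g0) ps *\<^sub>v ?w)" using Ac pc wc by simp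
  also have "\<dots> = snd ?F \<gamma> *\<^sub>v idx_vec (?e (src L \<gamma>)) (\<lambda>b. if b = (g0,ps) then 1 else 0)"
    using Cons.IH[OF h(3)] by simp
  also have "\<dots> = idx_vec (?e (tgt L \<gamma>)) (\<lambda>c. \<Sum>b\<in>free_basis L G v (src L \<gamma>). free_arrow_entry \<gamma> c b * (if b = (g0,ps) then 1 else 0))"
    using idx_mat_mult_idx_vec[OF enum_free_basis(2)[OF g G]] enum_free_basis(1)[OF g G] by (simp add: free_rep_arrow)
  also have "\<dots> = idx_vec (?e (tgt L \<gamma>)) (\<lambda>c. if c = (g0, \<gamma> # ps) then 1 else 0)"
  proof (rule idx_vec_cong)
    fix c
    have "(g0, ps) \<in> free_basis L G v (src L \<gamma>)" using g0 h by (simp add: free_basis_iff)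
    then show "(\<Sum>b\<in>free_basis L G v (src L \<gamma>). free_arrow_entry \<gamma> c b * (if b = (g0,ps) then 1 else 0)) = (if c = (g0, \<gamma> # ps) then 1 else (0::'k))"
      by (simp add: sum_mult_if_eq[OF finite_free_basis[OF g G]] free_arrow_entry_def)
  qed
  finally show ?case using h by simp
qed

text \<open>The universal property of a free representation: a morphism out of it is determined by
  the images of the generators, and any choice of these images extends.\<close>

definition free_ext :: "('v,'a,'b) bquiver_scheme \<Rightarrow> 'g set \<Rightarrow> ('g \<Rightarrow> 'v) \<Rightarrow> ('v,'a,'k::field) qrep
    \<Rightarrow> ('g \<Rightarrow> 'k vec) \<Rightarrow> 'v \<Rightarrow> 'k mat" where
  "free_ext L G v X u y = idx_mat [0..<fst X y] (enum_set (free_basis L G v y))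
     (\<lambda>r b. (walk_mat X (v (fst b)) (snd b) *\<^sub>v u (fst b)) $ r)"

lemma free_ext_hom:
  fixes L :: "('v,'a,'b) bquiver_scheme" and X :: "('v,'a,'k::field) qrep"
  assumes g: "gentle L" and G: "finite G" and X: "is_rep L X"
    and u: "\<And>g0. g0 \<in> G \<Longrightarrow> v g0 \<in> verts L \<Longrightarrow> u g0 \<in> carrier_vec (fst X (v g0))"
  shows "is_hom L (free_rep L G v) X (free_ext L G v X u)"
  unfolding is_hom_def
proof (intro conjI ballI)
  let ?F = "free_rep L G v :: ('v,'a,'k) qrep"
  let ?e = "\<lambda>y. enum_set (free_basis L G v y)"
  let ?h = "free_ext L G v X u"
  define H where "H r b = (walk_mat X (v (fst b)) (snd b) *\<^sub>v u (fst b)) $ r" for r b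
  have bound: "bound_quiver L" using g by (simp add: gentle_def)
  fix x assume "x \<in> verts L"
  show "?h x \<in> carrier_mat (fst X x) (fst ?F x)" using enum_free_basis[OF g G] by (simp add: free_ext_def)
next
  let ?F = "free_rep L G v :: ('v,'a,'k) qrep"
  let ?e = "\<lambda>y. enum_set (free_basis L G v y)"
  let ?h = "free_ext L G v X u"
  define H where "H r b = (walk_mat X (v (fst b)) (snd b) *\<^sub>v u (fst b)) $ r" for r b
  have bound: "bound_quiver L" using g by (simp add: gentle_def)
  fix \<gamma> assume ga: "\<gamma> \<in> arrs L"
  let ?dy = "fst X (src L \<gamma>)" and ?dz = "fst X (tgt L \<gamma>)"
  have Xg: "snd X \<gamma> \<in> carrier_mat ?dz ?dy" using X ga by (auto simp: is_rep_def)
  have lhs: "?h (tgt L \<gamma>) * snd ?F \<gamma> = idx_mat [0..<?dz] (?e (src L \<gamma>))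
      (\<lambda>r a. \<Sum>b\<in>free_basis L G v (tgt L \<gamma>). H r b * free_arrow_entry \<gamma> b a)"
    unfolding free_ext_def free_rep_arrow H_def
    using idx_mat_mult[OF enum_free_basis(2)[OF g G]] enum_free_basis(1)[OF g G] by simp
  have rhs: "snd X \<gamma> * ?h (src L \<gamma>) = idx_mat [0..<?dz] (?e (src L \<gamma>))
      (\<lambda>r a. \<Sum>j\<in>{0..<?dy}. snd X \<gamma> $$ (r,j) * H j a)"
    unfolding free_ext_def H_def by (subst mat_as_idx_mat[OF Xg]) (simp add: idx_mat_mult)
  show "?h (tgt L \<gamma>) * snd ?F \<gamma> = snd X \<gamma> * ?h (src L \<gamma>)"
    unfolding lhs rhs
  proof (rule idx_mat_cong)
    fix r a assume r: "r \<in> set [0..<?dz]" and a: "a \<in> set (?e (src L \<gamma>))"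
    obtain g0 ps where a': "a = (g0,ps)" by (cases a)
    have a'': "g0 \<in> G" "Lwalk L (v g0) (src L \<gamma>) ps"
      using a a' enum_free_basis(1)[OF g G] by (auto simp: free_basis_iff)
    have ch: "walk L (v g0) (src L \<gamma>) ps" using a'' by (simp add: Lwalk_walk)
    have uc: "u g0 \<in> carrier_vec (fst X (v g0))" using u[OF a''(1) walk_src_verts[OF bound ch]] .
    have pc: "walk_mat X (v g0) ps \<in> carrier_mat ?dy (fst X (v g0))" by (rule walk_mat_carrier[OF bound X ch])
    have rr: "r < ?dz" using r by simp
    have R: "(\<Sum>j\<in>{0..<?dy}. snd X \<gamma> $$ (r,j) * H j a) = ((snd X \<gamma> * walk_mat X (v g0) ps) *\<^sub>v u g0) $ r"
      using Xg pc uc rr by (simp add: H_def a' scalar_prod_def)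
    have L: "(\<Sum>b\<in>free_basis L G v (tgt L \<gamma>). H r b * free_arrow_entry \<gamma> b a) =
             (if (g0, \<gamma>#ps) \<in> free_basis L G v (tgt L \<gamma>) then H r (g0, \<gamma>#ps) else 0)"
      unfolding free_arrow_entry_def a'
      using sum_mult_if_eq[OF finite_free_basis[OF g G], of "H r" "(g0, \<gamma>#ps)" 1] by simp
    show "(\<Sum>b\<in>free_basis L G v (tgt L \<gamma>). H r b * free_arrow_entry \<gamma> b a) = (\<Sum>j\<in>{0..<?dy}. snd X \<gamma> $$ (r,j) * H j a)"
    proof (cases "Lwalk L (v g0) (tgt L \<gamma>) (\<gamma>#ps)")
      case True
      then have "(g0, \<gamma>#ps) \<in> free_basis L G v (tgt L \<gamma>)" using a'' by (simp add: free_basis_iff)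
      moreover have "walk_mat X (v g0) (\<gamma>#ps) = snd X \<gamma> * walk_mat X (v g0) ps" by (rule walk_mat_Cons[OF bound X ch ga])
      ultimately show ?thesis using L R by (simp add: H_def)
    next
      case False
      then have "(g0, \<gamma>#ps) \<notin> free_basis L G v (tgt L \<gamma>)" by (simp add: free_basis_iff)
      moreover have "ps \<noteq> [] \<and> [\<gamma>, hd ps] \<in> rels L" using False Lwalk_Cons[OF bound] ga a'' by auto
      then have "snd X \<gamma> * walk_mat X (v g0) ps = 0\<^sub>m ?dz (fst X (v g0))"
        using walk_mat_Cons_rel[OF bound X ch ga] by auto
      ultimately show ?thesis using L R uc rr by simp
    qed
  qed
qed

lemma enum_free_basis_nth:
  assumes g: "gentle L" and G: "finite G" and j: "j < card (free_basis L G v x)"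
    and b: "enum_set (free_basis L G v x) ! j = (g0, ps)"
  shows "g0 \<in> G" "Lwalk L (v g0) x ps"
    "idx_vec (enum_set (free_basis L G v x)) (\<lambda>c. if c = (g0, ps) then 1 else 0) = unit_vec (card (free_basis L G v x)) j"
proof -
  have "(g0, ps) \<in> free_basis L G v x" using j b enum_free_basis[OF g G] by (metis nth_mem)
  then show "g0 \<in> G" "Lwalk L (v g0) x ps" by (simp_all add: free_basis_iff)
  show "idx_vec (enum_set (free_basis L G v x)) (\<lambda>c. if c = (g0, ps) then 1 else 0) = unit_vec (card (free_basis L G v x)) j"
    using idx_vec_delta_unit[of "enum_set (free_basis L G v x)" j] j b enum_free_basis(2,3)[OF g G] by simp
qed

lemma free_ext_mult_unit_vec:
  assumes g: "gentle L" and G: "finite G" and X: "is_rep L X"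
    and u: "\<And>g0. g0 \<in> G \<Longrightarrow> v g0 \<in> verts L \<Longrightarrow> u g0 \<in> carrier_vec (fst X (v g0))"
    and j: "j < card (free_basis L G v x)" and b: "enum_set (free_basis L G v x) ! j = (g0, ps)"
  shows "free_ext L G v X u x *\<^sub>v unit_vec (card (free_basis L G v x)) j = walk_mat X (v g0) ps *\<^sub>v u g0"
proof -
  note gen = enum_free_basis_nth[OF g G j b]
  have bound: "bound_quiver L" using g by (simp add: gentle_def)
  have ch: "walk L (v g0) x ps" using gen(2) by (rule Lwalk_walk)
  have w: "walk_mat X (v g0) ps *\<^sub>v u g0 \<in> carrier_vec (fst X x)"
    using walk_mat_carrier[OF bound X ch] u[OF gen(1) walk_src_verts[OF bound ch]] by simp
  have mem: "(g0, ps) \<in> free_basis L G v x" using gen(1,2) by (simp add: free_basis_iff)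
  have "free_ext L G v X u x *\<^sub>v idx_vec (enum_set (free_basis L G v x)) (\<lambda>c. if c = (g0, ps) then 1 else 0)
      = idx_vec [0..<fst X x] (\<lambda>r. \<Sum>b\<in>free_basis L G v x.
          (walk_mat X (v (fst b)) (snd b) *\<^sub>v u (fst b)) $ r * (if b = (g0, ps) then 1 else 0))"
    unfolding free_ext_def using idx_mat_mult_idx_vec[OF enum_free_basis(2)[OF g G]] enum_free_basis(1)[OF g G] by simp
  also have "\<dots> = idx_vec [0..<fst X x] (\<lambda>r. (walk_mat X (v g0) ps *\<^sub>v u g0) $ r)"
    by (rule idx_vec_cong) (simp add: sum_mult_if_eq[OF finite_free_basis[OF g G]] mem)
  also have "\<dots> = walk_mat X (v g0) ps *\<^sub>v u g0" by (rule vec_as_idx_vec[OF w, symmetric])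
  finally show ?thesis unfolding gen(3) .
qed

lemma hom_free_rep_mult_unit_vec:
  fixes L :: "('v,'a,'b) bquiver_scheme" and Y :: "('v,'a,'k::field) qrep"
  assumes g: "gentle L" and G: "finite G" and Y: "is_rep L Y"
    and f: "is_hom L (free_rep L G v) Y f"
    and j: "j < card (free_basis L G v x)" and b: "enum_set (free_basis L G v x) ! j = (g0, ps)"
  shows "f x *\<^sub>v unit_vec (card (free_basis L G v x)) j = walk_mat Y (v g0) ps *\<^sub>v (f (v g0) *\<^sub>v free_gen L G v g0)"
proof -
  let ?F = "free_rep L G v :: ('v,'a,'k) qrep"
  note gen = enum_free_basis_nth[OF g G j b]
  have bound: "bound_quiver L" using g by (simp add: gentle_def)
  have F: "is_rep L ?F" by (rule free_rep_is_rep[OF g G])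
  have ch: "walk L (v g0) x ps" using gen(2) by (rule Lwalk_walk)
  have vg: "v g0 \<in> verts L" by (rule walk_src_verts[OF bound ch])
  have x: "x \<in> verts L" by (rule walk_tgt_verts[OF bound ch])
  have fx: "f x \<in> carrier_mat (fst Y x) (card (free_basis L G v x))" using f x by (simp add: is_hom_def)
  have fv: "f (v g0) \<in> carrier_mat (fst Y (v g0)) (card (free_basis L G v (v g0)))" using f vg by (simp add: is_hom_def)
  have pF: "walk_mat ?F (v g0) ps \<in> carrier_mat (card (free_basis L G v x)) (card (free_basis L G v (v g0)))"
    using walk_mat_carrier[OF bound F ch] by simp
  have pY: "walk_mat Y (v g0) ps \<in> carrier_mat (fst Y x) (fst Y (v g0))" by (rule walk_mat_carrier[OF bound Y ch])
  have e: "free_gen L G v g0 \<in> carrier_vec (card (free_basis L G v (v g0)))"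
    using enum_free_basis[OF g G] by (simp add: free_gen_def)
  have "walk_mat ?F (v g0) ps *\<^sub>v free_gen L G v g0
      = idx_vec (enum_set (free_basis L G v x)) (\<lambda>b. if b = (g0,ps) then 1 else 0)"
    by (rule free_rep_walk_mat_generator[OF g G gen(1)]) (rule gen(2))
  then have "f x *\<^sub>v unit_vec (card (free_basis L G v x)) j = f x *\<^sub>v (walk_mat ?F (v g0) ps *\<^sub>v free_gen L G v g0)"
    unfolding gen(3) by (rule arg_cong[symmetric])
  also have "\<dots> = (f x * walk_mat ?F (v g0) ps) *\<^sub>v free_gen L G v g0" by (rule assoc_mult_mat_vec[OF fx pF e, symmetric])
  also have "\<dots> = (walk_mat Y (v g0) ps * f (v g0)) *\<^sub>v free_gen L G v g0"
    using hom_walk_mat[OF bound F Y f ch] by simp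
  also have "\<dots> = walk_mat Y (v g0) ps *\<^sub>v (f (v g0) *\<^sub>v free_gen L G v g0)" by (rule assoc_mult_mat_vec[OF pY fv e])
  finally show ?thesis .
qed

lemma free_rep_projective:
  assumes g: "gentle L" and G: "finite G"
  shows "projective_rep L (free_rep L G v :: ('v,'a,'k::field) qrep)"
  unfolding projective_rep_def
proof (intro conjI allI impI)
  let ?F = "free_rep L G v :: ('v,'a,'k) qrep"
  have bound: "bound_quiver L" using g by (simp add: gentle_def)
  show "is_rep L ?F" by (rule free_rep_is_rep[OF g G])
  fix X Y :: "('v,'a,'k) qrep" and p f
  assume "is_rep L X \<and> is_rep L Y \<and> surj_hom L X Y p \<and> is_hom L ?F Y f"
  then have X: "is_rep L X" and Y: "is_rep L Y" and p: "surj_hom L X Y p" and f: "is_hom L ?F Y f" by auto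
  have p_hom: "is_hom L X Y p" using p by (simp add: surj_hom_def)
  define u where "u g0 = (SOME u. u \<in> carrier_vec (fst X (v g0)) \<and> p (v g0) *\<^sub>v u = f (v g0) *\<^sub>v free_gen L G v g0)" for g0
  have u: "u g0 \<in> carrier_vec (fst X (v g0)) \<and> p (v g0) *\<^sub>v u g0 = f (v g0) *\<^sub>v free_gen L G v g0"
    if vg: "v g0 \<in> verts L" for g0
  proof -
    have "f (v g0) \<in> carrier_mat (fst Y (v g0)) (card (free_basis L G v (v g0)))" using f vg by (simp add: is_hom_def)
    then have "f (v g0) *\<^sub>v free_gen L G v g0 \<in> carrier_vec (fst Y (v g0))"
      using enum_free_basis[OF g G] by (simp add: free_gen_def)
    then have "\<exists>w. w \<in> carrier_vec (fst X (v g0)) \<and> p (v g0) *\<^sub>v w = f (v g0) *\<^sub>v free_gen L G v g0"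
      using p vg unfolding surj_hom_def by blast
    then show ?thesis unfolding u_def by (rule someI_ex)
  qed
  let ?h = "free_ext L G v X u"
  have h: "is_hom L ?F X ?h" by (rule free_ext_hom[OF g G X]) (use u in blast)
  show "\<exists>h. is_hom L ?F X h \<and> (\<forall>x\<in>verts L. p x * h x = f x)"
  proof (intro exI[of _ ?h] conjI ballI)
    show "is_hom L ?F X ?h" by (rule h)
  next
    fix x assume x: "x \<in> verts L"
    have px: "p x \<in> carrier_mat (fst Y x) (fst X x)" using p_hom x by (simp add: is_hom_def)
    have hx: "?h x \<in> carrier_mat (fst X x) (card (free_basis L G v x))" using h x by (simp add: is_hom_def)
    show "p x * ?h x = f x"
    proof (rule mat_eq_by_unit_vecs)
      show "p x * ?h x \<in> carrier_mat (fst Y x) (card (free_basis L G v x))" using px hx by simp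
      show "f x \<in> carrier_mat (fst Y x) (card (free_basis L G v x))" using f x by (simp add: is_hom_def)
      fix j assume j: "j < card (free_basis L G v x)"
      obtain g0 ps where b: "enum_set (free_basis L G v x) ! j = (g0, ps)" by (cases "enum_set (free_basis L G v x) ! j")
      note gen = enum_free_basis_nth[OF g G j b]
      have ch: "walk L (v g0) x ps" using gen(2) by (rule Lwalk_walk)
      have vg: "v g0 \<in> verts L" by (rule walk_src_verts[OF bound ch])
      have pv: "p (v g0) \<in> carrier_mat (fst Y (v g0)) (fst X (v g0))" using p_hom vg by (simp add: is_hom_def)
      have wX: "walk_mat X (v g0) ps \<in> carrier_mat (fst X x) (fst X (v g0))" by (rule walk_mat_carrier[OF bound X ch])
      have hu: "?h x *\<^sub>v unit_vec (card (free_basis L G v x)) j = walk_mat X (v g0) ps *\<^sub>v u g0"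
        by (rule free_ext_mult_unit_vec[OF g G X _ j b]) (use u in blast)
      have "(p x * ?h x) *\<^sub>v unit_vec (card (free_basis L G v x)) j = p x *\<^sub>v (walk_mat X (v g0) ps *\<^sub>v u g0)"
        using hu px hx by simp
      also have "\<dots> = (walk_mat Y (v g0) ps * p (v g0)) *\<^sub>v u g0"
        using hom_walk_mat[OF bound X Y p_hom ch] px wX u[OF vg] by (simp flip: assoc_mult_mat_vec)
      also have "\<dots> = f x *\<^sub>v unit_vec (card (free_basis L G v x)) j"
        using hom_free_rep_mult_unit_vec[OF g G Y f j b] u[OF vg] pv walk_mat_carrier[OF bound Y ch] by simp
      finally show "(p x * ?h x) *\<^sub>v unit_vec (card (free_basis L G v x)) j = f x *\<^sub>v unit_vec (card (free_basis L G v x)) j" .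
    qed
  qed
qed

section \<open>The projective resolution\<close>

text \<open>The i-th term of the resolution of M is the direct sum of P(t w) \<otimes> M(s w) over the antipaths w
  of length i (for i = 0: the trivial ones). It is a free representation with a generator (w, j) for
  each coordinate j of M(s w), and the basis element ((w, j), p) stands for p \<otimes> w \<otimes> e_j.
  The differential moves the terminating arrow of w onto p and, with sign (-1)^i, removes the
  starting arrow \<beta> of w and applies M \<beta> to e_j; the augmentation sends ((x, []), j, p) to M(p) e_j.
  The contracting homotopy consists of linear maps only: it moves the starting arrow of p back onto
  w, except in degree 0, where it sums over all ways of splitting p at an arrow.\<close>

definition antiwalks :: "('v,'a,'b) bquiver_scheme \<Rightarrow> nat \<Rightarrow> ('v \<times> 'a list) set" where
  "antiwalks L i = {(x,ws). length ws = i \<and> (if ws = [] then x \<in> verts L else Lantipath L ws \<and> x = tgt L (hd ws))}"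

definition antiwalk_src :: "('v,'a,'b) bquiver_scheme \<Rightarrow> ('v \<times> 'a list) \<Rightarrow> 'v" where
  "antiwalk_src L w = (if snd w = [] then fst w else src L (last (snd w)))"

definition res_gens :: "('v,'a,'b) bquiver_scheme \<Rightarrow> ('v,'a,'k) qrep \<Rightarrow> nat \<Rightarrow> (('v \<times> 'a list) \<times> nat) set" where
  "res_gens L M i = Sigma (antiwalks L i) (\<lambda>w. {0..<fst M (antiwalk_src L w)})"

definition res_basis :: "('v,'a,'b) bquiver_scheme \<Rightarrow> ('v,'a,'k) qrep \<Rightarrow> nat \<Rightarrow> 'v \<Rightarrow> ((('v \<times> 'a list) \<times> nat) \<times> 'a list) set" where
  "res_basis L M i y = free_basis L (res_gens L M i) (\<lambda>g. fst (fst g)) y"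

definition res_rep :: "('v,'a,'b) bquiver_scheme \<Rightarrow> ('v,'a,'k::field) qrep \<Rightarrow> nat \<Rightarrow> ('v,'a,'k) qrep" where
  "res_rep L M i = free_rep L (res_gens L M i) (\<lambda>g. fst (fst g))"

definition basis_delta :: "((('v \<times> 'a list) \<times> nat) \<times> 'a list) \<Rightarrow> ('v \<times> 'a list) \<Rightarrow> nat \<Rightarrow> 'a list \<Rightarrow> 'k::comm_ring_1" where
  "basis_delta c w j ps = (if c = ((w,j),ps) then 1 else 0)"

fun res_diff :: "('v,'a,'b) bquiver_scheme \<Rightarrow> ('v,'a,'k::field) qrep \<Rightarrow> nat \<Rightarrow>
    ((('v \<times> 'a list) \<times> nat) \<times> 'a list) \<Rightarrow> ((('v \<times> 'a list) \<times> nat) \<times> 'a list) \<Rightarrow> 'k" where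
  "res_diff L M i c (((x,ws),j),ps) =
     basis_delta c (src L (hd ws), tl ws) j (ps @ [hd ws]) +
     (-1)^i * (\<Sum>j'\<in>{0..<fst M (tgt L (last ws))}. snd M (last ws) $$ (j',j) * basis_delta c (x, butlast ws) j' ps)"

fun res_aug :: "('v,'a,'k::field) qrep \<Rightarrow> nat \<Rightarrow> ((('v \<times> 'a list) \<times> nat) \<times> 'a list) \<Rightarrow> 'k" where
  "res_aug M j' (((x,ws),j),ps) = walk_mat M x ps $$ (j',j)"

definition aug_section :: "'v \<Rightarrow> ((('v \<times> 'a list) \<times> nat) \<times> 'a list) \<Rightarrow> nat \<Rightarrow> 'k::comm_ring_1" where
  "aug_section y c j = basis_delta c (y,[]) j []"

fun homotopy0 :: "('v,'a,'b) bquiver_scheme \<Rightarrow> ('v,'a,'k::field) qrep \<Rightarrow>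
    ((('v \<times> 'a list) \<times> nat) \<times> 'a list) \<Rightarrow> ((('v \<times> 'a list) \<times> nat) \<times> 'a list) \<Rightarrow> 'k" where
  "homotopy0 L M c (((x,ws),j),ps) = (\<Sum>k\<in>{0..<length ps}. \<Sum>j'\<in>{0..<fst M (src L (ps!k))}.
       walk_mat M x (drop (Suc k) ps) $$ (j',j) * basis_delta c (tgt L (ps!k), [ps!k]) j' (take k ps))"

fun homotopy :: "('v,'a,'b) bquiver_scheme \<Rightarrow>
    ((('v \<times> 'a list) \<times> nat) \<times> 'a list) \<Rightarrow> ((('v \<times> 'a list) \<times> nat) \<times> 'a list) \<Rightarrow> 'k::comm_ring_1" where
  "homotopy L c (((x,ws),j),ps) = (if ps = [] then 0 else basis_delta c (tgt L (last ps), last ps # ws) j (butlast ps))"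

lemma res_basis_iff: "(((x,ws),j),ps) \<in> res_basis L M i y \<longleftrightarrow> (x,ws) \<in> antiwalks L i \<and> j < fst M (antiwalk_src L (x,ws)) \<and> Lwalk L x y ps"
  by (simp add: res_basis_def free_basis_iff res_gens_def)

lemma antiwalks_iff: "(x,ws) \<in> antiwalks L i \<longleftrightarrow> length ws = i \<and> (if ws = [] then x \<in> verts L else Lantipath L ws \<and> x = tgt L (hd ws))"
  by (simp add: antiwalks_def)

lemma sum_mult_basis_delta:
  assumes "finite B"
  shows "(\<Sum>b\<in>B. F b * basis_delta b w j ps) = (if ((w,j),ps) \<in> B then F ((w,j),ps) else (0::'k::comm_ring_1))"
  using sum_mult_if_eq[OF assms, of F "((w,j),ps)" 1] by (simp add: basis_delta_def)

lemma sum_mult_res_diff: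
  assumes "finite B"
  shows "(\<Sum>b\<in>B. F b * res_diff L M i b (((x,ws),j),ps)) =
    (if (((src L (hd ws), tl ws), j), ps @ [hd ws]) \<in> B then F (((src L (hd ws), tl ws), j), ps @ [hd ws]) else 0) +
    (-1)^i * (\<Sum>j'\<in>{0..<fst M (tgt L (last ws))}. snd M (last ws) $$ (j',j) *
        (if (((x, butlast ws), j'), ps) \<in> B then F (((x, butlast ws), j'), ps) else (0::'k::field)))"
proof -
  have "(\<Sum>b\<in>B. F b * res_diff L M i b (((x,ws),j),ps)) =
        (\<Sum>b\<in>B. F b * basis_delta b (src L (hd ws), tl ws) j (ps @ [hd ws])) +
        (-1)^i * (\<Sum>j'\<in>{0..<fst M (tgt L (last ws))}. snd M (last ws) $$ (j',j) * (\<Sum>b\<in>B. F b * basis_delta b (x, butlast ws) j' ps))"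
    by (simp add: distrib_left sum.distrib sum_distrib_left mult.assoc mult.left_commute sum.swap[of _ B])
  then show ?thesis using assms by (simp add: sum_mult_basis_delta)
qed

lemma sum_mult_nested_basis_delta:
  assumes "finite B"
  shows "(\<Sum>b\<in>B. F b * (\<Sum>k\<in>K. \<Sum>j''\<in>J k. cf k j'' * basis_delta b (w k) j'' (p k))) =
    (\<Sum>k\<in>K. \<Sum>j''\<in>J k. cf k j'' * (if ((w k, j''), p k) \<in> B then F ((w k, j''), p k) else (0::'k::comm_ring_1)))"
proof -
  have "(\<Sum>b\<in>B. F b * (\<Sum>k\<in>K. \<Sum>j''\<in>J k. cf k j'' * basis_delta b (w k) j'' (p k))) =
        (\<Sum>k\<in>K. \<Sum>j''\<in>J k. cf k j'' * (\<Sum>b\<in>B. F b * basis_delta b (w k) j'' (p k)))"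
    by (simp add: sum_distrib_left sum.swap[of _ B] mult.left_commute)
  then show ?thesis by (simp add: sum_mult_basis_delta[OF assms])
qed

lemma sum_mult_homotopy:
  assumes "finite B"
  shows "(\<Sum>b\<in>B. F b * homotopy L b (((x,ws),j),ps)) =
    (if ps = [] then 0 else if (((tgt L (last ps), last ps # ws), j), butlast ps) \<in> B
       then F (((tgt L (last ps), last ps # ws), j), butlast ps) else (0::'k::comm_ring_1))"
  using assms by (simp add: sum_mult_basis_delta)

definition split_vertex :: "('v,'a,'b) bquiver_scheme \<Rightarrow> 'v \<Rightarrow> 'a list \<Rightarrow> nat \<Rightarrow> 'v" where
  "split_vertex L x ps k = (if k < length ps then tgt L (ps!k) else x)"

locale gentle_rep =
  fixes L :: "('v,'a,'b) bquiver_scheme" and M :: "('v,'a,'k::field) qrep"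
  assumes g: "gentle L" and M: "is_rep L M"
begin

lemma bound: "bound_quiver L" using g by (simp add: gentle_def)
lemma finite_arrs: "finite (arrs L)" using g by (simp add: gentle_def bound_quiver_def)
lemma finite_verts: "finite (verts L)" using g by (simp add: gentle_def bound_quiver_def)
lemma arr_verts: "\<alpha> \<in> arrs L \<Longrightarrow> src L \<alpha> \<in> verts L \<and> tgt L \<alpha> \<in> verts L"
  using bound by (simp add: bound_quiver_def)

lemma finite_antiwalks: "finite (antiwalks L i)"
proof -
  have "antiwalks L i \<subseteq> verts L \<times> {ws. set ws \<subseteq> arrs L \<and> length ws \<le> i}"
  proof
    fix w assume w: "w \<in> antiwalks L i"
    obtain x ws where xw: "w = (x,ws)" by (cases w)
    show "w \<in> verts L \<times> {ws. set ws \<subseteq> arrs L \<and> length ws \<le> i}"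
    proof (cases "ws = []")
      case True then show ?thesis using w xw by (auto simp: antiwalks_def)
    next
      case False
      then have "Lantipath L ws" "x = tgt L (hd ws)" "length ws = i" using w xw by (auto simp: antiwalks_def)
      moreover then have "hd ws \<in> arrs L" using False by (auto simp: Lantipath_def is_qpath_def)
      ultimately show ?thesis using xw arr_verts by (auto simp: Lantipath_def is_qpath_def)
    qed
  qed
  moreover have "finite (verts L \<times> {ws. set ws \<subseteq> arrs L \<and> length ws \<le> i})"
    using finite_verts finite_lists_length_le[OF finite_arrs] by simp
  ultimately show ?thesis by (rule finite_subset)
qed

lemma finite_res_gens: "finite (res_gens L M i)"
  unfolding res_gens_def using finite_antiwalks by (intro finite_SigmaI) auto

lemma finite_res_basis: "finite (res_basis L M i y)"
  unfolding res_basis_def by (rule finite_free_basis[OF g finite_res_gens])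

lemma enum_res_basis: "set (enum_set (res_basis L M i y)) = res_basis L M i y" "distinct (enum_set (res_basis L M i y))"
  "length (enum_set (res_basis L M i y)) = card (res_basis L M i y)"
  using enum_set[OF finite_res_basis] by auto

lemma res_rep_dim[simp]: "fst (res_rep L M i) y = card (res_basis L M i y)"
  by (simp add: res_rep_def res_basis_def)

lemma res_rep_arrow: "snd (res_rep L M i) \<gamma> = idx_mat (enum_set (res_basis L M i (tgt L \<gamma>))) (enum_set (res_basis L M i (src L \<gamma>))) (free_arrow_entry \<gamma>)"
  by (simp add: res_rep_def res_basis_def free_rep_arrow)

lemma res_rep_projective: "projective_rep L (res_rep L M i)"
  unfolding res_rep_def by (rule free_rep_projective[OF g finite_res_gens])

lemma antiwalks_tl:
  assumes w: "(x, ws) \<in> antiwalks L (Suc i)"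
  shows "(src L (hd ws), tl ws) \<in> antiwalks L i" "antiwalk_src L (src L (hd ws), tl ws) = antiwalk_src L (x, ws)"
    "x = tgt L (hd ws)" "hd ws \<in> arrs L" "ws \<noteq> []"
proof -
  have ne: "ws \<noteq> []" and ap: "Lantipath L ws" and x: "x = tgt L (hd ws)" and l: "length ws = Suc i"
    using w by (auto simp: antiwalks_def split: if_splits)
  obtain \<alpha> rest where ws: "ws = \<alpha> # rest" using ne by (cases ws) auto
  have A: "\<alpha> \<in> arrs L \<and> (rest = [] \<or> (Lantipath L rest \<and> src L \<alpha> = tgt L (hd rest) \<and> [\<alpha>, hd rest] \<in> rels L))"
    using ap ws Lantipath_Cons by metis
  show "(src L (hd ws), tl ws) \<in> antiwalks L i"
    using A ws l arr_verts by (auto simp: antiwalks_def)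
  show "antiwalk_src L (src L (hd ws), tl ws) = antiwalk_src L (x, ws)" using ws by (simp add: antiwalk_src_def)
  show "x = tgt L (hd ws)" by (rule x)
  show "hd ws \<in> arrs L" using A ws by simp
  show "ws \<noteq> []" by (rule ne)
qed

lemma antiwalks_butlast:
  assumes w: "(x, ws) \<in> antiwalks L (Suc i)"
  shows "(x, butlast ws) \<in> antiwalks L i" "antiwalk_src L (x, butlast ws) = tgt L (last ws)" "last ws \<in> arrs L"
proof -
  have ne: "ws \<noteq> []" and ap: "Lantipath L ws" and x: "x = tgt L (hd ws)" and l: "length ws = Suc i"
    using w by (auto simp: antiwalks_def split: if_splits)
  obtain ws' \<beta> where ws: "ws = ws' @ [\<beta>]" using ne by (metis append_butlast_last_id)
  have A: "\<beta> \<in> arrs L \<and> (ws' = [] \<or> (Lantipath L ws' \<and> src L (last ws') = tgt L \<beta> \<and> [last ws', \<beta>] \<in> rels L))"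
    using ap ws Lantipath_snoc by metis
  show "(x, butlast ws) \<in> antiwalks L i"
    using A ws l x arr_verts by (auto simp: antiwalks_def hd_append split: if_splits)
  show "antiwalk_src L (x, butlast ws) = tgt L (last ws)" using A ws x by (auto simp: antiwalk_src_def)
  show "last ws \<in> arrs L" using A ws by simp
qed

lemma antiwalks_Cons:
  assumes w: "(x, ws) \<in> antiwalks L i" and np: "Lwalk L x y ps" and ne: "ps \<noteq> []"
  shows "(tgt L (last ps), last ps # ws) \<in> antiwalks L (Suc i) \<longleftrightarrow> (ws = [] \<or> [last ps, hd ws] \<in> rels L)"
    "antiwalk_src L (tgt L (last ps), last ps # ws) = antiwalk_src L (x, ws)"
proof -
  have lp: "last ps \<in> arrs L" "src L (last ps) = x" using np ne by (auto simp: Lwalk_def walk_def is_qpath_def)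
  show "(tgt L (last ps), last ps # ws) \<in> antiwalks L (Suc i) \<longleftrightarrow> (ws = [] \<or> [last ps, hd ws] \<in> rels L)"
  proof (cases "ws = []")
    case True then show ?thesis using w lp by (simp add: antiwalks_def Lantipath_Cons)
  next
    case False
    then have "Lantipath L ws" "x = tgt L (hd ws)" "length ws = i" using w by (auto simp: antiwalks_def)
    then show ?thesis using False lp by (auto simp: antiwalks_def Lantipath_Cons)
  qed
  show "antiwalk_src L (tgt L (last ps), last ps # ws) = antiwalk_src L (x, ws)" using lp by (simp add: antiwalk_src_def)
qed

lemma basis_delta_nonzero:
  assumes c: "c \<in> res_basis L M i y" and nz: "basis_delta c w j ps \<noteq> (0::'k)"
  shows "c = ((w,j),ps)" "w \<in> antiwalks L i" "Lwalk L (fst w) y ps" "j < fst M (antiwalk_src L w)"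
proof -
  show ceq: "c = ((w,j),ps)" using nz by (simp add: basis_delta_def split: if_splits)
  obtain x ws where w: "w = (x,ws)" by (cases w)
  show "w \<in> antiwalks L i" "Lwalk L (fst w) y ps" "j < fst M (antiwalk_src L w)" using c ceq w by (auto simp: res_basis_iff)
qed

lemma basis_delta_zero:
  assumes c: "c \<in> res_basis L M i y" and nm: "\<not> Lwalk L (fst w) y ps"
  shows "basis_delta c w j ps = (0::'k)"
  using basis_delta_nonzero[OF c] nm by blast

lemma res_aug_section_entry:
  assumes y: "y \<in> verts L" and j: "j < fst M y" and j': "j' < fst M y"
  shows "(\<Sum>b\<in>res_basis L M 0 y. res_aug M j' b * aug_section y b j) = (if j' = j then 1 else (0::'k))"
proof -
  have mem: "(((y,[]),j),[]) \<in> res_basis L M 0 y" using y j by (simp add: res_basis_iff antiwalks_iff antiwalk_src_def)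
  have "(\<Sum>b\<in>res_basis L M 0 y. res_aug M j' b * aug_section y b j) = res_aug M j' (((y,[]),j),[])"
    unfolding aug_section_def using sum_mult_basis_delta[OF finite_res_basis, of "res_aug M j'"] mem by simp
  also have "\<dots> = (if j' = j then 1 else 0)" using j j' by (simp add: walk_mat_def)
  finally show ?thesis .
qed

lemma res_aug_natural_entry:
  assumes ga: "\<gamma> \<in> arrs L" and a: "a \<in> res_basis L M 0 (src L \<gamma>)" and j': "j' < fst M (tgt L \<gamma>)"
  shows "(\<Sum>b\<in>res_basis L M 0 (tgt L \<gamma>). res_aug M j' b * free_arrow_entry \<gamma> b a) = (\<Sum>j\<in>{0..<fst M (src L \<gamma>)}. snd M \<gamma> $$ (j',j) * res_aug M j a)"
proof -
  obtain x ws j ps where a': "a = (((x,ws),j),ps)" by (metis prod.collapse)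
  have am: "(x,ws) \<in> antiwalks L 0" "j < fst M (antiwalk_src L (x,ws))" "Lwalk L x (src L \<gamma>) ps" using a a' by (auto simp: res_basis_iff)
  have ch: "walk L x (src L \<gamma>) ps" using am by (simp add: Lwalk_walk)
  have Gc: "snd M \<gamma> \<in> carrier_mat (fst M (tgt L \<gamma>)) (fst M (src L \<gamma>))" using M ga by (auto simp: is_rep_def)
  have Pc: "walk_mat M x ps \<in> carrier_mat (fst M (src L \<gamma>)) (fst M x)" by (rule walk_mat_carrier[OF bound M ch])
  have jx: "j < fst M x" using am by (simp add: antiwalks_iff antiwalk_src_def)
  have "(\<Sum>b\<in>res_basis L M 0 (tgt L \<gamma>). res_aug M j' b * free_arrow_entry \<gamma> b a) = (\<Sum>b\<in>res_basis L M 0 (tgt L \<gamma>). res_aug M j' b * basis_delta b (x,ws) j (\<gamma>#ps))"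
    by (rule sum.cong) (auto simp: free_arrow_entry_def basis_delta_def a')
  also have "\<dots> = (if (((x,ws),j),\<gamma>#ps) \<in> res_basis L M 0 (tgt L \<gamma>) then walk_mat M x (\<gamma>#ps) $$ (j',j) else 0)"
    by (simp add: sum_mult_basis_delta[OF finite_res_basis])
  also have "\<dots> = (snd M \<gamma> * walk_mat M x ps) $$ (j',j)"
  proof (cases "Lwalk L x (tgt L \<gamma>) (\<gamma>#ps)")
    case True
    then have "(((x,ws),j),\<gamma>#ps) \<in> res_basis L M 0 (tgt L \<gamma>)" using am by (simp add: res_basis_iff)
    then show ?thesis using walk_mat_Cons[OF bound M ch ga] by simp
  next
    case False
    then have "ps \<noteq> [] \<and> [\<gamma>, hd ps] \<in> rels L" using Lwalk_Cons[OF bound] ga am by auto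
    then have "snd M \<gamma> * walk_mat M x ps = 0\<^sub>m (fst M (tgt L \<gamma>)) (fst M x)" using walk_mat_Cons_rel[OF bound M ch ga] by auto
    moreover have "(((x,ws),j),\<gamma>#ps) \<notin> res_basis L M 0 (tgt L \<gamma>)" using False by (simp add: res_basis_iff)
    ultimately show ?thesis using j' jx by simp
  qed
  also have "\<dots> = (\<Sum>j''\<in>{0..<fst M (src L \<gamma>)}. snd M \<gamma> $$ (j',j'') * walk_mat M x ps $$ (j'',j))"
    by (rule mat_mult_entry_sum[OF Gc Pc j' jx])
  also have "\<dots> = (\<Sum>j''\<in>{0..<fst M (src L \<gamma>)}. snd M \<gamma> $$ (j',j'') * res_aug M j'' a)"
    by (simp add: a')
  finally show ?thesis .
qed

lemma res_aug_diff_entry: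
  assumes y: "y \<in> verts L" and a: "a \<in> res_basis L M 1 y" and j': "j' < fst M y"
  shows "(\<Sum>b\<in>res_basis L M 0 y. res_aug M j' b * res_diff L M 1 b a) = (0::'k)"
proof -
  obtain x ws j ps where a': "a = (((x,ws),j),ps)" by (metis prod.collapse)
  have am: "(x,ws) \<in> antiwalks L 1" "j < fst M (antiwalk_src L (x,ws))" "Lwalk L x y ps" using a a' by (auto simp: res_basis_iff)
  obtain \<alpha> where ws: "ws = [\<alpha>]" using am(1) by (auto simp: antiwalks_iff length_Suc_conv)
  have al: "\<alpha> \<in> arrs L" "tgt L \<alpha> = x" using am(1) ws by (auto simp: antiwalks_iff Lantipath_def is_qpath_def)
  have ch: "walk L x y ps" using am by (simp add: Lwalk_walk)
  have xv: "x \<in> verts L" using al arr_verts by auto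
  have Pc: "walk_mat M x ps \<in> carrier_mat (fst M y) (fst M x)" by (rule walk_mat_carrier[OF bound M ch])
  have Ac: "snd M \<alpha> \<in> carrier_mat (fst M x) (fst M (src L \<alpha>))" using M al by (auto simp: is_rep_def)
  have jx: "j < fst M (src L \<alpha>)" using am ws by (simp add: antiwalk_src_def)
  let ?n = "fst M (tgt L (last ws))"
  have "(\<Sum>b\<in>res_basis L M 0 y. res_aug M j' b * res_diff L M 1 b a) =
    (if (((src L (hd ws), tl ws), j), ps @ [hd ws]) \<in> res_basis L M 0 y then res_aug M j' (((src L (hd ws), tl ws), j), ps @ [hd ws]) else 0) +
    (-1)^1 * (\<Sum>j''\<in>{0..<?n}. snd M (last ws) $$ (j'',j) *
        (if (((x, butlast ws), j''), ps) \<in> res_basis L M 0 y then res_aug M j' (((x, butlast ws), j''), ps) else 0))"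
    unfolding a' by (rule sum_mult_res_diff[OF finite_res_basis])
  also have "(\<Sum>j''\<in>{0..<?n}. snd M (last ws) $$ (j'',j) *
        (if (((x, butlast ws), j''), ps) \<in> res_basis L M 0 y then res_aug M j' (((x, butlast ws), j''), ps) else 0)) =
      (\<Sum>j''\<in>{0..<fst M x}. walk_mat M x ps $$ (j',j'') * snd M \<alpha> $$ (j'',j))"
  proof (rule sum.cong)
    show "{0..<?n} = {0..<fst M x}" using ws al by simp
    fix j'' assume "j'' \<in> {0..<fst M x}"
    then have "(((x, butlast ws), j''), ps) \<in> res_basis L M 0 y" using xv am(3) ws by (simp add: res_basis_iff antiwalks_iff antiwalk_src_def)
    then show "snd M (last ws) $$ (j'',j) *
        (if (((x, butlast ws), j''), ps) \<in> res_basis L M 0 y then res_aug M j' (((x, butlast ws), j''), ps) else 0) =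
        walk_mat M x ps $$ (j',j'') * snd M \<alpha> $$ (j'',j)" using ws by simp
  qed
  also have "\<dots> = (walk_mat M x ps * snd M \<alpha>) $$ (j',j)" by (rule mat_mult_entry_sum[OF Pc Ac j' jx, symmetric])
  finally have E: "(\<Sum>b\<in>res_basis L M 0 y. res_aug M j' b * res_diff L M 1 b a) =
    (if (((src L \<alpha>, []), j), ps @ [\<alpha>]) \<in> res_basis L M 0 y then walk_mat M (src L \<alpha>) (ps @ [\<alpha>]) $$ (j',j) else 0) -
    (walk_mat M x ps * snd M \<alpha>) $$ (j',j)" using ws by simp
  show ?thesis
  proof (cases "Lwalk L (src L \<alpha>) y (ps @ [\<alpha>])")
    case True
    then have "(((src L \<alpha>, []), j), ps @ [\<alpha>]) \<in> res_basis L M 0 y"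
      using jx al arr_verts by (simp add: res_basis_iff antiwalks_iff antiwalk_src_def)
    then show ?thesis using E walk_mat_snoc[OF bound M ch al] by simp
  next
    case False
    then have nr: "ps \<noteq> [] \<and> [last ps, \<alpha>] \<in> rels L" using Lwalk_snoc[OF bound am(3) al] by auto
    have "(((src L \<alpha>, []), j), ps @ [\<alpha>]) \<notin> res_basis L M 0 y" using False by (simp add: res_basis_iff)
    moreover have "walk_mat M x ps * snd M \<alpha> = 0\<^sub>m (fst M y) (fst M (src L \<alpha>))"
      using walk_mat_snoc_rel[OF bound M ch al] nr by auto
    ultimately show ?thesis using E j' jx by simp
  qed
qed

lemma res_diff_natural_entry:
  assumes ga: "\<gamma> \<in> arrs L" and c: "c \<in> res_basis L M i (tgt L \<gamma>)" and a: "a \<in> res_basis L M (Suc i) (src L \<gamma>)"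
  shows "(\<Sum>b\<in>res_basis L M (Suc i) (tgt L \<gamma>). res_diff L M (Suc i) c b * free_arrow_entry \<gamma> b a) =
         (\<Sum>b\<in>res_basis L M i (src L \<gamma>). free_arrow_entry \<gamma> c b * res_diff L M (Suc i) b a)"
proof -
  obtain x ws j ps where a': "a = (((x,ws),j),ps)" by (metis prod.collapse)
  have am: "(x,ws) \<in> antiwalks L (Suc i)" "j < fst M (antiwalk_src L (x,ws))" "Lwalk L x (src L \<gamma>) ps" using a a' by (auto simp: res_basis_iff)
  note wt = antiwalks_tl[OF am(1)] and wi = antiwalks_butlast[OF am(1)]
  let ?n = "fst M (tgt L (last ws))"
  let ?A = "basis_delta c (src L (hd ws), tl ws) j (\<gamma> # ps @ [hd ws]) :: 'k"
  let ?B = "\<Sum>j''\<in>{0..<?n}. snd M (last ws) $$ (j'',j) * (basis_delta c (x, butlast ws) j'' (\<gamma> # ps) :: 'k)"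
  let ?s = "(-1::'k)^(Suc i)"
  have L: "(\<Sum>b\<in>res_basis L M (Suc i) (tgt L \<gamma>). res_diff L M (Suc i) c b * free_arrow_entry \<gamma> b a) =
       (if (((x,ws),j),\<gamma>#ps) \<in> res_basis L M (Suc i) (tgt L \<gamma>) then ?A + ?s * ?B else 0)"
  proof -
    have "(\<Sum>b\<in>res_basis L M (Suc i) (tgt L \<gamma>). res_diff L M (Suc i) c b * free_arrow_entry \<gamma> b a) =
          (\<Sum>b\<in>res_basis L M (Suc i) (tgt L \<gamma>). res_diff L M (Suc i) c b * basis_delta b (x,ws) j (\<gamma>#ps))"
      by (rule sum.cong) (auto simp: free_arrow_entry_def basis_delta_def a')
    also have "\<dots> = (if (((x,ws),j),\<gamma>#ps) \<in> res_basis L M (Suc i) (tgt L \<gamma>) then res_diff L M (Suc i) c (((x,ws),j),\<gamma>#ps) else 0)"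
      by (rule sum_mult_basis_delta[OF finite_res_basis])
    finally show ?thesis by simp
  qed
  have R: "(\<Sum>b\<in>res_basis L M i (src L \<gamma>). free_arrow_entry \<gamma> c b * res_diff L M (Suc i) b a) =
      (if (((src L (hd ws), tl ws), j), ps @ [hd ws]) \<in> res_basis L M i (src L \<gamma>) then ?A else 0) + ?s * ?B"
  proof -
    have "(\<Sum>b\<in>res_basis L M i (src L \<gamma>). free_arrow_entry \<gamma> c b * res_diff L M (Suc i) b a) =
      (if (((src L (hd ws), tl ws), j), ps @ [hd ws]) \<in> res_basis L M i (src L \<gamma>) then free_arrow_entry \<gamma> c (((src L (hd ws), tl ws), j), ps @ [hd ws]) else 0) +
      ?s * (\<Sum>j'\<in>{0..<?n}. snd M (last ws) $$ (j',j) *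
        (if (((x, butlast ws), j'), ps) \<in> res_basis L M i (src L \<gamma>) then free_arrow_entry \<gamma> c (((x, butlast ws), j'), ps) else 0))"
      unfolding a' by (rule sum_mult_res_diff[OF finite_res_basis])
    also have "(\<Sum>j'\<in>{0..<?n}. snd M (last ws) $$ (j',j) *
        (if (((x, butlast ws), j'), ps) \<in> res_basis L M i (src L \<gamma>) then free_arrow_entry \<gamma> c (((x, butlast ws), j'), ps) else 0)) = ?B"
    proof (rule sum.cong)
      fix j' assume j': "j' \<in> {0..<?n}"
      then have "(((x, butlast ws), j'), ps) \<in> res_basis L M i (src L \<gamma>)" using wi am(3) by (simp add: res_basis_iff)
      then show "snd M (last ws) $$ (j',j) *
        (if (((x, butlast ws), j'), ps) \<in> res_basis L M i (src L \<gamma>) then free_arrow_entry \<gamma> c (((x, butlast ws), j'), ps) else 0) =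
        snd M (last ws) $$ (j',j) * basis_delta c (x, butlast ws) j' (\<gamma> # ps)" by (simp add: free_arrow_entry_def basis_delta_def)
    qed simp
    finally show ?thesis by (simp add: free_arrow_entry_def basis_delta_def)
  qed
  have mem1: "(((src L (hd ws), tl ws), j), ps @ [hd ws]) \<in> res_basis L M i (src L \<gamma>) \<longleftrightarrow>
              Lwalk L (src L (hd ws)) (src L \<gamma>) (ps @ [hd ws])"
    using wt am by (simp add: res_basis_iff)
  have xl: "(if ps = [] then src L \<gamma> else src L (last ps)) = x" using am(3) Lwalk_last_src by auto
  show ?thesis
  proof (cases "Lwalk L x (tgt L \<gamma>) (\<gamma>#ps)")
    case True
    then have "(((x,ws),j),\<gamma>#ps) \<in> res_basis L M (Suc i) (tgt L \<gamma>)" using am by (simp add: res_basis_iff)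
    moreover have "(if (((src L (hd ws), tl ws), j), ps @ [hd ws]) \<in> res_basis L M i (src L \<gamma>) then ?A else 0) = ?A"
    proof (cases "?A = 0")
      case False
      then have "Lwalk L (src L (hd ws)) (tgt L \<gamma>) (\<gamma> # ps @ [hd ws])" using basis_delta_nonzero(3)[OF c] by fastforce
      then have "Lwalk L (src L (hd ws)) (src L \<gamma>) (ps @ [hd ws])" using Lwalk_Cons[OF bound] by blast
      then show ?thesis using mem1 by simp
    qed simp
    ultimately show ?thesis using L R by simp
  next
    case False
    have A0: "?A = 0"
    proof (rule ccontr)
      assume "?A \<noteq> 0"
      then have "Lwalk L (src L (hd ws)) (tgt L \<gamma>) ((\<gamma> # ps) @ [hd ws])" using basis_delta_nonzero(3)[OF c] by fastforce
      then have "Lwalk L (src L (last (\<gamma> # ps))) (tgt L \<gamma>) (\<gamma> # ps)" using Lwalk_prefix[OF bound] by blast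
      then show False using False xl by (cases "ps = []") auto
    qed
    have B0: "?B = 0"
    proof (rule sum.neutral, rule ballI)
      fix j' show "snd M (last ws) $$ (j',j) * basis_delta c (x, butlast ws) j' (\<gamma> # ps) = (0::'k)"
        using basis_delta_zero[OF c, of "(x, butlast ws)" "\<gamma> # ps" j'] False by simp
    qed
    have "(((x,ws),j),\<gamma>#ps) \<notin> res_basis L M (Suc i) (tgt L \<gamma>)" using False by (simp add: res_basis_iff)
    then show ?thesis using L R A0 B0 by simp
  qed
qed

lemma res_diff_diff_entry:
  assumes y: "y \<in> verts L" and c: "c \<in> res_basis L M i y" and a: "a \<in> res_basis L M (Suc (Suc i)) y"
  shows "(\<Sum>b\<in>res_basis L M (Suc i) y. res_diff L M (Suc i) c b * res_diff L M (Suc (Suc i)) b a) = (0::'k)"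
proof -
  obtain x ws j ps where a': "a = (((x,ws),j),ps)" by (metis prod.collapse)
  have am: "(x,ws) \<in> antiwalks L (Suc (Suc i))" "j < fst M (antiwalk_src L (x,ws))" "Lwalk L x y ps" using a a' by (auto simp: res_basis_iff)
  note wt = antiwalks_tl[OF am(1)] and wi = antiwalks_butlast[OF am(1)]
  have lw: "length ws = Suc (Suc i)" and apw: "Lantipath L ws" using am(1) by (auto simp: antiwalks_iff split: if_splits)
  obtain \<alpha>1 \<alpha>2 r where ws: "ws = \<alpha>1 # \<alpha>2 # r" using lw by (metis length_Suc_conv)
  have "Lantipath L (\<alpha>1 # \<alpha>2 # r)" using apw ws by simp
  then have r12: "[\<alpha>1, \<alpha>2] \<in> rels L" by (subst (asm) Lantipath_Cons) simp
  have bl: "butlast ws = \<alpha>1 # butlast (\<alpha>2 # r)" "last ws = last (\<alpha>2 # r)" using ws by auto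
  have lbl: "[last (butlast ws), last ws] \<in> rels L" using Lantipath_last_two_rel[OF apw] lw by simp
  let ?n = "fst M (tgt L (last ws))"
  let ?m = "snd M (last ws)"
  let ?m' = "snd M (last (butlast ws))"
  let ?n' = "fst M (tgt L (last (butlast ws)))"
  let ?s = "(-1::'k)^(Suc i)"
  let ?X = "\<Sum>j''\<in>{0..<?n}. ?m $$ (j'',j) * (basis_delta c (src L \<alpha>1, butlast (\<alpha>2 # r)) j'' (ps @ [\<alpha>1]) :: 'k)"
  let ?Y = "\<Sum>j''\<in>{0..<?n}. ?m $$ (j'',j) * (\<Sum>j'''\<in>{0..<?n'}. ?m' $$ (j''',j'') * (basis_delta c (x, butlast (butlast ws)) j''' ps :: 'k))"
  have mem1: "(((src L (hd ws), tl ws), j), ps @ [hd ws]) \<in> res_basis L M (Suc i) y \<longleftrightarrow> Lwalk L (src L \<alpha>1) y (ps @ [\<alpha>1])"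
    using wt am ws by (simp add: res_basis_iff)
  have S: "(\<Sum>b\<in>res_basis L M (Suc i) y. res_diff L M (Suc i) c b * res_diff L M (Suc (Suc i)) b a) =
      (if Lwalk L (src L \<alpha>1) y (ps @ [\<alpha>1]) then
         basis_delta c (src L \<alpha>2, r) j (ps @ [\<alpha>1, \<alpha>2]) + ?s * ?X else 0) +
      (- ?s) * (?X + ?s * ?Y)"
  proof -
    have "(\<Sum>b\<in>res_basis L M (Suc i) y. res_diff L M (Suc i) c b * res_diff L M (Suc (Suc i)) b a) =
      (if (((src L (hd ws), tl ws), j), ps @ [hd ws]) \<in> res_basis L M (Suc i) y then res_diff L M (Suc i) c (((src L (hd ws), tl ws), j), ps @ [hd ws]) else 0) +
      (-1)^(Suc (Suc i)) * (\<Sum>j'\<in>{0..<?n}. ?m $$ (j',j) *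
        (if (((x, butlast ws), j'), ps) \<in> res_basis L M (Suc i) y then res_diff L M (Suc i) c (((x, butlast ws), j'), ps) else 0))"
      unfolding a' by (rule sum_mult_res_diff[OF finite_res_basis])
    also have "(\<Sum>j'\<in>{0..<?n}. ?m $$ (j',j) *
        (if (((x, butlast ws), j'), ps) \<in> res_basis L M (Suc i) y then res_diff L M (Suc i) c (((x, butlast ws), j'), ps) else 0)) =
        (\<Sum>j'\<in>{0..<?n}. ?m $$ (j',j) * res_diff L M (Suc i) c (((x, butlast ws), j'), ps))"
    proof (rule sum.cong)
      fix j' assume "j' \<in> {0..<?n}"
      then have "(((x, butlast ws), j'), ps) \<in> res_basis L M (Suc i) y" using wi am(3) by (simp add: res_basis_iff)
      then show "?m $$ (j',j) * (if (((x, butlast ws), j'), ps) \<in> res_basis L M (Suc i) y then res_diff L M (Suc i) c (((x, butlast ws), j'), ps) else 0) =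
          ?m $$ (j',j) * res_diff L M (Suc i) c (((x, butlast ws), j'), ps)" by simp
    qed simp
    also have "(\<Sum>j'\<in>{0..<?n}. ?m $$ (j',j) * res_diff L M (Suc i) c (((x, butlast ws), j'), ps)) = ?X + ?s * ?Y"
    proof -
      have hb: "hd (butlast ws) = \<alpha>1" "tl (butlast ws) = butlast (\<alpha>2 # r)" using bl(1) by simp_all
      have DKe: "res_diff L M (Suc i) c (((x, butlast ws), j'), ps) = basis_delta c (src L \<alpha>1, butlast (\<alpha>2 # r)) j' (ps @ [\<alpha>1]) +
          ?s * (\<Sum>j'''\<in>{0..<?n'}. ?m' $$ (j''',j') * basis_delta c (x, butlast (butlast ws)) j''' ps)" for j'
        by (simp only: res_diff.simps hb)
      show ?thesis unfolding DKe by (simp add: distrib_left sum.distrib sum_distrib_left mult.left_commute)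
    qed
    finally show ?thesis using mem1 ws by (simp add: mult.assoc)
  qed
  have T1: "basis_delta c (src L \<alpha>2, r) j (ps @ [\<alpha>1, \<alpha>2]) = (0::'k)"
  proof -
    have "\<not> Lwalk L (src L \<alpha>2) y (ps @ [\<alpha>1, \<alpha>2])" using Lwalk_snoc_not_rel[of L "src L \<alpha>2" y ps \<alpha>1 \<alpha>2] r12 by blast
    then show ?thesis using basis_delta_zero[OF c, of "(src L \<alpha>2, r)" "ps @ [\<alpha>1, \<alpha>2]" j] by simp
  qed
  have X: "(if Lwalk L (src L \<alpha>1) y (ps @ [\<alpha>1]) then ?X else 0) = ?X"
  proof (cases "Lwalk L (src L \<alpha>1) y (ps @ [\<alpha>1])")
    case False
    have "?X = 0"
    proof (rule sum.neutral, rule ballI)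
      fix j'' show "?m $$ (j'',j) * basis_delta c (src L \<alpha>1, butlast (\<alpha>2 # r)) j'' (ps @ [\<alpha>1]) = (0::'k)"
        using basis_delta_zero[OF c, of "(src L \<alpha>1, butlast (\<alpha>2 # r))" "ps @ [\<alpha>1]" j''] False by simp
    qed
    then show ?thesis by simp
  qed simp
  have Y: "?Y = 0"
  proof (rule sum_mult_sum_zero)
    have la: "last ws \<in> arrs L" "last (butlast ws) \<in> arrs L" "src L (last (butlast ws)) = tgt L (last ws)"
      using gentle_rel_shape[OF g lbl] by auto
    show "?m' \<in> carrier_mat ?n' ?n" using M la by (auto simp: is_rep_def)
    show "?m \<in> carrier_mat ?n (fst M (src L (last ws)))" using M la by (auto simp: is_rep_def)
    show "?m' * ?m = 0\<^sub>m ?n' (fst M (src L (last ws)))" by (rule rep_rel_zero[OF M lbl])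
    show "j < fst M (src L (last ws))" using am(2) ws by (simp add: antiwalk_src_def)
  qed
  have e1: "(if Lwalk L (src L \<alpha>1) y (ps @ [\<alpha>1]) then
         basis_delta c (src L \<alpha>2, r) j (ps @ [\<alpha>1, \<alpha>2]) + ?s * ?X else 0) = ?s * ?X"
  proof (cases "Lwalk L (src L \<alpha>1) y (ps @ [\<alpha>1])")
    case True then show ?thesis using T1 by simp
  next
    case False then show ?thesis using X by simp
  qed
  show ?thesis unfolding S e1 Y by (simp add: algebra_simps)
qed

lemma homotopy_entry_Suc_Suc:
  assumes y: "y \<in> verts L" and c: "c \<in> res_basis L M (Suc (Suc k)) y" and a: "a \<in> res_basis L M (Suc (Suc k)) y"
  shows "(\<Sum>b\<in>res_basis L M (Suc (Suc (Suc k))) y. res_diff L M (Suc (Suc (Suc k))) c b * homotopy L b a) +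
         (\<Sum>b\<in>res_basis L M (Suc k) y. homotopy L c b * res_diff L M (Suc (Suc k)) b a) = (if c = a then 1 else (0::'k))"
proof -
  obtain x ws j ps where a': "a = (((x,ws),j),ps)" by (metis prod.collapse)
  have am: "(x,ws) \<in> antiwalks L (Suc (Suc k))" "j < fst M (antiwalk_src L (x,ws))" "Lwalk L x y ps" using a a' by (auto simp: res_basis_iff)
  note wt = antiwalks_tl[OF am(1)] and wi = antiwalks_butlast[OF am(1)]
  have lw: "length ws = Suc (Suc k)" using am(1) by (auto simp: antiwalks_iff split: if_splits)
  obtain \<alpha>1 rest where ws: "ws = \<alpha>1 # rest" using lw by (metis length_Suc_conv)
  have bne: "butlast ws \<noteq> []" "hd (butlast ws) = \<alpha>1" using lw ws by (cases rest; auto)+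
  let ?n = "fst M (tgt L (last ws))"
  let ?m = "snd M (last ws)"
  let ?s = "(-1::'k)^(Suc (Suc k))"
  let ?Z = "\<Sum>j''\<in>{0..<?n}. ?m $$ (j'',j) * (basis_delta c (tgt L (last ps), last ps # butlast ws) j'' (butlast ps) :: 'k)"
  let ?d = "basis_delta c (x,ws) j ps :: 'k"
  have d: "?d = (if c = a then 1 else 0)" by (simp add: basis_delta_def a')
  have F: "(\<Sum>b\<in>res_basis L M (Suc (Suc (Suc k))) y. res_diff L M (Suc (Suc (Suc k))) c b * homotopy L b a) =
      (if ps = [] then 0 else if [last ps, \<alpha>1] \<in> rels L then ?d + (- ?s) * ?Z else 0)"
  proof (cases "ps = []")
    case True then show ?thesis unfolding a' sum_mult_homotopy[OF finite_res_basis] by simp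
  next
    case False
    have lp: "src L (last ps) = x" using Lwalk_last_src[OF am(3) False] .
    have mem: "(((tgt L (last ps), last ps # ws), j), butlast ps) \<in> res_basis L M (Suc (Suc (Suc k))) y \<longleftrightarrow> [last ps, \<alpha>1] \<in> rels L"
      using antiwalks_Cons[OF am(1) am(3) False] am(2) Lwalk_butlast[OF bound am(3) False] ws by (simp add: res_basis_iff)
    have DKb: "res_diff L M (Suc (Suc (Suc k))) c (((tgt L (last ps), last ps # ws), j), butlast ps) = ?d + (- ?s) * ?Z"
      using False lp ws by (simp add: snoc_eq_iff_butlast)
    show ?thesis unfolding a' sum_mult_homotopy[OF finite_res_basis] using False mem DKb by simp
  qed
  have S: "(\<Sum>b\<in>res_basis L M (Suc k) y. homotopy L c b * res_diff L M (Suc (Suc k)) b a) =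
     (if ps = [] \<or> [last ps, \<alpha>1] \<notin> rels L then ?d else 0) + ?s * (if ps = [] then 0 else ?Z)"
  proof -
    have "(\<Sum>b\<in>res_basis L M (Suc k) y. homotopy L c b * res_diff L M (Suc (Suc k)) b a) =
      (if (((src L (hd ws), tl ws), j), ps @ [hd ws]) \<in> res_basis L M (Suc k) y then homotopy L c (((src L (hd ws), tl ws), j), ps @ [hd ws]) else 0) +
      ?s * (\<Sum>j'\<in>{0..<?n}. ?m $$ (j',j) *
        (if (((x, butlast ws), j'), ps) \<in> res_basis L M (Suc k) y then homotopy L c (((x, butlast ws), j'), ps) else 0))"
      unfolding a' by (rule sum_mult_res_diff[OF finite_res_basis])
    also have "(\<Sum>j'\<in>{0..<?n}. ?m $$ (j',j) *
        (if (((x, butlast ws), j'), ps) \<in> res_basis L M (Suc k) y then homotopy L c (((x, butlast ws), j'), ps) else 0)) =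
        (if ps = [] then 0 else ?Z)"
    proof -
      have "(\<Sum>j'\<in>{0..<?n}. ?m $$ (j',j) *
        (if (((x, butlast ws), j'), ps) \<in> res_basis L M (Suc k) y then homotopy L c (((x, butlast ws), j'), ps) else 0)) =
        (\<Sum>j'\<in>{0..<?n}. ?m $$ (j',j) * homotopy L c (((x, butlast ws), j'), ps))"
      proof (rule sum.cong)
        fix j' assume "j' \<in> {0..<?n}"
        then have "(((x, butlast ws), j'), ps) \<in> res_basis L M (Suc k) y" using wi am(3) by (simp add: res_basis_iff)
        then show "?m $$ (j',j) * (if (((x, butlast ws), j'), ps) \<in> res_basis L M (Suc k) y then homotopy L c (((x, butlast ws), j'), ps) else 0) =
          ?m $$ (j',j) * homotopy L c (((x, butlast ws), j'), ps)" by simp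
      qed simp
      then show ?thesis by simp
    qed
    also have "(if (((src L (hd ws), tl ws), j), ps @ [hd ws]) \<in> res_basis L M (Suc k) y then homotopy L c (((src L (hd ws), tl ws), j), ps @ [hd ws]) else 0)
      = (if ps = [] \<or> [last ps, \<alpha>1] \<notin> rels L then ?d else 0)"
    proof -
      have "(((src L (hd ws), tl ws), j), ps @ [hd ws]) \<in> res_basis L M (Suc k) y \<longleftrightarrow> Lwalk L (src L \<alpha>1) y (ps @ [\<alpha>1])"
        using wt am ws by (simp add: res_basis_iff)
      also have "\<dots> \<longleftrightarrow> (ps = [] \<or> [last ps, \<alpha>1] \<notin> rels L)"
        using Lwalk_snoc[OF bound am(3)] wt ws by simp
      finally have mem: "(((src L (hd ws), tl ws), j), ps @ [hd ws]) \<in> res_basis L M (Suc k) y \<longleftrightarrow> (ps = [] \<or> [last ps, \<alpha>1] \<notin> rels L)" .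
      have "homotopy L c (((src L (hd ws), tl ws), j), ps @ [hd ws]) = ?d" using wt ws by simp
      then show ?thesis using mem by simp
    qed
    finally show ?thesis .
  qed
  have Z0: "?Z = 0" if "ps \<noteq> []" "[last ps, \<alpha>1] \<notin> rels L"
  proof (rule sum.neutral, rule ballI)
    fix j''
    show "?m $$ (j'',j) * basis_delta c (tgt L (last ps), last ps # butlast ws) j'' (butlast ps) = (0::'k)"
    proof (cases "basis_delta c (tgt L (last ps), last ps # butlast ws) j'' (butlast ps) = (0::'k)")
      case False
      then have "(tgt L (last ps), last ps # butlast ws) \<in> antiwalks L (Suc (Suc k))" using basis_delta_nonzero(2)[OF c] by blast
      then have "Lantipath L (last ps # butlast ws)" by (simp add: antiwalks_iff)
      then have "[last ps, \<alpha>1] \<in> rels L" using bne by (simp add: Lantipath_Cons)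
      then show ?thesis using that by simp
    qed simp
  qed
  show ?thesis
  proof (cases "ps = []")
    case True then show ?thesis using F S d by simp
  next
    case False
    show ?thesis
    proof (cases "[last ps, \<alpha>1] \<in> rels L")
      case True then show ?thesis using F S d False by (simp add: algebra_simps)
    next
      case nr: False then show ?thesis using F S d False Z0 by simp
    qed
  qed
qed

text \<open>The c-coordinate of the degree 0 homotopy applied to p \<otimes> M(\<alpha>) e_j.\<close>

definition homotopy0_arrow :: "((('v \<times> 'a list) \<times> nat) \<times> 'a list) \<Rightarrow> 'v \<Rightarrow> 'a \<Rightarrow> nat \<Rightarrow> 'a list \<Rightarrow> 'k" where
  "homotopy0_arrow c x \<alpha> j ps = (\<Sum>k\<in>{0..<length ps}. \<Sum>j'\<in>{0..<fst M (src L (ps!k))}.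
       (walk_mat M x (drop (Suc k) ps) * snd M \<alpha>) $$ (j',j) * basis_delta c (tgt L (ps!k), [ps!k]) j' (take k ps))"

lemma homotopy0_snoc:
  assumes ch: "walk L x y ps" and al: "\<alpha> \<in> arrs L" "tgt L \<alpha> = x" and j: "j < fst M (src L \<alpha>)"
  shows "homotopy0 L M c (((src L \<alpha>, ws), j), ps @ [\<alpha>]) = basis_delta c (x, [\<alpha>]) j ps + homotopy0_arrow c x \<alpha> j ps"
proof -
  have last: "(\<Sum>j'\<in>{0..<fst M (src L ((ps @ [\<alpha>]) ! length ps))}.
       walk_mat M (src L \<alpha>) (drop (Suc (length ps)) (ps @ [\<alpha>])) $$ (j',j) *
       basis_delta c (tgt L ((ps @ [\<alpha>]) ! length ps), [(ps @ [\<alpha>]) ! length ps]) j' (take (length ps) (ps @ [\<alpha>])))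
     = basis_delta c (x, [\<alpha>]) j ps"
    using sum_one_mat_col[OF j, of "\<lambda>j'. basis_delta c (tgt L \<alpha>, [\<alpha>]) j' ps"] al by (simp add: walk_mat_def)
  have rest: "(\<Sum>k\<in>{0..<length ps}. \<Sum>j'\<in>{0..<fst M (src L ((ps @ [\<alpha>]) ! k))}.
       walk_mat M (src L \<alpha>) (drop (Suc k) (ps @ [\<alpha>])) $$ (j',j) *
       basis_delta c (tgt L ((ps @ [\<alpha>]) ! k), [(ps @ [\<alpha>]) ! k]) j' (take k (ps @ [\<alpha>]))) =
     (\<Sum>k\<in>{0..<length ps}. \<Sum>j'\<in>{0..<fst M (src L (ps!k))}.
       (walk_mat M x (drop (Suc k) ps) * snd M \<alpha>) $$ (j',j) * basis_delta c (tgt L (ps!k), [ps!k]) j' (take k ps))"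
  proof (rule sum.cong)
    fix k assume k: "k \<in> {0..<length ps}"
    then have k': "k < length ps" by simp
    have "walk_mat M (src L \<alpha>) (drop (Suc k) ps @ [\<alpha>]) = walk_mat M x (drop (Suc k) ps) * snd M \<alpha>"
      by (rule walk_mat_snoc[OF bound M walk_drop[OF bound ch k'] al])
    then show "(\<Sum>j'\<in>{0..<fst M (src L ((ps @ [\<alpha>]) ! k))}.
       walk_mat M (src L \<alpha>) (drop (Suc k) (ps @ [\<alpha>])) $$ (j',j) *
       basis_delta c (tgt L ((ps @ [\<alpha>]) ! k), [(ps @ [\<alpha>]) ! k]) j' (take k (ps @ [\<alpha>]))) =
      (\<Sum>j'\<in>{0..<fst M (src L (ps!k))}.
       (walk_mat M x (drop (Suc k) ps) * snd M \<alpha>) $$ (j',j) * basis_delta c (tgt L (ps!k), [ps!k]) j' (take k ps))"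
      using k' by (simp add: nth_append)
  qed simp
  show ?thesis
    unfolding homotopy0.simps homotopy0_arrow_def length_append_singleton sum.atLeast0_lessThan_Suc last rest by simp
qed

lemma sum_arrow_homotopy0:
  assumes ch: "walk L x y ps" and al: "\<alpha> \<in> arrs L" "tgt L \<alpha> = x" and jx: "j < fst M (src L \<alpha>)"
  shows "(\<Sum>j''\<in>{0..<fst M x}. snd M \<alpha> $$ (j'',j) * homotopy0 L M c (((x, ws), j''), ps)) = homotopy0_arrow c x \<alpha> j ps"
proof -
  have Ac: "snd M \<alpha> \<in> carrier_mat (fst M x) (fst M (src L \<alpha>))" using M al by (auto simp: is_rep_def)
  have "(\<Sum>j''\<in>{0..<fst M x}. snd M \<alpha> $$ (j'',j) * homotopy0 L M c (((x, ws), j''), ps)) =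
    (\<Sum>j''\<in>{0..<fst M x}. snd M \<alpha> $$ (j'',j) * (\<Sum>k\<in>{0..<length ps}. \<Sum>j'\<in>{0..<fst M (src L (ps!k))}.
      walk_mat M x (drop (Suc k) ps) $$ (j',j'') * basis_delta c (tgt L (ps!k), [ps!k]) j' (take k ps)))"
    by simp
  also have "\<dots> = (\<Sum>k\<in>{0..<length ps}. \<Sum>j'\<in>{0..<fst M (src L (ps!k))}.
      (\<Sum>j''\<in>{0..<fst M x}. walk_mat M x (drop (Suc k) ps) $$ (j',j'') * snd M \<alpha> $$ (j'',j)) *
        basis_delta c (tgt L (ps!k), [ps!k]) j' (take k ps))"
    by (simp add: sum_distrib_left sum_distrib_right mult.assoc mult.left_commute sum.swap[of _ "{0..<fst M x}"])
  also have "\<dots> = homotopy0_arrow c x \<alpha> j ps"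
    unfolding homotopy0_arrow_def
  proof (intro sum.cong refl)
    fix k j' assume k: "k \<in> {0..<length ps}" and j': "j' \<in> {0..<fst M (src L (ps!k))}"
    have Pc: "walk_mat M x (drop (Suc k) ps) \<in> carrier_mat (fst M (src L (ps!k))) (fst M x)"
      using walk_mat_carrier[OF bound M walk_drop[OF bound ch]] k by simp
    have "(\<Sum>j''\<in>{0..<fst M x}. walk_mat M x (drop (Suc k) ps) $$ (j',j'') * snd M \<alpha> $$ (j'',j)) =
          (walk_mat M x (drop (Suc k) ps) * snd M \<alpha>) $$ (j',j)"
      using mat_mult_entry_sum[OF Pc Ac, of j' j] j' jx by simp
    then show "(\<Sum>j''\<in>{0..<fst M x}. walk_mat M x (drop (Suc k) ps) $$ (j',j'') * snd M \<alpha> $$ (j'',j)) *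
        basis_delta c (tgt L (ps!k), [ps!k]) j' (take k ps) =
        (walk_mat M x (drop (Suc k) ps) * snd M \<alpha>) $$ (j',j) * basis_delta c (tgt L (ps!k), [ps!k]) j' (take k ps)" by simp
  qed
  finally show ?thesis .
qed

text \<open>When the last arrow of p and \<alpha> form a relation, only the splitting of p at its last arrow
  survives.\<close>

lemma homotopy0_arrow_rel:
  assumes p: "Lwalk L x y ps" and al: "\<alpha> \<in> arrs L" "tgt L \<alpha> = x" and jx: "j < fst M (src L \<alpha>)"
    and ne: "ps \<noteq> []" and r: "[last ps, \<alpha>] \<in> rels L"
  shows "homotopy0_arrow c x \<alpha> j ps = (\<Sum>j''\<in>{0..<fst M (tgt L \<alpha>)}. snd M \<alpha> $$ (j'',j) * basis_delta c (tgt L (last ps), [last ps]) j'' (butlast ps))"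
proof -
  have ch: "walk L x y ps" using p by (rule Lwalk_walk)
  have Ac: "snd M \<alpha> \<in> carrier_mat (fst M x) (fst M (src L \<alpha>))" using M al by (auto simp: is_rep_def)
  obtain m where m: "length ps = Suc m" using ne by (cases ps) auto
  have "homotopy0_arrow c x \<alpha> j ps = (\<Sum>k\<in>{0..<m}. \<Sum>j'\<in>{0..<fst M (src L (ps!k))}.
     (walk_mat M x (drop (Suc k) ps) * snd M \<alpha>) $$ (j',j) * basis_delta c (tgt L (ps!k), [ps!k]) j' (take k ps)) +
     (\<Sum>j'\<in>{0..<fst M (src L (ps!m))}.
     (walk_mat M x (drop (Suc m) ps) * snd M \<alpha>) $$ (j',j) * basis_delta c (tgt L (ps!m), [ps!m]) j' (take m ps))"
    unfolding homotopy0_arrow_def m by (rule sum.atLeast0_lessThan_Suc)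
  also have "(\<Sum>k\<in>{0..<m}. \<Sum>j'\<in>{0..<fst M (src L (ps!k))}.
     (walk_mat M x (drop (Suc k) ps) * snd M \<alpha>) $$ (j',j) * basis_delta c (tgt L (ps!k), [ps!k]) j' (take k ps)) = 0"
  proof (intro sum.neutral ballI)
    fix k j' assume k: "k \<in> {0..<m}" and j': "j' \<in> {0..<fst M (src L (ps!k))}"
    have k': "k < length ps" using k m by simp
    have ne': "drop (Suc k) ps \<noteq> []" using k m by simp
    have ld: "last (drop (Suc k) ps) = last ps" using ne' by (simp add: last_drop)
    have "walk_mat M x (drop (Suc k) ps) * snd M \<alpha> = 0\<^sub>m (fst M (src L (ps!k))) (fst M (src L \<alpha>))"
      using walk_mat_snoc_rel[OF bound M walk_drop[OF bound ch k'] al ne'] r ld by simp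
    then show "(walk_mat M x (drop (Suc k) ps) * snd M \<alpha>) $$ (j',j) * basis_delta c (tgt L (ps!k), [ps!k]) j' (take k ps) = (0::'k)"
      using j' jx by simp
  qed
  also have "(\<Sum>j'\<in>{0..<fst M (src L (ps!m))}.
     (walk_mat M x (drop (Suc m) ps) * snd M \<alpha>) $$ (j',j) * basis_delta c (tgt L (ps!m), [ps!m]) j' (take m ps)) = (\<Sum>j''\<in>{0..<fst M (tgt L \<alpha>)}. snd M \<alpha> $$ (j'',j) * basis_delta c (tgt L (last ps), [last ps]) j'' (butlast ps))"
  proof -
    have pl: "ps!m = last ps" "take m ps = butlast ps" "drop (Suc m) ps = []" using m ne
      by (auto simp: last_conv_nth butlast_conv_take)
    have sx: "src L (last ps) = x" using Lwalk_last_src[OF p ne] .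
    have "walk_mat M x (drop (Suc m) ps) * snd M \<alpha> = snd M \<alpha>" using pl(3) Ac by (simp add: walk_mat_def)
    then show ?thesis using pl sx al by simp
  qed
  finally show ?thesis by simp
qed

lemma homotopy_entry_1:
  assumes y: "y \<in> verts L" and c: "c \<in> res_basis L M 1 y" and a: "a \<in> res_basis L M 1 y"
  shows "(\<Sum>b\<in>res_basis L M 2 y. res_diff L M 2 c b * homotopy L b a) +
         (\<Sum>b\<in>res_basis L M 0 y. homotopy0 L M c b * res_diff L M 1 b a) = (if c = a then 1 else (0::'k))"
proof -
  obtain x ws j ps where a': "a = (((x,ws),j),ps)" by (metis prod.collapse)
  have am: "(x,ws) \<in> antiwalks L 1" "j < fst M (antiwalk_src L (x,ws))" "Lwalk L x y ps" using a a' by (auto simp: res_basis_iff)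
  obtain \<alpha> where ws: "ws = [\<alpha>]" using am(1) by (auto simp: antiwalks_iff length_Suc_conv)
  have al: "\<alpha> \<in> arrs L" "tgt L \<alpha> = x" using am(1) ws by (auto simp: antiwalks_iff Lantipath_def is_qpath_def)
  have xv: "x \<in> verts L" using al arr_verts by auto
  have jx: "j < fst M (src L \<alpha>)" using am(2) ws by (simp add: antiwalk_src_def)
  have ch: "walk L x y ps" using am(3) by (simp add: Lwalk_walk)
  have Ac: "snd M \<alpha> \<in> carrier_mat (fst M x) (fst M (src L \<alpha>))" using M al by (auto simp: is_rep_def)
  let ?d = "basis_delta c (x,ws) j ps :: 'k"
  let ?Z = "\<Sum>j''\<in>{0..<fst M (tgt L \<alpha>)}. snd M \<alpha> $$ (j'',j) * (basis_delta c (tgt L (last ps), [last ps]) j'' (butlast ps) :: 'k)"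
  let ?Y = "homotopy0_arrow c x \<alpha> j ps"
  have d: "?d = (if c = a then 1 else 0)" by (simp add: basis_delta_def a')
  have F: "(\<Sum>b\<in>res_basis L M 2 y. res_diff L M 2 c b * homotopy L b a) =
      (if ps = [] then 0 else if [last ps, \<alpha>] \<in> rels L then ?d + ?Z else 0)"
  proof (cases "ps = []")
    case True then show ?thesis unfolding a' sum_mult_homotopy[OF finite_res_basis] by simp
  next
    case False
    have lp: "src L (last ps) = x" using Lwalk_last_src[OF am(3) False] .
    have mem: "(((tgt L (last ps), last ps # ws), j), butlast ps) \<in> res_basis L M 2 y \<longleftrightarrow> [last ps, \<alpha>] \<in> rels L"
      using antiwalks_Cons[OF am(1) am(3) False] am(2) Lwalk_butlast[OF bound am(3) False] ws by (simp add: res_basis_iff numeral_2_eq_2)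
    have DKb: "res_diff L M 2 c (((tgt L (last ps), last ps # ws), j), butlast ps) = ?d + ?Z"
      using False lp ws by (simp add: snoc_eq_iff_butlast)
    show ?thesis unfolding a' sum_mult_homotopy[OF finite_res_basis] using False mem DKb by simp
  qed
  have S: "(\<Sum>b\<in>res_basis L M 0 y. homotopy0 L M c b * res_diff L M 1 b a) =
      (if ps = [] \<or> [last ps, \<alpha>] \<notin> rels L then ?d + ?Y else 0) - ?Y"
  proof -
    have "(\<Sum>b\<in>res_basis L M 0 y. homotopy0 L M c b * res_diff L M 1 b a) =
      (if (((src L (hd ws), tl ws), j), ps @ [hd ws]) \<in> res_basis L M 0 y then homotopy0 L M c (((src L (hd ws), tl ws), j), ps @ [hd ws]) else 0) +
      (-1)^1 * (\<Sum>j'\<in>{0..<fst M (tgt L (last ws))}. snd M (last ws) $$ (j',j) *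
        (if (((x, butlast ws), j'), ps) \<in> res_basis L M 0 y then homotopy0 L M c (((x, butlast ws), j'), ps) else 0))"
      unfolding a' by (rule sum_mult_res_diff[OF finite_res_basis])
    also have "(\<Sum>j'\<in>{0..<fst M (tgt L (last ws))}. snd M (last ws) $$ (j',j) *
        (if (((x, butlast ws), j'), ps) \<in> res_basis L M 0 y then homotopy0 L M c (((x, butlast ws), j'), ps) else 0)) = ?Y"
    proof -
      have "(\<Sum>j'\<in>{0..<fst M (tgt L (last ws))}. snd M (last ws) $$ (j',j) *
        (if (((x, butlast ws), j'), ps) \<in> res_basis L M 0 y then homotopy0 L M c (((x, butlast ws), j'), ps) else 0)) =
        (\<Sum>j''\<in>{0..<fst M x}. snd M \<alpha> $$ (j'',j) * homotopy0 L M c (((x, butlast ws), j''), ps))"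
      proof (rule sum.cong)
        show "{0..<fst M (tgt L (last ws))} = {0..<fst M x}" using ws al by simp
        fix j'' assume "j'' \<in> {0..<fst M x}"
        then have "(((x, butlast ws), j''), ps) \<in> res_basis L M 0 y"
          using xv am(3) ws by (simp add: res_basis_iff antiwalks_iff antiwalk_src_def)
        then show "snd M (last ws) $$ (j'',j) *
          (if (((x, butlast ws), j''), ps) \<in> res_basis L M 0 y then homotopy0 L M c (((x, butlast ws), j''), ps) else 0) =
          snd M \<alpha> $$ (j'',j) * homotopy0 L M c (((x, butlast ws), j''), ps)"
          using ws by simp
      qed
      then show ?thesis using sum_arrow_homotopy0[OF ch al jx] by simp
    qed
    also have "(if (((src L (hd ws), tl ws), j), ps @ [hd ws]) \<in> res_basis L M 0 y then homotopy0 L M c (((src L (hd ws), tl ws), j), ps @ [hd ws]) else 0)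
       = (if ps = [] \<or> [last ps, \<alpha>] \<notin> rels L then ?d + ?Y else 0)"
    proof -
      have "(((src L (hd ws), tl ws), j), ps @ [hd ws]) \<in> res_basis L M 0 y \<longleftrightarrow> Lwalk L (src L \<alpha>) y (ps @ [\<alpha>])"
        using ws jx al arr_verts by (simp add: res_basis_iff antiwalks_iff antiwalk_src_def)
      also have "\<dots> \<longleftrightarrow> (ps = [] \<or> [last ps, \<alpha>] \<notin> rels L)" using Lwalk_snoc[OF bound am(3) al] .
      finally have mem: "(((src L (hd ws), tl ws), j), ps @ [hd ws]) \<in> res_basis L M 0 y \<longleftrightarrow> (ps = [] \<or> [last ps, \<alpha>] \<notin> rels L)" .
      have "homotopy0 L M c (((src L (hd ws), tl ws), j), ps @ [hd ws]) = ?d + ?Y"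
        using homotopy0_snoc[OF ch al jx, of c "[]"] ws by simp
      then show ?thesis using mem by simp
    qed
    finally show ?thesis by simp
  qed
  show ?thesis
  proof (cases "ps = [] \<or> [last ps, \<alpha>] \<notin> rels L")
    case True then show ?thesis using F S d by auto
  next
    case False
    then have ne: "ps \<noteq> []" and r: "[last ps, \<alpha>] \<in> rels L" by auto
    show ?thesis using F S d homotopy0_arrow_rel[OF am(3) al jx ne r] ne r by simp
  qed
qed

text \<open>The degree 0 homotopy splits p at each of its arrows; applying the differential, the
  contributions of consecutive splittings telescope. The term split_term c x j p k is the
  c-coordinate of (first k arrows of p) \<otimes> M(rest of p) e_j.\<close>

definition split_term :: "((('v \<times> 'a list) \<times> nat) \<times> 'a list) \<Rightarrow> 'v \<Rightarrow> nat \<Rightarrow> 'a list \<Rightarrow> nat \<Rightarrow> 'k" where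
  "split_term c x j ps k = (\<Sum>j''\<in>{0..<fst M (split_vertex L x ps k)}.
     walk_mat M x (drop k ps) $$ (j'',j) * basis_delta c (split_vertex L x ps k, []) j'' (take k ps))"

lemma res_diff_homotopy0_term:
  assumes p: "Lwalk L x y ps" and jx: "j < fst M x" and k: "k < length ps"
  shows "(\<Sum>j''\<in>{0..<fst M (src L (ps!k))}.
      walk_mat M x (drop (Suc k) ps) $$ (j'',j) * res_diff L M 1 c (((tgt L (ps!k), [ps!k]), j''), take k ps))
    = split_term c x j ps (Suc k) - split_term c x j ps k"
proof -
  have ch: "walk L x y ps" using p by (rule Lwalk_walk)
  have pk: "ps!k \<in> arrs L" using p k by (auto simp: Lwalk_def walk_def is_qpath_def)
  let ?Mk = "snd M (ps!k)"
  let ?P = "walk_mat M x (drop (Suc k) ps)"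
  have Mk: "?Mk \<in> carrier_mat (fst M (tgt L (ps!k))) (fst M (src L (ps!k)))" using M pk by (auto simp: is_rep_def)
  have Pc: "?P \<in> carrier_mat (fst M (src L (ps!k))) (fst M x)"
    by (rule walk_mat_carrier[OF bound M walk_drop[OF bound ch k]])
  have vs: "split_vertex L x ps (Suc k) = src L (ps!k)"
  proof (cases "Suc k < length ps")
    case True
    then have "src L (ps!k) = tgt L (ps!Suc k)" using p by (auto simp: Lwalk_def walk_def is_qpath_def)
    then show ?thesis using True by (simp add: split_vertex_def)
  next
    case False
    then have "Suc k = length ps" using k by simp
    then have "ps!k = last ps" by (metis diff_Suc_1 last_conv_nth list.size(3) nat.distinct(1))
    moreover have "ps \<noteq> []" using k by auto
    ultimately show ?thesis using Lwalk_last_src[OF p] False k by (auto simp: split_vertex_def)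
  qed
  have vk: "split_vertex L x ps k = tgt L (ps!k)" using k by (simp add: split_vertex_def)
  have tk: "take k ps @ [ps!k] = take (Suc k) ps" using k by (simp add: take_Suc_conv_app_nth)
  have DKe: "res_diff L M 1 c (((tgt L (ps!k), [ps!k]), j''), take k ps) =
      basis_delta c (src L (ps!k), []) j'' (take (Suc k) ps) -
      (\<Sum>j'''\<in>{0..<fst M (tgt L (ps!k))}. ?Mk $$ (j''',j'') * basis_delta c (tgt L (ps!k), []) j''' (take k ps))" for j''
    using tk by simp
  have "(\<Sum>j''\<in>{0..<fst M (src L (ps!k))}. ?P $$ (j'',j) * res_diff L M 1 c (((tgt L (ps!k), [ps!k]), j''), take k ps)) =
    (\<Sum>j''\<in>{0..<fst M (src L (ps!k))}. ?P $$ (j'',j) * basis_delta c (src L (ps!k), []) j'' (take (Suc k) ps)) -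
    (\<Sum>j'''\<in>{0..<fst M (tgt L (ps!k))}. (\<Sum>j''\<in>{0..<fst M (src L (ps!k))}. ?Mk $$ (j''',j'') * ?P $$ (j'',j)) *
         basis_delta c (tgt L (ps!k), []) j''' (take k ps))"
    unfolding DKe
    by (simp add: right_diff_distrib sum_subtractf sum_distrib_left sum_distrib_right sum.swap[of _ "{0..<fst M (src L (ps!k))}"] mult.left_commute mult.assoc)
  also have "(\<Sum>j''\<in>{0..<fst M (src L (ps!k))}. ?P $$ (j'',j) * basis_delta c (src L (ps!k), []) j'' (take (Suc k) ps)) = split_term c x j ps (Suc k)"
    unfolding split_term_def vs by simp
  also have "(\<Sum>j'''\<in>{0..<fst M (tgt L (ps!k))}. (\<Sum>j''\<in>{0..<fst M (src L (ps!k))}. ?Mk $$ (j''',j'') * ?P $$ (j'',j)) *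
         basis_delta c (tgt L (ps!k), []) j''' (take k ps)) = split_term c x j ps k"
    unfolding split_term_def vk
  proof (intro sum.cong refl)
    fix j''' assume j''': "j''' \<in> {0..<fst M (tgt L (ps!k))}"
    have "(\<Sum>j''\<in>{0..<fst M (src L (ps!k))}. ?Mk $$ (j''',j'') * ?P $$ (j'',j)) = (?Mk * ?P) $$ (j''',j)"
      using mat_mult_entry_sum[OF Mk Pc, of j''' j] j''' jx by simp
    also have "?Mk * ?P = walk_mat M x (drop k ps)" using walk_mat_drop[OF bound M ch k] by simp
    finally show "(\<Sum>j''\<in>{0..<fst M (src L (ps!k))}. ?Mk $$ (j''',j'') * ?P $$ (j'',j)) *
         basis_delta c (tgt L (ps!k), []) j''' (take k ps) = walk_mat M x (drop k ps) $$ (j''',j) * basis_delta c (tgt L (ps!k), []) j''' (take k ps)"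
      by simp
  qed
  finally show ?thesis .
qed

lemma homotopy_entry_0:
  assumes y: "y \<in> verts L" and c: "c \<in> res_basis L M 0 y" and a: "a \<in> res_basis L M 0 y"
  shows "(\<Sum>b\<in>res_basis L M 1 y. res_diff L M 1 c b * homotopy0 L M b a) +
         (\<Sum>j'\<in>{0..<fst M y}. aug_section y c j' * res_aug M j' a) = (if c = a then 1 else (0::'k))"
proof -
  obtain x ws j ps where a': "a = (((x,ws),j),ps)" by (metis prod.collapse)
  have am: "(x,ws) \<in> antiwalks L 0" "j < fst M (antiwalk_src L (x,ws))" "Lwalk L x y ps" using a a' by (auto simp: res_basis_iff)
  have ws: "ws = []" and xv: "x \<in> verts L" using am(1) by (auto simp: antiwalks_iff)
  have jx: "j < fst M x" using am(2) ws by (simp add: antiwalk_src_def)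
  have ch: "walk L x y ps" using am(3) by (simp add: Lwalk_walk)
  let ?F = "split_term c x j ps"
  have pk: "ps!k \<in> arrs L" if "k < length ps" for k using am(3) that by (auto simp: Lwalk_def walk_def is_qpath_def)
  have A: "(\<Sum>b\<in>res_basis L M 1 y. res_diff L M 1 c b * homotopy0 L M b a) =
     (\<Sum>k\<in>{0..<length ps}. \<Sum>j''\<in>{0..<fst M (src L (ps!k))}.
        walk_mat M x (drop (Suc k) ps) $$ (j'',j) * res_diff L M 1 c (((tgt L (ps!k), [ps!k]), j''), take k ps))"
  proof -
    have "(\<Sum>b\<in>res_basis L M 1 y. res_diff L M 1 c b * homotopy0 L M b a) =
      (\<Sum>k\<in>{0..<length ps}. \<Sum>j''\<in>{0..<fst M (src L (ps!k))}. walk_mat M x (drop (Suc k) ps) $$ (j'',j) *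
        (if (((tgt L (ps!k), [ps!k]), j''), take k ps) \<in> res_basis L M 1 y then res_diff L M 1 c (((tgt L (ps!k), [ps!k]), j''), take k ps) else 0))"
      unfolding a' homotopy0.simps by (rule sum_mult_nested_basis_delta[OF finite_res_basis])
    also have "\<dots> = (\<Sum>k\<in>{0..<length ps}. \<Sum>j''\<in>{0..<fst M (src L (ps!k))}.
        walk_mat M x (drop (Suc k) ps) $$ (j'',j) * res_diff L M 1 c (((tgt L (ps!k), [ps!k]), j''), take k ps))"
    proof (intro sum.cong refl)
      fix k j'' assume k: "k \<in> {0..<length ps}" and j'': "j'' \<in> {0..<fst M (src L (ps!k))}"
      have "(((tgt L (ps!k), [ps!k]), j''), take k ps) \<in> res_basis L M 1 y"
        using k j'' pk Lwalk_take[OF bound am(3)] by (simp add: res_basis_iff antiwalks_iff antiwalk_src_def Lantipath_def is_qpath_def)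
      then show "walk_mat M x (drop (Suc k) ps) $$ (j'',j) *
        (if (((tgt L (ps!k), [ps!k]), j''), take k ps) \<in> res_basis L M 1 y then res_diff L M 1 c (((tgt L (ps!k), [ps!k]), j''), take k ps) else 0) =
        walk_mat M x (drop (Suc k) ps) $$ (j'',j) * res_diff L M 1 c (((tgt L (ps!k), [ps!k]), j''), take k ps)" by simp
    qed
    finally show ?thesis .
  qed
  have C: "(\<Sum>j'\<in>{0..<fst M y}. aug_section y c j' * res_aug M j' a) = ?F 0"
  proof -
    have v0: "split_vertex L x ps 0 = y"
    proof (cases "ps = []")
      case True then show ?thesis using am(3) by (simp add: split_vertex_def)
    next
      case False
      then have "tgt L (hd ps) = y" using am(3) by (auto simp: Lwalk_def walk_def)
      then show ?thesis using False by (simp add: split_vertex_def hd_conv_nth)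
    qed
    show ?thesis unfolding split_term_def v0 aug_section_def a' by (simp add: mult.commute)
  qed
  have D: "?F (length ps) = (if c = a then 1 else 0)"
  proof -
    have "?F (length ps) = (\<Sum>j''\<in>{0..<fst M x}. 1\<^sub>m (fst M x) $$ (j'',j) * basis_delta c (x, []) j'' ps)"
      by (simp add: split_term_def split_vertex_def walk_mat_def)
    also have "\<dots> = basis_delta c (x, []) j ps" by (rule sum_one_mat_col[OF jx])
    finally show ?thesis by (simp add: basis_delta_def a' ws)
  qed
  have "(\<Sum>b\<in>res_basis L M 1 y. res_diff L M 1 c b * homotopy0 L M b a) = (\<Sum>k<length ps. ?F (Suc k) - ?F k)"
    unfolding A using res_diff_homotopy0_term[OF am(3) jx] by (simp add: atLeast0LessThan)
  also have "\<dots> = ?F (length ps) - ?F 0" by (rule sum_lessThan_telescope)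
  finally show ?thesis using C D by simp
qed

definition aug_mat :: "'v \<Rightarrow> 'k mat" where
  "aug_mat y = idx_mat [0..<fst M y] (enum_set (res_basis L M 0 y)) (res_aug M)"
definition diff_mat :: "nat \<Rightarrow> 'v \<Rightarrow> 'k mat" where
  "diff_mat i y = idx_mat (enum_set (res_basis L M (i-1) y)) (enum_set (res_basis L M i y)) (res_diff L M i)"
definition section_mat :: "'v \<Rightarrow> 'k mat" where
  "section_mat y = idx_mat (enum_set (res_basis L M 0 y)) [0..<fst M y] (aug_section y)"
definition homotopy_mat :: "nat \<Rightarrow> 'v \<Rightarrow> 'k mat" where
  "homotopy_mat i y = idx_mat (enum_set (res_basis L M (Suc i) y)) (enum_set (res_basis L M i y)) (if i = 0 then homotopy0 L M else homotopy L)"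

lemma arrow_carrier: "\<gamma> \<in> arrs L \<Longrightarrow> snd M \<gamma> \<in> carrier_mat (fst M (tgt L \<gamma>)) (fst M (src L \<gamma>))"
  using M by (auto simp: is_rep_def)

lemma aug_mat_hom: "is_hom L (res_rep L M 0) M aug_mat"
  unfolding is_hom_def
proof (intro conjI ballI)
  fix x assume "x \<in> verts L"
  show "aug_mat x \<in> carrier_mat (fst M x) (fst (res_rep L M 0) x)" unfolding aug_mat_def using enum_res_basis by simp
next
  fix \<gamma> assume ga: "\<gamma> \<in> arrs L"
  have "aug_mat (tgt L \<gamma>) * snd (res_rep L M 0) \<gamma> =
     idx_mat [0..<fst M (tgt L \<gamma>)] (enum_set (res_basis L M 0 (src L \<gamma>))) (\<lambda>j' a. \<Sum>b\<in>res_basis L M 0 (tgt L \<gamma>). res_aug M j' b * free_arrow_entry \<gamma> b a)"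
    unfolding aug_mat_def res_rep_arrow using idx_mat_mult[OF enum_res_basis(2)] enum_res_basis(1) by simp
  also have "\<dots> = idx_mat [0..<fst M (tgt L \<gamma>)] (enum_set (res_basis L M 0 (src L \<gamma>)))
        (\<lambda>j' a. \<Sum>j\<in>set [0..<fst M (src L \<gamma>)]. snd M \<gamma> $$ (j',j) * res_aug M j a)"
    by (rule idx_mat_cong) (use res_aug_natural_entry[OF ga] enum_res_basis(1) in auto)
  also have "\<dots> = idx_mat [0..<fst M (tgt L \<gamma>)] [0..<fst M (src L \<gamma>)] (\<lambda>i j. snd M \<gamma> $$ (i,j)) * aug_mat (src L \<gamma>)"
    unfolding aug_mat_def by (rule idx_mat_mult[symmetric]) simp
  also have "\<dots> = snd M \<gamma> * aug_mat (src L \<gamma>)" using mat_as_idx_mat[OF arrow_carrier[OF ga]] by simp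
  finally show "aug_mat (tgt L \<gamma>) * snd (res_rep L M 0) \<gamma> = snd M \<gamma> * aug_mat (src L \<gamma>)" .
qed

lemma diff_mat_hom: "is_hom L (res_rep L M (Suc i)) (res_rep L M i) (diff_mat (Suc i))"
  unfolding is_hom_def
proof (intro conjI ballI)
  fix x assume "x \<in> verts L"
  show "diff_mat (Suc i) x \<in> carrier_mat (fst (res_rep L M i) x) (fst (res_rep L M (Suc i)) x)" unfolding diff_mat_def using enum_res_basis by simp
next
  fix \<gamma> assume ga: "\<gamma> \<in> arrs L"
  have "diff_mat (Suc i) (tgt L \<gamma>) * snd (res_rep L M (Suc i)) \<gamma> =
     idx_mat (enum_set (res_basis L M i (tgt L \<gamma>))) (enum_set (res_basis L M (Suc i) (src L \<gamma>)))
       (\<lambda>c a. \<Sum>b\<in>res_basis L M (Suc i) (tgt L \<gamma>). res_diff L M (Suc i) c b * free_arrow_entry \<gamma> b a)"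
    unfolding diff_mat_def res_rep_arrow by (simp add: idx_mat_mult[OF enum_res_basis(2)] enum_res_basis(1))
  also have "\<dots> = idx_mat (enum_set (res_basis L M i (tgt L \<gamma>))) (enum_set (res_basis L M (Suc i) (src L \<gamma>)))
       (\<lambda>c a. \<Sum>b\<in>res_basis L M i (src L \<gamma>). free_arrow_entry \<gamma> c b * res_diff L M (Suc i) b a)"
    by (rule idx_mat_cong) (use res_diff_natural_entry[OF ga] enum_res_basis(1) in auto)
  also have "\<dots> = snd (res_rep L M i) \<gamma> * diff_mat (Suc i) (src L \<gamma>)"
    unfolding diff_mat_def res_rep_arrow by (simp add: idx_mat_mult[OF enum_res_basis(2)] enum_res_basis(1))
  finally show "diff_mat (Suc i) (tgt L \<gamma>) * snd (res_rep L M (Suc i)) \<gamma> = snd (res_rep L M i) \<gamma> * diff_mat (Suc i) (src L \<gamma>)" .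
qed

lemma aug_mat_section_mat: "x \<in> verts L \<Longrightarrow> aug_mat x * section_mat x = 1\<^sub>m (fst M x)"
proof -
  assume x: "x \<in> verts L"
  have "aug_mat x * section_mat x = idx_mat [0..<fst M x] [0..<fst M x] (\<lambda>j' j. \<Sum>b\<in>res_basis L M 0 x. res_aug M j' b * aug_section x b j)"
    unfolding aug_mat_def section_mat_def using idx_mat_mult[OF enum_res_basis(2)] enum_res_basis(1) by simp
  also have "\<dots> = idx_mat [0..<fst M x] [0..<fst M x] (\<lambda>j' j. if j' = j then 1 else 0)"
    by (rule idx_mat_cong) (use res_aug_section_entry[OF x] in auto)
  also have "\<dots> = 1\<^sub>m (fst M x)" using idx_mat_one[of "[0..<fst M x]"] by simp
  finally show ?thesis .
qed

lemma aug_mat_diff_mat: "x \<in> verts L \<Longrightarrow> aug_mat x * diff_mat 1 x = 0\<^sub>m (fst M x) (fst (res_rep L M 1) x)"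
proof -
  assume x: "x \<in> verts L"
  have "aug_mat x * diff_mat 1 x = idx_mat [0..<fst M x] (enum_set (res_basis L M 1 x)) (\<lambda>j' a. \<Sum>b\<in>res_basis L M 0 x. res_aug M j' b * res_diff L M 1 b a)"
    unfolding aug_mat_def diff_mat_def using idx_mat_mult[OF enum_res_basis(2)] enum_res_basis(1) by simp
  also have "\<dots> = idx_mat [0..<fst M x] (enum_set (res_basis L M 1 x)) (\<lambda>j' a. 0)"
    by (rule idx_mat_cong) (use res_aug_diff_entry[OF x] enum_res_basis(1) in auto)
  also have "\<dots> = 0\<^sub>m (fst M x) (fst (res_rep L M 1) x)" by (simp add: idx_mat_zero enum_res_basis(3))
  finally show ?thesis .
qed

lemma diff_mat_diff_mat: "x \<in> verts L \<Longrightarrow> diff_mat (Suc i) x * diff_mat (Suc (Suc i)) x = 0\<^sub>m (fst (res_rep L M i) x) (fst (res_rep L M (Suc (Suc i))) x)"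
proof -
  assume x: "x \<in> verts L"
  have "diff_mat (Suc i) x * diff_mat (Suc (Suc i)) x = idx_mat (enum_set (res_basis L M i x)) (enum_set (res_basis L M (Suc (Suc i)) x))
      (\<lambda>c a. \<Sum>b\<in>res_basis L M (Suc i) x. res_diff L M (Suc i) c b * res_diff L M (Suc (Suc i)) b a)"
    unfolding diff_mat_def using idx_mat_mult[OF enum_res_basis(2)] enum_res_basis(1) by simp
  also have "\<dots> = idx_mat (enum_set (res_basis L M i x)) (enum_set (res_basis L M (Suc (Suc i)) x)) (\<lambda>c a. 0)"
    by (rule idx_mat_cong) (use res_diff_diff_entry[OF x] enum_res_basis(1) in auto)
  also have "\<dots> = 0\<^sub>m (fst (res_rep L M i) x) (fst (res_rep L M (Suc (Suc i))) x)" by (simp add: idx_mat_zero enum_res_basis(3))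
  finally show ?thesis .
qed

lemma homotopy_mat_0: "x \<in> verts L \<Longrightarrow> diff_mat 1 x * homotopy_mat 0 x + section_mat x * aug_mat x = 1\<^sub>m (fst (res_rep L M 0) x)"
proof -
  assume x: "x \<in> verts L"
  have "diff_mat 1 x * homotopy_mat 0 x + section_mat x * aug_mat x = idx_mat (enum_set (res_basis L M 0 x)) (enum_set (res_basis L M 0 x))
     (\<lambda>c a. (\<Sum>b\<in>res_basis L M 1 x. res_diff L M 1 c b * homotopy0 L M b a) + (\<Sum>j'\<in>set [0..<fst M x]. aug_section x c j' * res_aug M j' a))"
    unfolding diff_mat_def homotopy_mat_def section_mat_def aug_mat_def by (simp add: idx_mat_mult[OF enum_res_basis(2)] idx_mat_mult[of "[0..<fst M x]"] enum_res_basis(1) idx_mat_add)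
  also have "\<dots> = idx_mat (enum_set (res_basis L M 0 x)) (enum_set (res_basis L M 0 x)) (\<lambda>c a. if c = a then 1 else 0)"
    by (rule idx_mat_cong) (use homotopy_entry_0[OF x] enum_res_basis(1) in auto)
  also have "\<dots> = 1\<^sub>m (fst (res_rep L M 0) x)" using idx_mat_one[OF enum_res_basis(2)] enum_res_basis(3) by simp
  finally show ?thesis .
qed

lemma homotopy_mat_1: "x \<in> verts L \<Longrightarrow> diff_mat 2 x * homotopy_mat 1 x + homotopy_mat 0 x * diff_mat 1 x = 1\<^sub>m (fst (res_rep L M 1) x)"
proof -
  assume x: "x \<in> verts L"
  have "diff_mat 2 x * homotopy_mat 1 x + homotopy_mat 0 x * diff_mat 1 x = idx_mat (enum_set (res_basis L M 1 x)) (enum_set (res_basis L M 1 x))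
     (\<lambda>c a. (\<Sum>b\<in>res_basis L M 2 x. res_diff L M 2 c b * homotopy L b a) + (\<Sum>b\<in>res_basis L M 0 x. homotopy0 L M c b * res_diff L M 1 b a))"
    unfolding diff_mat_def homotopy_mat_def by (simp add: idx_mat_mult[OF enum_res_basis(2)] enum_res_basis(1) idx_mat_add numeral_2_eq_2)
  also have "\<dots> = idx_mat (enum_set (res_basis L M 1 x)) (enum_set (res_basis L M 1 x)) (\<lambda>c a. if c = a then 1 else 0)"
    by (rule idx_mat_cong) (use homotopy_entry_1[OF x] enum_res_basis(1) in auto)
  also have "\<dots> = 1\<^sub>m (fst (res_rep L M 1) x)" using idx_mat_one[OF enum_res_basis(2)] enum_res_basis(3) by simp
  finally show ?thesis .
qed

lemma homotopy_mat_Suc_Suc: "x \<in> verts L \<Longrightarrow> diff_mat (Suc (Suc (Suc k))) x * homotopy_mat (Suc (Suc k)) x + homotopy_mat (Suc k) x * diff_mat (Suc (Suc k)) x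
   = 1\<^sub>m (fst (res_rep L M (Suc (Suc k))) x)"
proof -
  assume x: "x \<in> verts L"
  have "diff_mat (Suc (Suc (Suc k))) x * homotopy_mat (Suc (Suc k)) x + homotopy_mat (Suc k) x * diff_mat (Suc (Suc k)) x =
     idx_mat (enum_set (res_basis L M (Suc (Suc k)) x)) (enum_set (res_basis L M (Suc (Suc k)) x))
     (\<lambda>c a. (\<Sum>b\<in>res_basis L M (Suc (Suc (Suc k))) x. res_diff L M (Suc (Suc (Suc k))) c b * homotopy L b a) +
            (\<Sum>b\<in>res_basis L M (Suc k) x. homotopy L c b * res_diff L M (Suc (Suc k)) b a))"
    unfolding diff_mat_def homotopy_mat_def by (simp add: idx_mat_mult[OF enum_res_basis(2)] enum_res_basis(1) idx_mat_add)
  also have "\<dots> = idx_mat (enum_set (res_basis L M (Suc (Suc k)) x)) (enum_set (res_basis L M (Suc (Suc k)) x)) (\<lambda>c a. if c = a then 1 else 0)"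
    by (rule idx_mat_cong) (use homotopy_entry_Suc_Suc[OF x] enum_res_basis(1) in auto)
  also have "\<dots> = 1\<^sub>m (fst (res_rep L M (Suc (Suc k))) x)" using idx_mat_one[OF enum_res_basis(2)] enum_res_basis(3) by simp
  finally show ?thesis .
qed

lemma res_basis_empty:
  assumes bnd: "\<And>xs. Lantipath L xs \<Longrightarrow> length xs \<le> card (arrs L)"
  shows "res_basis L M (Suc (card (arrs L))) y = {}"
proof -
  have "antiwalks L (Suc (card (arrs L))) = {}"
  proof (rule equals0I)
    fix w assume w: "w \<in> antiwalks L (Suc (card (arrs L)))"
    obtain x ws where xw: "w = (x,ws)" by (cases w)
    have "length ws = Suc (card (arrs L))" "ws \<noteq> []" "Lantipath L ws" using w xw by (auto simp: antiwalks_def split: if_splits)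
    then show False using bnd[of ws] by simp
  qed
  then show ?thesis by (auto simp: res_basis_def free_basis_def res_gens_def)
qed

lemma pd_le_if_antipaths_bounded:
  assumes bnd: "\<And>xs. Lantipath L xs \<Longrightarrow> length xs \<le> card (arrs L)"
  shows "pd_le L M (Suc (card (arrs L)))"
proof (rule pd_le_of_contracting_homotopy[where P = "res_rep L M" and \<epsilon> = aug_mat and d = diff_mat and s = section_mat and h = homotopy_mat])
  let ?n = "Suc (card (arrs L))"
  show "1 \<le> ?n" by simp
  show "\<And>i. i \<le> ?n \<Longrightarrow> projective_rep L (res_rep L M i)" by (rule res_rep_projective)
  show "is_hom L (res_rep L M 0) M aug_mat" by (rule aug_mat_hom)
  show "\<And>i. 1 \<le> i \<Longrightarrow> i \<le> ?n \<Longrightarrow> is_hom L (res_rep L M i) (res_rep L M (i - 1)) (diff_mat i)"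
  proof -
    fix i :: nat assume "1 \<le> i"
    then obtain i' where "i = Suc i'" by (cases i) auto
    then show "is_hom L (res_rep L M i) (res_rep L M (i - 1)) (diff_mat i)" using diff_mat_hom by simp
  qed
  show "\<And>x. x \<in> verts L \<Longrightarrow> section_mat x \<in> carrier_mat (fst (res_rep L M 0) x) (fst M x)"
    unfolding section_mat_def using enum_res_basis by simp
  show "\<And>x i. x \<in> verts L \<Longrightarrow> i < ?n \<Longrightarrow> homotopy_mat i x \<in> carrier_mat (fst (res_rep L M (Suc i)) x) (fst (res_rep L M i) x)"
    unfolding homotopy_mat_def using enum_res_basis by simp
  show "\<And>x. x \<in> verts L \<Longrightarrow> aug_mat x * section_mat x = 1\<^sub>m (fst M x)" by (rule aug_mat_section_mat)
  show "\<And>x. x \<in> verts L \<Longrightarrow> aug_mat x * diff_mat 1 x = 0\<^sub>m (fst M x) (fst (res_rep L M 1) x)" by (rule aug_mat_diff_mat)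
  show "\<And>x i. x \<in> verts L \<Longrightarrow> 1 \<le> i \<Longrightarrow> i < ?n \<Longrightarrow>
      diff_mat i x * diff_mat (Suc i) x = 0\<^sub>m (fst (res_rep L M (i - 1)) x) (fst (res_rep L M (Suc i)) x)"
  proof -
    fix x and i :: nat assume x: "x \<in> verts L" and "1 \<le> i"
    then obtain i' where "i = Suc i'" by (cases i) auto
    then show "diff_mat i x * diff_mat (Suc i) x = 0\<^sub>m (fst (res_rep L M (i - 1)) x) (fst (res_rep L M (Suc i)) x)" using diff_mat_diff_mat[OF x] by simp
  qed
  show "\<And>x. x \<in> verts L \<Longrightarrow> diff_mat 1 x * homotopy_mat 0 x + section_mat x * aug_mat x = 1\<^sub>m (fst (res_rep L M 0) x)" by (rule homotopy_mat_0)
  show "\<And>x i. x \<in> verts L \<Longrightarrow> 1 \<le> i \<Longrightarrow> i < ?n \<Longrightarrow>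
      diff_mat (Suc i) x * homotopy_mat i x + homotopy_mat (i - 1) x * diff_mat i x = 1\<^sub>m (fst (res_rep L M i) x)"
  proof -
    fix x and i :: nat assume x: "x \<in> verts L" and i: "1 \<le> i"
    show "diff_mat (Suc i) x * homotopy_mat i x + homotopy_mat (i - 1) x * diff_mat i x = 1\<^sub>m (fst (res_rep L M i) x)"
    proof (cases "i = 1")
      case True then show ?thesis using homotopy_mat_1[OF x] by (simp add: numeral_2_eq_2)
    next
      case False
      then obtain k where "i = Suc (Suc k)" using i by (metis One_nat_def Suc_le_D le_SucE le_zero_eq not0_implies_Suc)
      then show ?thesis using homotopy_mat_Suc_Suc[OF x] by simp
    qed
  qed
  show "\<And>x. x \<in> verts L \<Longrightarrow> homotopy_mat (?n - 1) x * diff_mat ?n x = 1\<^sub>m (fst (res_rep L M ?n) x)"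
  proof -
    fix x assume x: "x \<in> verts L"
    have z: "fst (res_rep L M ?n) x = 0" using res_basis_empty[OF bnd] by simp
    have e: "enum_set (res_basis L M ?n x) = []" using enum_res_basis(3)[of ?n x] res_basis_empty[OF bnd] by simp
    have c1: "homotopy_mat (?n - 1) x \<in> carrier_mat 0 (card (res_basis L M (?n - 1) x))"
      unfolding homotopy_mat_def using e enum_res_basis(3) by simp
    have c2: "diff_mat ?n x \<in> carrier_mat (card (res_basis L M (?n - 1) x)) 0"
      unfolding diff_mat_def using e enum_res_basis(3) by simp
    have "homotopy_mat (?n - 1) x * diff_mat ?n x \<in> carrier_mat 0 0" using c1 c2 by simp
    then show "homotopy_mat (?n - 1) x * diff_mat ?n x = 1\<^sub>m (fst (res_rep L M ?n) x)" unfolding z by (auto intro!: eq_matI)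
  qed
qed

end

lemma finite_gldim_if_antipaths_bounded:
  fixes L :: "('v,'a,'b) bquiver_scheme"
  assumes g: "gentle L" and short: "\<And>xs. Lantipath L xs \<Longrightarrow> length xs \<le> card (arrs L)"
  shows "finite_gldim L TYPE('k::field)"
  unfolding finite_gldim_def
proof (intro exI allI impI)
  fix M :: "('v,'a,'k) qrep" assume "is_rep L M"
  then interpret gentle_rep L M using g by unfold_locales
  show "pd_le L M (Suc (card (arrs L)))" by (rule pd_le_if_antipaths_bounded[OF short])
qed

theorem lemma1p1:
  fixes L :: "('v,'a) bquiver"
  assumes "alg_closed TYPE('k::field)"
    and "gentle L"
    and "AG_norm L = 1"
  shows "finite_gldim L TYPE('k)"
proof -
  have "Fprime L = {}" by (rule AG_norm_one_Fprime_empty[OF assms(2,3)])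
  then have "\<And>xs. Lantipath L xs \<Longrightarrow> length xs \<le> card (arrs L)"
    by (rule Lantipath_length_le_if_Fprime_empty[OF assms(2)])
  then show ?thesis by (rule finite_gldim_if_antipaths_bounded[OF assms(2)])
qed

end
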